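(* Let $H$ be a $k$-linear semi-Hopf category and $A$ an $H$-Galois category extension of $B=A^{{\rm co}H}$, and for $x,y\in X$ let $\gamma_{xy}:H_{xy}\to A_{yx}\otimes_{B_x}A_{xy}$, $\gamma_{xy}(h)=({\rm can}^y_{xy})^{-1}(1_y\otimes h)=\sum_i l_i(h)\otimes_{B_x}r_i(h)$. Then for all $x,y,z\in X$, $h\in H_{xy}$, $h'\in H_{yz}$: (a) $\gamma_{xy}(h)\in(A_{yx}\otimes_{B_x}A_{xy})^{B_y}=\{u\mid bu=ub\ \forall b\in B_y\}$; (b) $\gamma_{xz}(hh')=\sum_{i,j}l_i(h')l_j(h)\otimes_{B_x}r_j(h)r_i(h')$ (the right-hand side being the image of $\gamma_{yz}(h')\otimes\gamma_{xy}(h)$ under the map $(a'\otimes_{B_y}b')\otimes(a\otimes_{B_x}b)\mapsto a'a\otimes_{B_x}bb'$, well defined by (a)); (c) $\gamma_{xy}(h_{(1)})\otimes h_{(2)}=\sum_i l_i(h)\otimes_{B_x}r_i(h)_{[0]}\otimes r_i(h)_{[1]}$; (d) $\sum_i l_i(h)r_i(h)=\varepsilon_{xy}(h)1_y$; (e) if moreover $H$ is a Hopf category with antipode $S$, then $\gamma_{xy}(h_{(2)})\otimes S_{xy}(h_{(1)})=\sum_i l_i(h)_{[0]}\otimes_{B_x}r_i(h)\otimes l_i(h)_{[1]}$.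
   Context: Let $k$ be a commutative ring; unadorned $\otimes$ is over $k$. A $k$-linear category $A$ with class of objects $X$ consists of $k$-modules $A_{xy}$, associative compositions $A_{xy}\otimes A_{yz}\to A_{xz}$, $a\otimes b\mapsto ab$, and units $1_x\in A_{xx}$. A $k$-linear semi-Hopf category $H$ (objects $X$) is a $k$-linear category in which each $H_{xy}$ is a $k$-coalgebra with $\Delta_{xy}(h)=h_{(1)}\otimes h_{(2)}$ and counit $\varepsilon_{xy}$, such that $\Delta_{xz}(hh')=h_{(1)}h'_{(1)}\otimes h_{(2)}h'_{(2)}$, $\Delta_{xx}(1_x)=1_x\otimes1_x$, $\varepsilon_{xz}(hh')=\varepsilon_{xy}(h)\varepsilon_{yz}(h')$, $\varepsilon_{xx}(1_x)=1$. It is a Hopf category if there are $k$-linear maps $S_{xy}:H_{xy}\to H_{yx}$ with $h_{(1)}S_{xy}(h_{(2)})=\varepsilon_{xy}(h)1_x$ and $S_{xy}(h_{(1)})h_{(2)}=\varepsilon_{xy}(h)1_y$. A right $H$-comodule category is a $k$-linear category $A$ with objects $X$ such that each $A_{xy}$ is a right $H_{xy}$-comodule, $\rho_{xy}(a)=a_{[0]}\otimes a_{[1]}$, with $\rho_{xz}(ab)=a_{[0]}b_{[0]}\otimes a_{[1]}b_{[1]}$ and $\rho_{xx}(1_x)=1_x\otimes1_x$. Its coinvariants are $B_x=\{a\in A_{xx}\mid\rho_{xx}(a)=a\otimes1_x\}$. The canonical maps are ${\rm can}^z_{xy}:A_{zx}\otimes_{B_x}A_{xy}\to A_{zy}\otimes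 H_{xy}$, $a\otimes_{B_x}a'\mapsto aa'_{[0]}\otimes a'_{[1]}$; $A$ is an $H$-Galois category extension of $B$ if all ${\rm can}^z_{xy}$ are bijective. *)

theory Defs
  imports Main
begin

record ('k, 'a) kmod =
  kcarrier :: "'a set"
  kadd :: "'a \<Rightarrow> 'a \<Rightarrow> 'a"
  kzero :: "'a"
  ksmult :: "'k \<Rightarrow> 'a \<Rightarrow> 'a"

definition kmodule :: "('k::comm_ring_1, 'a) kmod \<Rightarrow> bool" where
  "kmodule M \<longleftrightarrow>
     kzero M \<in> kcarrier M \<and>
     (\<forall>a\<in>kcarrier M. \<forall>b\<in>kcarrier M. kadd M a b \<in> kcarrier M) \<and>
     (\<forall>c. \<forall>a\<in>kcarrier M. ksmult M c a \<in> kcarrier M) \<and>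
     (\<forall>a\<in>kcarrier M. \<forall>b\<in>kcarrier M. \<forall>d\<in>kcarrier M.
        kadd M (kadd M a b) d = kadd M a (kadd M b d)) \<and>
     (\<forall>a\<in>kcarrier M. \<forall>b\<in>kcarrier M. kadd M a b = kadd M b a) \<and>
     (\<forall>a\<in>kcarrier M. kadd M (kzero M) a = a) \<and>
     (\<forall>a\<in>kcarrier M. \<exists>b\<in>kcarrier M. kadd M a b = kzero M) \<and>
     (\<forall>c d. \<forall>a\<in>kcarrier M. ksmult M (c + d) a = kadd M (ksmult M c a) (ksmult M d a)) \<and>
     (\<forall>c. \<forall>a\<in>kcarrier M. \<forall>b\<in>kcarrier M.
        ksmult M c (kadd M a b) = kadd M (ksmult M c a) (ksmult M c b)) \<and>
     (\<forall>c d. \<forall>a\<in>kcarrier M. ksmult M (c * d) a = ksmult M c (ksmult M d a)) \<and>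
     (\<forall>a\<in>kcarrier M. ksmult M 1 a = a)"

definition klin :: "('k::comm_ring_1, 'a) kmod \<Rightarrow> ('k, 'b) kmod \<Rightarrow> ('a \<Rightarrow> 'b) \<Rightarrow> bool" where
  "klin M N f \<longleftrightarrow>
     (\<forall>a\<in>kcarrier M. f a \<in> kcarrier N) \<and>
     (\<forall>a\<in>kcarrier M. \<forall>b\<in>kcarrier M. f (kadd M a b) = kadd N (f a) (f b)) \<and>
     (\<forall>c. \<forall>a\<in>kcarrier M. f (ksmult M c a) = ksmult N c (f a))"

definition klin_scalar :: "('k::comm_ring_1, 'a) kmod \<Rightarrow> ('a \<Rightarrow> 'k) \<Rightarrow> bool" where
  "klin_scalar M f \<longleftrightarrow>
     (\<forall>a\<in>kcarrier M. \<forall>b\<in>kcarrier M. f (kadd M a b) = f a + f b) \<and>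
     (\<forall>c. \<forall>a\<in>kcarrier M. f (ksmult M c a) = c * f a)"

definition kbilin :: "('k::comm_ring_1, 'a) kmod \<Rightarrow> ('k, 'b) kmod \<Rightarrow> ('k, 'c) kmod
    \<Rightarrow> ('a \<Rightarrow> 'b \<Rightarrow> 'c) \<Rightarrow> bool" where
  "kbilin M N P f \<longleftrightarrow>
     (\<forall>a\<in>kcarrier M. klin N P (f a)) \<and> (\<forall>b\<in>kcarrier N. klin M P (\<lambda>a. f a b))"

definition kmsum :: "('k, 'a) kmod \<Rightarrow> ('i \<Rightarrow> 'a) \<Rightarrow> 'i set \<Rightarrow> 'a" where
  "kmsum P g A = Finite_Set.fold (\<lambda>i acc. kadd P (g i) acc) (kzero P) A"

section \<open>Tensor products (balanced w.r.t. a set of relations), as quotients of free modules\<close>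

definition fsupp :: "('p \<Rightarrow> 'k::zero) \<Rightarrow> 'p set" where
  "fsupp f = {p. f p \<noteq> 0}"

definition free_el :: "('k::comm_ring_1, 'm) kmod \<Rightarrow> ('k, 'n) kmod \<Rightarrow> ('m \<times> 'n \<Rightarrow> 'k) set" where
  "free_el M N = {f. finite (fsupp f) \<and> fsupp f \<subseteq> kcarrier M \<times> kcarrier N}"

definition gen :: "'m \<Rightarrow> 'n \<Rightarrow> ('m \<times> 'n \<Rightarrow> 'k::comm_ring_1)" where
  "gen m n = (\<lambda>p. if p = (m, n) then 1 else 0)"

text \<open>The submodule of relations: k-bilinearity, plus the balancing relations
  [p] - [q] for (p,q) \<in> Bal.\<close>
inductive_set tensor_rel :: "('k::comm_ring_1, 'm) kmod \<Rightarrow> ('k, 'n) kmod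
    \<Rightarrow> (('m \<times> 'n) \<times> ('m \<times> 'n)) set \<Rightarrow> ('m \<times> 'n \<Rightarrow> 'k) set"
  for M N Bal where
  rzero: "(\<lambda>_. 0) \<in> tensor_rel M N Bal"
| radd: "f \<in> tensor_rel M N Bal \<Longrightarrow> g \<in> tensor_rel M N Bal
          \<Longrightarrow> (\<lambda>p. f p + g p) \<in> tensor_rel M N Bal"
| rsmult: "f \<in> tensor_rel M N Bal \<Longrightarrow> (\<lambda>p. c * f p) \<in> tensor_rel M N Bal"
| raddl: "m \<in> kcarrier M \<Longrightarrow> m' \<in> kcarrier M \<Longrightarrow> n \<in> kcarrier N \<Longrightarrow>
          (\<lambda>p. gen (kadd M m m') n p - gen m n p - gen m' n p) \<in> tensor_rel M N Bal"
| raddr: "m \<in> kcarrier M \<Longrightarrow> n \<in> kcarrier N \<Longrightarrow> n' \<in> kcarrier N \<Longrightarrow>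
          (\<lambda>p. gen m (kadd N n n') p - gen m n p - gen m n' p) \<in> tensor_rel M N Bal"
| rsmultl: "m \<in> kcarrier M \<Longrightarrow> n \<in> kcarrier N \<Longrightarrow>
          (\<lambda>p. gen (ksmult M c m) n p - c * gen m n p) \<in> tensor_rel M N Bal"
| rsmultr: "m \<in> kcarrier M \<Longrightarrow> n \<in> kcarrier N \<Longrightarrow>
          (\<lambda>p. gen m (ksmult N c n) p - c * gen m n p) \<in> tensor_rel M N Bal"
| rbal: "(p, q) \<in> Bal \<Longrightarrow> p \<in> kcarrier M \<times> kcarrier N \<Longrightarrow> q \<in> kcarrier M \<times> kcarrier N \<Longrightarrow>
          (\<lambda>r. gen (fst p) (snd p) r - gen (fst q) (snd q) r) \<in> tensor_rel M N Bal"

definition tclass :: "('k::comm_ring_1, 'm) kmod \<Rightarrow> ('k, 'n) kmod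
    \<Rightarrow> (('m \<times> 'n) \<times> ('m \<times> 'n)) set \<Rightarrow> ('m \<times> 'n \<Rightarrow> 'k) \<Rightarrow> ('m \<times> 'n \<Rightarrow> 'k) set" where
  "tclass M N Bal f = {g \<in> free_el M N. (\<lambda>p. g p - f p) \<in> tensor_rel M N Bal}"

definition tensor :: "('k::comm_ring_1, 'm) kmod \<Rightarrow> ('k, 'n) kmod
    \<Rightarrow> (('m \<times> 'n) \<times> ('m \<times> 'n)) set \<Rightarrow> ('k, ('m \<times> 'n \<Rightarrow> 'k) set) kmod" where
  "tensor M N Bal =
     \<lparr> kcarrier = tclass M N Bal ` free_el M N,
       kadd = (\<lambda>X Y. tclass M N Bal (\<lambda>p. (SOME f. f \<in> X) p + (SOME g. g \<in> Y) p)),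
       kzero = tclass M N Bal (\<lambda>_. 0),
       ksmult = (\<lambda>c X. tclass M N Bal (\<lambda>p. c * (SOME f. f \<in> X) p)) \<rparr>"

definition tmk :: "('k::comm_ring_1, 'm) kmod \<Rightarrow> ('k, 'n) kmod
    \<Rightarrow> (('m \<times> 'n) \<times> ('m \<times> 'n)) set \<Rightarrow> 'm \<Rightarrow> 'n \<Rightarrow> ('m \<times> 'n \<Rightarrow> 'k) set" where
  "tmk M N Bal m n = tclass M N Bal (gen m n)"

text \<open>The map induced on the tensor product by a (bilinear, balanced) map phi into P:
  sum c_i (m_i tensor n_i) maps to sum c_i phi m_i n_i, computed on a representative.\<close>
definition tlift :: "('k::comm_ring_1, 'p) kmod \<Rightarrow> ('m \<Rightarrow> 'n \<Rightarrow> 'p)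
    \<Rightarrow> ('m \<times> 'n \<Rightarrow> 'k) set \<Rightarrow> 'p" where
  "tlift P phi X = (let f = (SOME f. f \<in> X) in
      kmsum P (\<lambda>q. ksmult P (f q) (phi (fst q) (snd q))) (fsupp f))"

abbreviation kt :: "('k::comm_ring_1, 'm) kmod \<Rightarrow> ('k, 'n) kmod \<Rightarrow> ('k, ('m \<times> 'n \<Rightarrow> 'k) set) kmod" where
  "kt M N \<equiv> tensor M N {}"

abbreviation ktmk :: "('k::comm_ring_1, 'm) kmod \<Rightarrow> ('k, 'n) kmod \<Rightarrow> 'm \<Rightarrow> 'n \<Rightarrow> ('m \<times> 'n \<Rightarrow> 'k) set" where
  "ktmk M N m n \<equiv> tmk M N {} m n"

text \<open>Objects are the elements of the type 'x; cmp C x y z a b is the composite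
  ab of a \<in> A_xy, b \<in> A_yz; idm C x = 1_x.\<close>
record ('x, 'k, 'a) klcat =
  homs :: "'x \<Rightarrow> 'x \<Rightarrow> ('k, 'a) kmod"
  cmp :: "'x \<Rightarrow> 'x \<Rightarrow> 'x \<Rightarrow> 'a \<Rightarrow> 'a \<Rightarrow> 'a"
  idm :: "'x \<Rightarrow> 'a"

definition klincat :: "('x, 'k::comm_ring_1, 'a, 'z) klcat_scheme \<Rightarrow> bool" where
  "klincat C \<longleftrightarrow>
     (\<forall>x y. kmodule (homs C x y)) \<and>
     (\<forall>x y z. kbilin (homs C x y) (homs C y z) (homs C x z) (cmp C x y z)) \<and>
     (\<forall>x y z w a b c. a \<in> kcarrier (homs C x y) \<longrightarrow> b \<in> kcarrier (homs C y z) \<longrightarrow>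
        c \<in> kcarrier (homs C z w) \<longrightarrow>
        cmp C x z w (cmp C x y z a b) c = cmp C x y w a (cmp C y z w b c)) \<and>
     (\<forall>x. idm C x \<in> kcarrier (homs C x x)) \<and>
     (\<forall>x y a. a \<in> kcarrier (homs C x y) \<longrightarrow>
        cmp C x x y (idm C x) a = a \<and> cmp C x y y a (idm C y) = a)"

record ('x, 'k, 'h) shcat = "('x, 'k, 'h) klcat" +
  cop :: "'x \<Rightarrow> 'x \<Rightarrow> 'h \<Rightarrow> ('h \<times> 'h \<Rightarrow> 'k) set"
  cou :: "'x \<Rightarrow> 'x \<Rightarrow> 'h \<Rightarrow> 'k"

definition kcoalgebra :: "('k::comm_ring_1, 'h) kmod \<Rightarrow> ('h \<Rightarrow> ('h \<times> 'h \<Rightarrow> 'k) set)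
    \<Rightarrow> ('h \<Rightarrow> 'k) \<Rightarrow> bool" where
  "kcoalgebra M D e \<longleftrightarrow>
     klin M (kt M M) D \<and> klin_scalar M e \<and>
     (\<forall>h\<in>kcarrier M.
        tlift (kt (kt M M) M) (\<lambda>a b. ktmk (kt M M) M (D a) b) (D h) =
        tlift (kt (kt M M) M)
          (\<lambda>a b. tlift (kt (kt M M) M) (\<lambda>c d. ktmk (kt M M) M (ktmk M M a c) d) (D b)) (D h)) \<and>
     (\<forall>h\<in>kcarrier M. tlift M (\<lambda>a b. ksmult M (e a) b) (D h) = h) \<and>
     (\<forall>h\<in>kcarrier M. tlift M (\<lambda>a b. ksmult M (e b) a) (D h) = h)"

definition semi_hopf_cat :: "('x, 'k::comm_ring_1, 'h, 'z) shcat_scheme \<Rightarrow> bool" where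
  "semi_hopf_cat H \<longleftrightarrow>
     klincat H \<and>
     (\<forall>x y. kcoalgebra (homs H x y) (cop H x y) (cou H x y)) \<and>
     (\<forall>x y z h h'. h \<in> kcarrier (homs H x y) \<longrightarrow> h' \<in> kcarrier (homs H y z) \<longrightarrow>
        cop H x z (cmp H x y z h h') =
          tlift (kt (homs H x z) (homs H x z))
            (\<lambda>a b. tlift (kt (homs H x z) (homs H x z))
               (\<lambda>c d. ktmk (homs H x z) (homs H x z) (cmp H x y z a c) (cmp H x y z b d))
               (cop H y z h'))
            (cop H x y h)) \<and>
     (\<forall>x. cop H x x (idm H x) = ktmk (homs H x x) (homs H x x) (idm H x) (idm H x)) \<and>
     (\<forall>x y z h h'. h \<in> kcarrier (homs H x y) \<longrightarrow> h' \<in> kcarrier (homs H y z) \<longrightarrow>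
        cou H x z (cmp H x y z h h') = cou H x y h * cou H y z h') \<and>
     (\<forall>x. cou H x x (idm H x) = 1)"

definition hopf_antipode :: "('x, 'k::comm_ring_1, 'h, 'z) shcat_scheme
    \<Rightarrow> ('x \<Rightarrow> 'x \<Rightarrow> 'h \<Rightarrow> 'h) \<Rightarrow> bool" where
  "hopf_antipode H S \<longleftrightarrow>
     (\<forall>x y. klin (homs H x y) (homs H y x) (S x y)) \<and>
     (\<forall>x y h. h \<in> kcarrier (homs H x y) \<longrightarrow>
        tlift (homs H x x) (\<lambda>a b. cmp H x y x a (S x y b)) (cop H x y h) =
          ksmult (homs H x x) (cou H x y h) (idm H x) \<and>
        tlift (homs H y y) (\<lambda>a b. cmp H y x y (S x y a) b) (cop H x y h) =
          ksmult (homs H y y) (cou H x y h) (idm H y))"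

record ('x, 'k, 'a, 'h) comcat = "('x, 'k, 'a) klcat" +
  coact :: "'x \<Rightarrow> 'x \<Rightarrow> 'a \<Rightarrow> ('a \<times> 'h \<Rightarrow> 'k) set"

definition comodule_cat :: "('x, 'k::comm_ring_1, 'h, 'z) shcat_scheme
    \<Rightarrow> ('x, 'k, 'a, 'h, 'w) comcat_scheme \<Rightarrow> bool" where
  "comodule_cat H A \<longleftrightarrow>
     klincat A \<and>
     (\<forall>x y. klin (homs A x y) (kt (homs A x y) (homs H x y)) (coact A x y)) \<and>
     (\<forall>x y a. a \<in> kcarrier (homs A x y) \<longrightarrow>
        tlift (kt (kt (homs A x y) (homs H x y)) (homs H x y))
          (\<lambda>b g. ktmk (kt (homs A x y) (homs H x y)) (homs H x y) (coact A x y b) g)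
          (coact A x y a) =
        tlift (kt (kt (homs A x y) (homs H x y)) (homs H x y))
          (\<lambda>b g. tlift (kt (kt (homs A x y) (homs H x y)) (homs H x y))
             (\<lambda>g1 g2. ktmk (kt (homs A x y) (homs H x y)) (homs H x y)
                         (ktmk (homs A x y) (homs H x y) b g1) g2)
             (cop H x y g))
          (coact A x y a)) \<and>
     (\<forall>x y a. a \<in> kcarrier (homs A x y) \<longrightarrow>
        tlift (homs A x y) (\<lambda>b g. ksmult (homs A x y) (cou H x y g) b) (coact A x y a) = a) \<and>
     (\<forall>x y z a b. a \<in> kcarrier (homs A x y) \<longrightarrow> b \<in> kcarrier (homs A y z) \<longrightarrow>
        coact A x z (cmp A x y z a b) =
          tlift (kt (homs A x z) (homs H x z))
            (\<lambda>a0 a1. tlift (kt (homs A x z) (homs H x z))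
               (\<lambda>b0 b1. ktmk (homs A x z) (homs H x z) (cmp A x y z a0 b0) (cmp H x y z a1 b1))
               (coact A y z b))
            (coact A x y a)) \<and>
     (\<forall>x. coact A x x (idm A x) = ktmk (homs A x x) (homs H x x) (idm A x) (idm H x))"

definition coinv :: "('x, 'k::comm_ring_1, 'h, 'z) shcat_scheme
    \<Rightarrow> ('x, 'k, 'a, 'h, 'w) comcat_scheme \<Rightarrow> 'x \<Rightarrow> 'a set" where
  "coinv H A x = {a \<in> kcarrier (homs A x x).
      coact A x x a = ktmk (homs A x x) (homs H x x) a (idm H x)}"

text \<open>Balancing relations for A_zx \<otimes>_{B_x} A_xy.\<close>
definition bbal :: "('x, 'k::comm_ring_1, 'h, 'z) shcat_scheme
    \<Rightarrow> ('x, 'k, 'a, 'h, 'w) comcat_scheme \<Rightarrow> 'x \<Rightarrow> 'x \<Rightarrow> 'x \<Rightarrow> (('a \<times> 'a) \<times> ('a \<times> 'a)) set" where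
  "bbal H A z x y = {((cmp A z x x a b, c), (a, cmp A x x y b c)) | a b c.
      a \<in> kcarrier (homs A z x) \<and> b \<in> coinv H A x \<and> c \<in> kcarrier (homs A x y)}"

definition btens :: "('x, 'k::comm_ring_1, 'h, 'z) shcat_scheme
    \<Rightarrow> ('x, 'k, 'a, 'h, 'w) comcat_scheme \<Rightarrow> 'x \<Rightarrow> 'x \<Rightarrow> 'x \<Rightarrow> ('k, ('a \<times> 'a \<Rightarrow> 'k) set) kmod" where
  "btens H A z x y = tensor (homs A z x) (homs A x y) (bbal H A z x y)"

definition btmk :: "('x, 'k::comm_ring_1, 'h, 'z) shcat_scheme
    \<Rightarrow> ('x, 'k, 'a, 'h, 'w) comcat_scheme \<Rightarrow> 'x \<Rightarrow> 'x \<Rightarrow> 'x \<Rightarrow> 'a \<Rightarrow> 'a \<Rightarrow> ('a \<times> 'a \<Rightarrow> 'k) set" where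
  "btmk H A z x y a b = tmk (homs A z x) (homs A x y) (bbal H A z x y) a b"

text \<open>The canonical map can^z_xy : A_zx \<otimes>_{B_x} A_xy \<rightarrow> A_zy \<otimes> H_xy.\<close>
definition can :: "('x, 'k::comm_ring_1, 'h, 'z) shcat_scheme
    \<Rightarrow> ('x, 'k, 'a, 'h, 'w) comcat_scheme \<Rightarrow> 'x \<Rightarrow> 'x \<Rightarrow> 'x
    \<Rightarrow> ('a \<times> 'a \<Rightarrow> 'k) set \<Rightarrow> ('a \<times> 'h \<Rightarrow> 'k) set" where
  "can H A z x y = tlift (kt (homs A z y) (homs H x y))
     (\<lambda>a a'. tlift (kt (homs A z y) (homs H x y))
        (\<lambda>c g. ktmk (homs A z y) (homs H x y) (cmp A z x y a c) g) (coact A x y a'))"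

definition galois_ext :: "('x, 'k::comm_ring_1, 'h, 'z) shcat_scheme
    \<Rightarrow> ('x, 'k, 'a, 'h, 'w) comcat_scheme \<Rightarrow> bool" where
  "galois_ext H A \<longleftrightarrow> (\<forall>x y z. bij_betw (can H A z x y)
      (kcarrier (btens H A z x y)) (kcarrier (kt (homs A z y) (homs H x y))))"

definition gam :: "('x, 'k::comm_ring_1, 'h, 'z) shcat_scheme
    \<Rightarrow> ('x, 'k, 'a, 'h, 'w) comcat_scheme \<Rightarrow> 'x \<Rightarrow> 'x \<Rightarrow> 'h \<Rightarrow> ('a \<times> 'a \<Rightarrow> 'k) set" where
  "gam H A x y h = inv_into (kcarrier (btens H A y x y)) (can H A y x y)
      (ktmk (homs A y y) (homs H x y) (idm A y) h)"

end

theory Submission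
  imports Defs
begin

text \<open>Every identity is checked after applying the canonical map can, or can tensored with
  an identity, which is injective because A is Galois. Both sides are induced by balanced
  bilinear maps, so it suffices to compare them on elementary tensors l \<otimes> r, where
  can(l \<otimes> r) = l r_[0] \<otimes> r_[1] and can(\<gamma>(h)) = 1 \<otimes> h. Each claim then reduces to an
  axiom: (a) to coinvariance of B, (b) to multiplicativity of the coaction, (c) to its
  coassociativity, (d) to its counit law, and (e) to coassociativity of the comultiplication
  together with the antipode law h_(1) S(h_(2)) = \<epsilon>(h) 1.\<close>

section \<open>Modules and linear maps\<close>

lemma kmodule_zero_closed: "kmodule M \<Longrightarrow> kzero M \<in> kcarrier M"
  unfolding kmodule_def by (elim conjE) blast
lemma kmodule_add_closed: "kmodule M \<Longrightarrow> a \<in> kcarrier M \<Longrightarrow> b \<in> kcarrier M \<Longrightarrow> kadd M a b \<in> kcarrier M"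
  unfolding kmodule_def by (elim conjE) blast
lemma kmodule_smult_closed: "kmodule M \<Longrightarrow> a \<in> kcarrier M \<Longrightarrow> ksmult M c a \<in> kcarrier M"
  unfolding kmodule_def by (elim conjE) blast
lemma kmodule_add_assoc: "kmodule M \<Longrightarrow> a \<in> kcarrier M \<Longrightarrow> b \<in> kcarrier M \<Longrightarrow> d \<in> kcarrier M \<Longrightarrow>
    kadd M (kadd M a b) d = kadd M a (kadd M b d)"
  unfolding kmodule_def by (elim conjE) blast
lemma kmodule_add_commute: "kmodule M \<Longrightarrow> a \<in> kcarrier M \<Longrightarrow> b \<in> kcarrier M \<Longrightarrow> kadd M a b = kadd M b a"
  unfolding kmodule_def by (elim conjE) blast
lemma kmodule_add_zero_left: "kmodule M \<Longrightarrow> a \<in> kcarrier M \<Longrightarrow> kadd M (kzero M) a = a"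
  unfolding kmodule_def by (elim conjE) blast
lemma kmodule_add_zero_right: "kmodule M \<Longrightarrow> a \<in> kcarrier M \<Longrightarrow> kadd M a (kzero M) = a"
  using kmodule_add_zero_left kmodule_add_commute kmodule_zero_closed by metis
lemma kmodule_neg_exists: "kmodule M \<Longrightarrow> a \<in> kcarrier M \<Longrightarrow> \<exists>b\<in>kcarrier M. kadd M a b = kzero M"
  unfolding kmodule_def by (elim conjE) blast
lemma kmodule_add_smult_distrib: "kmodule M \<Longrightarrow> a \<in> kcarrier M \<Longrightarrow> ksmult M (c + d) a = kadd M (ksmult M c a) (ksmult M d a)"
  unfolding kmodule_def by (elim conjE) blast
lemma kmodule_smult_add_distrib: "kmodule M \<Longrightarrow> a \<in> kcarrier M \<Longrightarrow> b \<in> kcarrier M \<Longrightarrow>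
    ksmult M c (kadd M a b) = kadd M (ksmult M c a) (ksmult M c b)"
  unfolding kmodule_def by (elim conjE) blast
lemma kmodule_smult_smult: "kmodule M \<Longrightarrow> a \<in> kcarrier M \<Longrightarrow> ksmult M (c * d) a = ksmult M c (ksmult M d a)"
  unfolding kmodule_def by (elim conjE) blast
lemma kmodule_smult_one: "kmodule M \<Longrightarrow> a \<in> kcarrier M \<Longrightarrow> ksmult M 1 a = a"
  unfolding kmodule_def by (elim conjE) auto

lemma kmodule_add_left_cancel:
  assumes M: "kmodule M" and C: "a \<in> kcarrier M" "b \<in> kcarrier M" "c \<in> kcarrier M"
    and e: "kadd M a b = kadd M a c"
  shows "b = c"
proof -
  obtain n where n: "n \<in> kcarrier M" "kadd M a n = kzero M" using kmodule_neg_exists[OF M C(1)] by blast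
  have "b = kadd M (kadd M n a) b" using n C M kmodule_add_commute kmodule_add_zero_left by metis
  also have "\<dots> = kadd M n (kadd M a b)" using kmodule_add_assoc[OF M] n C by metis
  also have "\<dots> = kadd M n (kadd M a c)" using e by simp
  also have "\<dots> = kadd M (kadd M n a) c" using kmodule_add_assoc[OF M] n C by metis
  also have "\<dots> = c" using n C M kmodule_add_commute kmodule_add_zero_left by metis
  finally show ?thesis .
qed

lemma kmodule_add_idem_eq_zero:
  assumes M: "kmodule M" and C: "a \<in> kcarrier M" and e: "kadd M a a = a"
  shows "a = kzero M"
  using kmodule_add_left_cancel[OF M C C kmodule_zero_closed[OF M]] e kmodule_add_zero_right[OF M C] by simp

lemma kmodule_smult_zero_left: assumes M: "kmodule M" and C: "a \<in> kcarrier M" shows "ksmult M 0 a = kzero M"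
  using kmodule_add_idem_eq_zero[OF M kmodule_smult_closed[OF M C]] kmodule_add_smult_distrib[OF M C, of 0 0] by simp

lemma kmodule_smult_zero_right: assumes M: "kmodule M" shows "ksmult M c (kzero M) = kzero M"
  using kmodule_add_idem_eq_zero[OF M kmodule_smult_closed[OF M kmodule_zero_closed[OF M]]] kmodule_smult_add_distrib[OF M kmodule_zero_closed[OF M] kmodule_zero_closed[OF M], of c]
    kmodule_add_zero_left[OF M kmodule_zero_closed[OF M]] by simp

lemma kmodule_add_minus_one_smult: assumes M: "kmodule M" and C: "a \<in> kcarrier M"
  shows "kadd M a (ksmult M (-1) a) = kzero M"
proof -
  have "kadd M a (ksmult M (-1) a) = kadd M (ksmult M 1 a) (ksmult M (-1) a)" using kmodule_smult_one[OF M C] by simp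
  also have "\<dots> = ksmult M (1 + -1) a" using kmodule_add_smult_distrib[OF M C, of 1 "-1"] by simp
  finally show ?thesis using kmodule_smult_zero_left[OF M C] by simp
qed

lemma kmodule_add_minus_summands:
  assumes P: "kmodule P" and C: "a \<in> kcarrier P" "b \<in> kcarrier P"
  shows "kadd P (kadd P (kadd P a b) (ksmult P (-1) a)) (ksmult P (-1) b) = kzero P"
proof -
  have na: "ksmult P (-1) a \<in> kcarrier P" and nb: "ksmult P (-1) b \<in> kcarrier P" using C kmodule_smult_closed[OF P] by auto
  have "kadd P (kadd P (kadd P a b) (ksmult P (-1) a)) (ksmult P (-1) b)
      = kadd P (kadd P a (ksmult P (-1) a)) (kadd P b (ksmult P (-1) b))"
    by (metis P C na nb kmodule_add_closed kmodule_add_assoc kmodule_add_commute)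
  thus ?thesis using kmodule_add_minus_one_smult[OF P C(1)] kmodule_add_minus_one_smult[OF P C(2)] kmodule_add_zero_left[OF P kmodule_zero_closed[OF P]] by simp
qed

lemma klin_closed: "klin M N f \<Longrightarrow> a \<in> kcarrier M \<Longrightarrow> f a \<in> kcarrier N"
  unfolding klin_def by blast
lemma klin_add: "klin M N f \<Longrightarrow> a \<in> kcarrier M \<Longrightarrow> b \<in> kcarrier M \<Longrightarrow> f (kadd M a b) = kadd N (f a) (f b)"
  unfolding klin_def by blast
lemma klin_smult: "klin M N f \<Longrightarrow> a \<in> kcarrier M \<Longrightarrow> f (ksmult M c a) = ksmult N c (f a)"
  unfolding klin_def by blast
lemma klinI:
  assumes "\<And>a. a \<in> kcarrier M \<Longrightarrow> f a \<in> kcarrier N"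
    "\<And>a b. a \<in> kcarrier M \<Longrightarrow> b \<in> kcarrier M \<Longrightarrow> f (kadd M a b) = kadd N (f a) (f b)"
    "\<And>c a. a \<in> kcarrier M \<Longrightarrow> f (ksmult M c a) = ksmult N c (f a)"
  shows "klin M N f"
  unfolding klin_def using assms by blast

lemma klin_zero:
  assumes M: "kmodule M" and N: "kmodule N" and f: "klin M N f"
  shows "f (kzero M) = kzero N"
proof -
  have "f (kzero M) = f (ksmult M 0 (kzero M))" using kmodule_smult_zero_left[OF M kmodule_zero_closed[OF M]] by simp
  also have "\<dots> = ksmult N 0 (f (kzero M))" using klin_smult[OF f kmodule_zero_closed[OF M]] .
  also have "\<dots> = kzero N" using kmodule_smult_zero_left[OF N klin_closed[OF f kmodule_zero_closed[OF M]]] .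
  finally show ?thesis .
qed

lemma klin_comp: "klin M N f \<Longrightarrow> klin N P g \<Longrightarrow> klin M P (\<lambda>a. g (f a))"
  unfolding klin_def by simp

lemma klin_smult_const: "kmodule M \<Longrightarrow> klin M M (ksmult M c)"
  by (rule klinI) (auto simp: kmodule_smult_closed kmodule_smult_add_distrib, metis kmodule_smult_smult mult.commute)

lemma klin_smult_arg: "kmodule P \<Longrightarrow> klin U P F \<Longrightarrow> klin U P (\<lambda>t. ksmult P c (F t))"
  by (rule klin_comp[OF _ klin_smult_const])

lemma kbilinI:
  assumes "\<And>m. m \<in> kcarrier M \<Longrightarrow> klin N P (\<lambda>n. phi m n)"
    and "\<And>n. n \<in> kcarrier N \<Longrightarrow> klin M P (\<lambda>m. phi m n)"
  shows "kbilin M N P phi"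
  unfolding kbilin_def using assms by simp

lemma kbilin_klin_left: "kbilin M N P phi \<Longrightarrow> n \<in> kcarrier N \<Longrightarrow> klin M P (\<lambda>m. phi m n)"
  unfolding kbilin_def by simp

lemma kbilin_klin_right: "kbilin M N P phi \<Longrightarrow> m \<in> kcarrier M \<Longrightarrow> klin N P (\<lambda>n. phi m n)"
  unfolding kbilin_def by simp

lemma kbilin_closed: "kbilin M N P phi \<Longrightarrow> m \<in> kcarrier M \<Longrightarrow> n \<in> kcarrier N \<Longrightarrow> phi m n \<in> kcarrier P"
  unfolding kbilin_def klin_def by blast

lemma klin_id: "klin M M (\<lambda>t. t)"
  unfolding klin_def by simp

lemma klin_kbilin_left: "kbilin M N P phi \<Longrightarrow> klin U M F \<Longrightarrow> n \<in> kcarrier N \<Longrightarrow> klin U P (\<lambda>t. phi (F t) n)"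
  using klin_comp kbilin_klin_left by fast

lemma klin_kbilin_right: "kbilin M N P phi \<Longrightarrow> klin U N F \<Longrightarrow> m \<in> kcarrier M \<Longrightarrow> klin U P (\<lambda>t. phi m (F t))"
  using klin_comp kbilin_klin_right by fast

lemma kbilin_comp_klin: "kbilin M N P phi \<Longrightarrow> klin P Q g \<Longrightarrow> kbilin M N Q (\<lambda>m n. g (phi m n))"
  by (rule kbilinI) (use klin_comp kbilin_klin_left kbilin_klin_right in fast)+

definition ktril :: "('k::comm_ring_1, 'a) kmod \<Rightarrow> ('k, 'b) kmod \<Rightarrow> ('k, 'c) kmod \<Rightarrow> ('k, 'p) kmod \<Rightarrow> ('a \<Rightarrow> 'b \<Rightarrow> 'c \<Rightarrow> 'p) \<Rightarrow> bool" where
  "ktril M1 M2 M3 P F \<longleftrightarrow> (\<forall>b\<in>kcarrier M2. \<forall>c\<in>kcarrier M3. klin M1 P (\<lambda>a. F a b c)) \<and>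
     (\<forall>a\<in>kcarrier M1. \<forall>c\<in>kcarrier M3. klin M2 P (\<lambda>b. F a b c)) \<and>
     (\<forall>a\<in>kcarrier M1. \<forall>b\<in>kcarrier M2. klin M3 P (\<lambda>c. F a b c))"

lemma ktrilI:
  assumes "\<And>b c. b \<in> kcarrier M2 \<Longrightarrow> c \<in> kcarrier M3 \<Longrightarrow> klin M1 P (\<lambda>a. F a b c)"
    "\<And>a c. a \<in> kcarrier M1 \<Longrightarrow> c \<in> kcarrier M3 \<Longrightarrow> klin M2 P (\<lambda>b. F a b c)"
    "\<And>a b. a \<in> kcarrier M1 \<Longrightarrow> b \<in> kcarrier M2 \<Longrightarrow> klin M3 P (\<lambda>c. F a b c)"
  shows "ktril M1 M2 M3 P F"
  unfolding ktril_def using assms by blast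

lemma ktril_kbilin_12: "ktril M1 M2 M3 P F \<Longrightarrow> c \<in> kcarrier M3 \<Longrightarrow> kbilin M1 M2 P (\<lambda>a b. F a b c)"
  unfolding ktril_def by (intro kbilinI) auto

lemma ktril_klin_3: "ktril M1 M2 M3 P F \<Longrightarrow> a \<in> kcarrier M1 \<Longrightarrow> b \<in> kcarrier M2 \<Longrightarrow> klin M3 P (F a b)"
  unfolding ktril_def by auto

section \<open>Finite sums\<close>

lemma kmsum_empty[simp]: "kmsum P g {} = kzero P"
  unfolding kmsum_def by simp

lemma kmsum_eq_fold_guarded:
  assumes P: "kmodule P" and fin: "finite A" and g: "\<And>i. i \<in> A \<Longrightarrow> g i \<in> kcarrier P"
  shows "kmsum P g A = Finite_Set.fold (\<lambda>i acc. kadd P (g i) (if acc \<in> kcarrier P then acc else kzero P)) (kzero P) A"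
  unfolding kmsum_def
  by (rule fold_closed_eq[where B="kcarrier P"]) (auto simp: g kmodule_add_closed[OF P] kmodule_zero_closed[OF P])

lemma kmsum_comp_fun_commute_on:
  assumes P: "kmodule P"
  shows "comp_fun_commute_on {i. g i \<in> kcarrier P} (\<lambda>i acc. kadd P (g i) (if acc \<in> kcarrier P then acc else kzero P))"
proof
  fix i j assume i: "i \<in> {i. g i \<in> kcarrier P}" and j: "j \<in> {i. g i \<in> kcarrier P}"
  show "(\<lambda>acc. kadd P (g j) (if acc \<in> kcarrier P then acc else kzero P)) \<circ>
        (\<lambda>acc. kadd P (g i) (if acc \<in> kcarrier P then acc else kzero P)) =
        (\<lambda>acc. kadd P (g i) (if acc \<in> kcarrier P then acc else kzero P)) \<circ>
        (\<lambda>acc. kadd P (g j) (if acc \<in> kcarrier P then acc else kzero P))"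
  proof
    fix acc
    define a where "a = (if acc \<in> kcarrier P then acc else kzero P)"
    have a: "a \<in> kcarrier P" unfolding a_def using kmodule_zero_closed[OF P] by auto
    have gi: "g i \<in> kcarrier P" and gj: "g j \<in> kcarrier P" using i j by auto
    have "kadd P (g j) (kadd P (g i) a) = kadd P (g i) (kadd P (g j) a)"
      by (metis P a gi gj kmodule_add_assoc kmodule_add_commute)
    thus "((\<lambda>acc. kadd P (g j) (if acc \<in> kcarrier P then acc else kzero P)) \<circ>
        (\<lambda>acc. kadd P (g i) (if acc \<in> kcarrier P then acc else kzero P))) acc =
        ((\<lambda>acc. kadd P (g i) (if acc \<in> kcarrier P then acc else kzero P)) \<circ>
        (\<lambda>acc. kadd P (g j) (if acc \<in> kcarrier P then acc else kzero P))) acc"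
      using kmodule_add_closed[OF P gi a] kmodule_add_closed[OF P gj a] by (simp add: a_def[symmetric])
  qed
qed

lemma kmsum_insert_guarded:
  assumes P: "kmodule P" and fin: "finite A" and a: "a \<notin> A"
    and g: "\<And>i. i \<in> insert a A \<Longrightarrow> g i \<in> kcarrier P"
  shows "kmsum P g (insert a A) = kadd P (g a) (if kmsum P g A \<in> kcarrier P then kmsum P g A else kzero P)"
proof -
  let ?F = "\<lambda>i acc. kadd P (g i) (if acc \<in> kcarrier P then acc else kzero P)"
  interpret cf: comp_fun_commute_on "{i. g i \<in> kcarrier P}" ?F by (rule kmsum_comp_fun_commute_on[OF P])
  have s: "insert a A \<subseteq> {i. g i \<in> kcarrier P}" using g by auto
  have "kmsum P g (insert a A) = Finite_Set.fold ?F (kzero P) (insert a A)"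
    by (rule kmsum_eq_fold_guarded[OF P]) (use fin g in auto)
  also have "\<dots> = ?F a (Finite_Set.fold ?F (kzero P) A)" by (rule cf.fold_insert[OF s fin a])
  finally have e1: "kmsum P g (insert a A) = ?F a (Finite_Set.fold ?F (kzero P) A)" .
  have e2: "kmsum P g A = Finite_Set.fold ?F (kzero P) A"
    by (rule kmsum_eq_fold_guarded[OF P fin]) (use g in auto)
  show ?thesis unfolding e1 e2 ..
qed

lemma kmsum_closed:
  assumes P: "kmodule P" and g: "\<And>i. i \<in> A \<Longrightarrow> g i \<in> kcarrier P"
  shows "kmsum P g A \<in> kcarrier P"
proof (cases "finite A \<and> A \<noteq> {}")
  case True
  then obtain a where "a \<in> A" by blast
  define A' where "A' = A - {a}"
  have A: "A = insert a A'" "a \<notin> A'" "finite A'" using True \<open>a \<in> A\<close> unfolding A'_def by auto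
  have gi: "\<And>i. i \<in> insert a A' \<Longrightarrow> g i \<in> kcarrier P" using g A(1) by auto
  have "kmsum P g (insert a A') \<in> kcarrier P"
    using kmsum_insert_guarded[OF P A(3) A(2) gi] gi[of a] kmodule_zero_closed[OF P] kmodule_add_closed[OF P] by simp
  thus ?thesis using A(1) by simp
next
  case False
  thus ?thesis by (auto simp: kmsum_def kmodule_zero_closed[OF P])
qed

lemma kmsum_insert:
  assumes P: "kmodule P" and fin: "finite A" and a: "a \<notin> A"
    and g: "\<And>i. i \<in> insert a A \<Longrightarrow> g i \<in> kcarrier P"
  shows "kmsum P g (insert a A) = kadd P (g a) (kmsum P g A)"
  using kmsum_insert_guarded[OF P fin a g] kmsum_closed[OF P, of A g] g by simp

lemma kmsum_cong:
  assumes "A = B" "\<And>i. i \<in> B \<Longrightarrow> g i = h i" shows "kmsum P g A = kmsum P h B"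
  unfolding kmsum_def assms(1) by (rule fold_closed_eq[where B=UNIV]) (auto simp: assms(2))

lemma kmsum_add:
  assumes P: "kmodule P" and fin: "finite A"
    and g: "\<And>i. i \<in> A \<Longrightarrow> g i \<in> kcarrier P" and h: "\<And>i. i \<in> A \<Longrightarrow> h i \<in> kcarrier P"
  shows "kmsum P (\<lambda>i. kadd P (g i) (h i)) A = kadd P (kmsum P g A) (kmsum P h A)"
  using fin g h
proof (induction A rule: finite_induct)
  case empty
  then show ?case using kmodule_add_zero_left[OF P kmodule_zero_closed[OF P]] by simp
next
  case (insert a A)
  have g': "\<And>i. i \<in> A \<Longrightarrow> g i \<in> kcarrier P" and h': "\<And>i. i \<in> A \<Longrightarrow> h i \<in> kcarrier P"
    using insert by auto
  have ga: "g a \<in> kcarrier P" and ha: "h a \<in> kcarrier P" using insert by auto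
  have sg: "kmsum P g A \<in> kcarrier P" by (rule kmsum_closed[OF P g'])
  have sh: "kmsum P h A \<in> kcarrier P" by (rule kmsum_closed[OF P h'])
  have "kmsum P (\<lambda>i. kadd P (g i) (h i)) (insert a A) =
        kadd P (kadd P (g a) (h a)) (kmsum P (\<lambda>i. kadd P (g i) (h i)) A)"
    by (rule kmsum_insert[OF P insert(1,2)]) (use insert kmodule_add_closed[OF P] in auto)
  also have "\<dots> = kadd P (kadd P (g a) (h a)) (kadd P (kmsum P g A) (kmsum P h A))"
    using insert.IH[OF g' h'] by simp
  also have "\<dots> = kadd P (kadd P (g a) (kmsum P g A)) (kadd P (h a) (kmsum P h A))"
    by (metis P ga ha sg sh kmodule_add_closed kmodule_add_assoc kmodule_add_commute)
  also have "\<dots> = kadd P (kmsum P g (insert a A)) (kmsum P h (insert a A))"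
    using kmsum_insert[OF P insert(1,2), of g] kmsum_insert[OF P insert(1,2), of h] insert by simp
  finally show ?case .
qed

lemma kmsum_klin:
  assumes P: "kmodule P" and Q: "kmodule Q" and F: "klin P Q F" and fin: "finite A"
    and g: "\<And>i. i \<in> A \<Longrightarrow> g i \<in> kcarrier P"
  shows "F (kmsum P g A) = kmsum Q (\<lambda>i. F (g i)) A"
  using fin g
proof (induction A rule: finite_induct)
  case empty
  then show ?case using klin_zero[OF P Q F] by simp
next
  case (insert a A)
  have g': "\<And>i. i \<in> A \<Longrightarrow> g i \<in> kcarrier P" using insert by auto
  have "F (kmsum P g (insert a A)) = F (kadd P (g a) (kmsum P g A))"
    using kmsum_insert[OF P insert(1,2), of g] insert by simp
  also have "\<dots> = kadd Q (F (g a)) (F (kmsum P g A))"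
    by (rule klin_add[OF F]) (use insert kmsum_closed[OF P g'] in auto)
  also have "\<dots> = kmsum Q (\<lambda>i. F (g i)) (insert a A)"
    using insert.IH[OF g'] kmsum_insert[OF Q insert(1,2), of "\<lambda>i. F (g i)"] insert klin_closed[OF F] by simp
  finally show ?case .
qed

lemma kmsum_smult:
  assumes P: "kmodule P" and fin: "finite A" and g: "\<And>i. i \<in> A \<Longrightarrow> g i \<in> kcarrier P"
  shows "ksmult P c (kmsum P g A) = kmsum P (\<lambda>i. ksmult P c (g i)) A"
  using kmsum_klin[OF P P klin_smult_const[OF P] fin g] .

lemma kmsum_klin_param:
  assumes Q: "kmodule Q" and P: "kmodule P" and fin: "finite A"
    and F: "\<And>i. i \<in> A \<Longrightarrow> klin Q P (F i)"
  shows "klin Q P (\<lambda>t. kmsum P (\<lambda>i. F i t) A)"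
proof (rule klinI)
  have Fc: "F i t \<in> kcarrier P" if "i \<in> A" "t \<in> kcarrier Q" for i t
    by (rule klin_closed[OF F[OF that(1)] that(2)])
  fix t assume "t \<in> kcarrier Q"
  thus "kmsum P (\<lambda>i. F i t) A \<in> kcarrier P" by (intro kmsum_closed[OF P] Fc)
next
  have Fc: "F i t \<in> kcarrier P" if "i \<in> A" "t \<in> kcarrier Q" for i t
    by (rule klin_closed[OF F[OF that(1)] that(2)])
  fix t t' assume t: "t \<in> kcarrier Q" and t': "t' \<in> kcarrier Q"
  have "kmsum P (\<lambda>i. F i (kadd Q t t')) A = kmsum P (\<lambda>i. kadd P (F i t) (F i t')) A"
    by (rule kmsum_cong) (simp_all add: klin_add[OF F] t t')
  also have "\<dots> = kadd P (kmsum P (\<lambda>i. F i t) A) (kmsum P (\<lambda>i. F i t') A)"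
    by (rule kmsum_add[OF P fin]) (simp_all add: Fc t t')
  finally show "kmsum P (\<lambda>i. F i (kadd Q t t')) A = kadd P (kmsum P (\<lambda>i. F i t) A) (kmsum P (\<lambda>i. F i t') A)" .
next
  fix c t assume t: "t \<in> kcarrier Q"
  have "kmsum P (\<lambda>i. F i (ksmult Q c t)) A = kmsum P (\<lambda>i. ksmult P c (F i t)) A"
    by (rule kmsum_cong) (simp_all add: klin_smult[OF F] t)
  also have "\<dots> = ksmult P c (kmsum P (\<lambda>i. F i t) A)"
    by (rule kmsum_smult[OF P fin, symmetric]) (simp add: klin_closed[OF F] t)
  finally show "kmsum P (\<lambda>i. F i (ksmult Q c t)) A = ksmult P c (kmsum P (\<lambda>i. F i t) A)" .
qed

lemma kmsum_union_zeros:
  assumes P: "kmodule P" and fin: "finite D" "finite A" and dis: "D \<inter> A = {}"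
    and g: "\<And>i. i \<in> A \<Longrightarrow> g i \<in> kcarrier P" and z: "\<And>i. i \<in> D \<Longrightarrow> g i = kzero P"
  shows "kmsum P g (A \<union> D) = kmsum P g A"
  using fin(1) dis z
proof (induction D rule: finite_induct)
  case empty
  then show ?case by simp
next
  case (insert d D)
  have gg: "\<And>i. i \<in> insert d (A \<union> D) \<Longrightarrow> g i \<in> kcarrier P" using g insert kmodule_zero_closed[OF P] by auto
  have "kmsum P g (A \<union> insert d D) = kmsum P g (insert d (A \<union> D))" by simp
  also have "\<dots> = kadd P (g d) (kmsum P g (A \<union> D))"
    by (rule kmsum_insert[OF P]) (use insert fin gg in auto)
  also have "\<dots> = kmsum P g (A \<union> D)"
    using insert kmodule_add_zero_left[OF P] kmsum_closed[OF P, of "A \<union> D" g] gg by simp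
  finally show ?case using insert by simp
qed

lemma kmsum_mono_neutral:
  assumes P: "kmodule P" and fin: "finite B" and sub: "A \<subseteq> B"
    and g: "\<And>i. i \<in> A \<Longrightarrow> g i \<in> kcarrier P" and z: "\<And>i. i \<in> B - A \<Longrightarrow> g i = kzero P"
  shows "kmsum P g B = kmsum P g A"
proof -
  have "B = A \<union> (B - A)" using sub by auto
  moreover have "kmsum P g (A \<union> (B - A)) = kmsum P g A"
    by (rule kmsum_union_zeros[OF P _ _ _ g z]) (use fin sub finite_subset in auto)
  ultimately show ?thesis by simp
qed

section \<open>Tensor products\<close>

lemma fsupp_add: fixes f g :: "'p \<Rightarrow> 'k::comm_ring_1" shows "fsupp (\<lambda>p. f p + g p) \<subseteq> fsupp f \<union> fsupp g"
  unfolding fsupp_def by auto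

lemma fsupp_smult: fixes f :: "'p \<Rightarrow> 'k::comm_ring_1" shows "fsupp (\<lambda>p. c * f p) \<subseteq> fsupp f"
  unfolding fsupp_def by auto

lemma fsupp_diff: fixes f g :: "'p \<Rightarrow> 'k::comm_ring_1" shows "fsupp (\<lambda>p. f p - g p) \<subseteq> fsupp f \<union> fsupp g"
  unfolding fsupp_def by auto

lemma fsupp_gen: "fsupp (gen m n) \<subseteq> {(m, n)}"
  unfolding fsupp_def gen_def by auto

definition free_lift :: "('k::comm_ring_1, 'p) kmod \<Rightarrow> ('m \<Rightarrow> 'n \<Rightarrow> 'p) \<Rightarrow> ('m \<times> 'n \<Rightarrow> 'k) \<Rightarrow> 'p" where
  "free_lift P phi f = kmsum P (\<lambda>q. ksmult P (f q) (phi (fst q) (snd q))) (fsupp f)"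

definition balanced :: "(('m \<times> 'n) \<times> ('m \<times> 'n)) set \<Rightarrow> ('m \<Rightarrow> 'n \<Rightarrow> 'p) \<Rightarrow> bool" where
  "balanced Bal phi \<longleftrightarrow> (\<forall>(p, q) \<in> Bal. phi (fst p) (snd p) = phi (fst q) (snd q))"

lemma balanced_empty[simp]: "balanced {} phi"
  unfolding balanced_def by simp

lemma balanced_comp: "balanced Bal phi \<Longrightarrow> balanced Bal (\<lambda>m n. g (phi m n))"
  unfolding balanced_def by auto

lemma tlift_eq_free_lift: "tlift P phi X = free_lift P phi (SOME f. f \<in> X)"
  unfolding tlift_def free_lift_def Let_def ..

locale balanced_tensor =
  fixes M :: "('k::comm_ring_1, 'm) kmod" and N :: "('k, 'n) kmod"
    and Bal :: "(('m \<times> 'n) \<times> ('m \<times> 'n)) set"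
  assumes M: "kmodule M" and N: "kmodule N"
    and Bal: "Bal \<subseteq> (kcarrier M \<times> kcarrier N) \<times> (kcarrier M \<times> kcarrier N)"
begin

abbreviation "FE \<equiv> free_el M N"
abbreviation "REL \<equiv> tensor_rel M N Bal"
abbreviation "T \<equiv> tensor M N Bal"
abbreviation "CL \<equiv> tclass M N Bal"

lemma free_el_zero: "(\<lambda>_. 0) \<in> FE"
  unfolding free_el_def fsupp_def by simp

lemma free_el_add: "f \<in> FE \<Longrightarrow> g \<in> FE \<Longrightarrow> (\<lambda>p. f p + g p) \<in> FE"
  unfolding free_el_def using fsupp_add[of f g] finite_subset by blast

lemma free_el_diff: "f \<in> FE \<Longrightarrow> g \<in> FE \<Longrightarrow> (\<lambda>p. f p - g p) \<in> FE"
  unfolding free_el_def using fsupp_diff[of f g] finite_subset by blast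

lemma free_el_smult: "f \<in> FE \<Longrightarrow> (\<lambda>p. c * f p) \<in> FE"
  unfolding free_el_def using fsupp_smult[of c f] finite_subset by blast

lemma free_el_gen: "m \<in> kcarrier M \<Longrightarrow> n \<in> kcarrier N \<Longrightarrow> gen m n \<in> FE"
  unfolding free_el_def using fsupp_gen[of m n] finite_subset by blast

lemma tensor_rel_free_el: "r \<in> REL \<Longrightarrow> r \<in> FE"
proof (induction rule: tensor_rel.induct)
  case rzero then show ?case by (rule free_el_zero)
next
  case (radd f g) then show ?case by (simp add: free_el_add)
next
  case (rsmult f c) then show ?case by (simp add: free_el_smult)
next
  case (raddl m m' n) then show ?case
    by (intro free_el_diff free_el_gen kmodule_add_closed[OF M])
next
  case (raddr m n n') then show ?case
    by (intro free_el_diff free_el_gen kmodule_add_closed[OF N])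
next
  case (rsmultl m n c) then show ?case
    using free_el_smult[OF free_el_gen] by (intro free_el_diff free_el_gen kmodule_smult_closed[OF M]) auto
next
  case (rsmultr m n c) then show ?case
    using free_el_smult[OF free_el_gen] by (intro free_el_diff free_el_gen kmodule_smult_closed[OF N]) auto
next
  case (rbal p q) then show ?case
    by (intro free_el_diff free_el_gen) auto
qed

context
  fixes P :: "('k, 'p) kmod" and phi :: "'m \<Rightarrow> 'n \<Rightarrow> 'p"
  assumes P: "kmodule P" and phic: "\<And>m n. m \<in> kcarrier M \<Longrightarrow> n \<in> kcarrier N \<Longrightarrow> phi m n \<in> kcarrier P"
begin

lemma free_lift_mono_neutral:
  assumes f: "f \<in> FE" and S: "finite S" "fsupp f \<subseteq> S" "S \<subseteq> kcarrier M \<times> kcarrier N"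
  shows "free_lift P phi f = kmsum P (\<lambda>q. ksmult P (f q) (phi (fst q) (snd q))) S"
  unfolding free_lift_def
proof (rule kmsum_mono_neutral[OF P S(1,2), symmetric])
  fix q assume "q \<in> fsupp f" thus "ksmult P (f q) (phi (fst q) (snd q)) \<in> kcarrier P"
    using S phic kmodule_smult_closed[OF P] by (metis mem_Times_iff subsetD)
next
  fix q assume q: "q \<in> S - fsupp f"
  hence "f q = 0" unfolding fsupp_def by auto
  thus "ksmult P (f q) (phi (fst q) (snd q)) = kzero P"
    using q S phic kmodule_smult_zero_left[OF P] by (metis Diff_iff mem_Times_iff subsetD)
qed

lemma free_lift_closed: "f \<in> FE \<Longrightarrow> free_lift P phi f \<in> kcarrier P"
  unfolding free_lift_def free_el_def
  by (rule kmsum_closed[OF P]) (use phic kmodule_smult_closed[OF P] in \<open>auto simp: mem_Times_iff\<close>)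

lemma free_lift_add:
  assumes f: "f \<in> FE" and g: "g \<in> FE"
  shows "free_lift P phi (\<lambda>p. f p + g p) = kadd P (free_lift P phi f) (free_lift P phi g)"
proof -
  let ?S = "fsupp f \<union> fsupp g"
  have S: "finite ?S" "?S \<subseteq> kcarrier M \<times> kcarrier N" using f g unfolding free_el_def by auto
  have tc: "\<And>h q. q \<in> ?S \<Longrightarrow> ksmult P h (phi (fst q) (snd q)) \<in> kcarrier P"
    using S phic kmodule_smult_closed[OF P] by (metis mem_Times_iff subsetD)
  have "free_lift P phi (\<lambda>p. f p + g p) = kmsum P (\<lambda>q. ksmult P (f q + g q) (phi (fst q) (snd q))) ?S"
    by (rule free_lift_mono_neutral) (use free_el_add[OF f g] fsupp_add[of f g] S in auto)
  also have "\<dots> = kmsum P (\<lambda>q. kadd P (ksmult P (f q) (phi (fst q) (snd q))) (ksmult P (g q) (phi (fst q) (snd q)))) ?S"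
    by (rule kmsum_cong) (use S phic kmodule_add_smult_distrib[OF P] in \<open>auto simp: mem_Times_iff\<close>)
  also have "\<dots> = kadd P (kmsum P (\<lambda>q. ksmult P (f q) (phi (fst q) (snd q))) ?S) (kmsum P (\<lambda>q. ksmult P (g q) (phi (fst q) (snd q))) ?S)"
    by (rule kmsum_add[OF P S(1)]) (use tc in auto)
  also have "\<dots> = kadd P (free_lift P phi f) (free_lift P phi g)"
    using free_lift_mono_neutral[OF f S(1) _ S(2)] free_lift_mono_neutral[OF g S(1) _ S(2)] by simp
  finally show ?thesis .
qed

lemma free_lift_smult:
  assumes f: "f \<in> FE"
  shows "free_lift P phi (\<lambda>p. c * f p) = ksmult P c (free_lift P phi f)"
proof -
  have S: "finite (fsupp f)" "fsupp f \<subseteq> kcarrier M \<times> kcarrier N" using f unfolding free_el_def by auto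
  have tc: "\<And>h q. q \<in> fsupp f \<Longrightarrow> phi (fst q) (snd q) \<in> kcarrier P"
    using S phic by (metis mem_Times_iff subsetD)
  have "free_lift P phi (\<lambda>p. c * f p) = kmsum P (\<lambda>q. ksmult P (c * f q) (phi (fst q) (snd q))) (fsupp f)"
    by (rule free_lift_mono_neutral) (use free_el_smult[OF f] fsupp_smult[of c f] S in auto)
  also have "\<dots> = kmsum P (\<lambda>q. ksmult P c (ksmult P (f q) (phi (fst q) (snd q)))) (fsupp f)"
    by (rule kmsum_cong) (use tc kmodule_smult_smult[OF P] in auto)
  also have "\<dots> = ksmult P c (free_lift P phi f)"
    unfolding free_lift_def by (rule kmsum_smult[OF P S(1), symmetric]) (use tc kmodule_smult_closed[OF P] in auto)
  finally show ?thesis .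
qed

lemma free_lift_zero: "free_lift P phi (\<lambda>_. 0) = kzero P"
  unfolding free_lift_def fsupp_def by simp

lemma free_lift_gen:
  assumes m: "m \<in> kcarrier M" and n: "n \<in> kcarrier N"
  shows "free_lift P phi (gen m n) = phi m n"
proof -
  have "free_lift P phi (gen m n) = kmsum P (\<lambda>q. ksmult P (gen m n q) (phi (fst q) (snd q))) {(m, n)}"
    by (rule free_lift_mono_neutral) (use free_el_gen[OF m n] fsupp_gen[of m n] m n in auto)
  also have "\<dots> = kadd P (ksmult P 1 (phi m n)) (kzero P)"
    using kmsum_insert[OF P, of "{}" "(m, n)"] phic[OF m n] kmodule_smult_closed[OF P] by (simp add: gen_def)
  also have "\<dots> = phi m n" using kmodule_smult_one[OF P phic[OF m n]] kmodule_add_zero_right[OF P phic[OF m n]] by simp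
  finally show ?thesis .
qed

lemma free_lift_diff:
  assumes f: "f \<in> FE" and g: "g \<in> FE"
  shows "free_lift P phi (\<lambda>p. f p - g p) = kadd P (free_lift P phi f) (ksmult P (-1) (free_lift P phi g))"
proof -
  have "(\<lambda>p. f p - g p) = (\<lambda>p. f p + (\<lambda>p. (-1) * g p) p)" by auto
  hence "free_lift P phi (\<lambda>p. f p - g p) = free_lift P phi (\<lambda>p. f p + (\<lambda>p. (-1) * g p) p)" by simp
  also have "\<dots> = kadd P (free_lift P phi f) (free_lift P phi (\<lambda>p. (-1) * g p))" by (rule free_lift_add[OF f free_el_smult[OF g]])
  finally show ?thesis using free_lift_smult[OF g, of "-1"] by simp
qed

lemma free_lift_tensor_rel:
  assumes bil: "kbilin M N P phi" and bal: "balanced Bal phi" and r: "r \<in> REL"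
  shows "free_lift P phi r = kzero P"
  using r
proof (induction rule: tensor_rel.induct)
  case rzero then show ?case by (rule free_lift_zero)
next
  case (radd f g) then show ?case
    using free_lift_add[OF tensor_rel_free_el tensor_rel_free_el] kmodule_add_zero_left[OF P kmodule_zero_closed[OF P]] by simp
next
  case (rsmult f c) then show ?case
    using free_lift_smult[OF tensor_rel_free_el] kmodule_smult_zero_right[OF P] by simp
next
  case (raddl m m' n)
  have e: "phi (kadd M m m') n = kadd P (phi m n) (phi m' n)"
    using bil raddl unfolding kbilin_def klin_def by blast
  show ?case
    using raddl free_lift_diff[OF free_el_diff free_el_gen, of "gen (kadd M m m') n" "gen m n" m' n]
      free_lift_diff[of "gen (kadd M m m') n" "gen m n"] free_el_gen kmodule_add_closed[OF M] free_lift_gen e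
      kmodule_add_minus_summands[OF P phic phic] by simp
next
  case (raddr m n n')
  have e: "phi m (kadd N n n') = kadd P (phi m n) (phi m n')"
    using bil raddr unfolding kbilin_def klin_def by blast
  show ?case
    using raddr free_lift_diff[OF free_el_diff free_el_gen, of "gen m (kadd N n n')" "gen m n" m n']
      free_lift_diff[of "gen m (kadd N n n')" "gen m n"] free_el_gen kmodule_add_closed[OF N] free_lift_gen e
      kmodule_add_minus_summands[OF P phic phic] by simp
next
  case (rsmultl m n c)
  have e: "phi (ksmult M c m) n = ksmult P c (phi m n)"
    using bil rsmultl unfolding kbilin_def klin_def by blast
  have "free_lift P phi (\<lambda>p. gen (ksmult M c m) n p - c * gen m n p)
      = kadd P (phi (ksmult M c m) n) (ksmult P (-1) (ksmult P c (phi m n)))"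
    using free_lift_diff[OF free_el_gen free_el_smult[OF free_el_gen]] free_lift_smult[OF free_el_gen] free_lift_gen
      rsmultl kmodule_smult_closed[OF M] by simp
  then show ?case using e kmodule_add_minus_one_smult[OF P kmodule_smult_closed[OF P phic]] rsmultl by simp
next
  case (rsmultr m n c)
  have e: "phi m (ksmult N c n) = ksmult P c (phi m n)"
    using bil rsmultr unfolding kbilin_def klin_def by blast
  have "free_lift P phi (\<lambda>p. gen m (ksmult N c n) p - c * gen m n p)
      = kadd P (phi m (ksmult N c n)) (ksmult P (-1) (ksmult P c (phi m n)))"
    using free_lift_diff[OF free_el_gen free_el_smult[OF free_el_gen]] free_lift_smult[OF free_el_gen] free_lift_gen
      rsmultr kmodule_smult_closed[OF N] by simp
  then show ?case using e kmodule_add_minus_one_smult[OF P kmodule_smult_closed[OF P phic]] rsmultr by simp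
next
  case (rbal p q)
  have e: "phi (fst p) (snd p) = phi (fst q) (snd q)" using bal rbal unfolding balanced_def by auto
  have "free_lift P phi (\<lambda>r. gen (fst p) (snd p) r - gen (fst q) (snd q) r)
      = kadd P (phi (fst p) (snd p)) (ksmult P (-1) (phi (fst q) (snd q)))"
    using free_lift_diff[OF free_el_gen free_el_gen] free_lift_gen rbal by (auto simp: mem_Times_iff)
  then show ?case using e kmodule_add_minus_one_smult[OF P phic] rbal by (auto simp: mem_Times_iff)
qed

end

lemma tensor_rel_uminus: "a \<in> REL \<Longrightarrow> (\<lambda>p. - a p) \<in> REL"
  using tensor_rel.rsmult[of a M N Bal "-1"] by simp

lemma tensor_rel_trans: "(\<lambda>p. f p - g p) \<in> REL \<Longrightarrow> (\<lambda>p. g p - h p) \<in> REL \<Longrightarrow> (\<lambda>p. f p - h p) \<in> REL"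
  using tensor_rel.radd[of "\<lambda>p. f p - g p" M N Bal "\<lambda>p. g p - h p"] by simp

lemma tensor_rel_sym: "(\<lambda>p. f p - g p) \<in> REL \<Longrightarrow> (\<lambda>p. g p - f p) \<in> REL"
  using tensor_rel_uminus[of "\<lambda>p. f p - g p"] by simp

lemma tensor_rel_refl: "(\<lambda>p. f p - f p) \<in> REL"
  using tensor_rel.rzero by simp

lemma tclass_mem: "f \<in> FE \<Longrightarrow> f \<in> CL f"
  unfolding tclass_def using tensor_rel_refl by simp

lemma tclass_eq: assumes "f \<in> FE" "g \<in> FE" "(\<lambda>p. f p - g p) \<in> REL" shows "CL f = CL g"
proof -
  have fg: "(\<lambda>p. g p - f p) \<in> REL" by (rule tensor_rel_sym[OF assms(3)])
  have "(\<lambda>p. h p - f p) \<in> REL \<longleftrightarrow> (\<lambda>p. h p - g p) \<in> REL" for h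
    using tensor_rel_trans[of h f g, OF _ assms(3)] tensor_rel_trans[of h g f, OF _ fg] by blast
  thus ?thesis unfolding tclass_def by blast
qed

lemma tclass_some: assumes "f \<in> FE"
  shows "(SOME g. g \<in> CL f) \<in> FE" "(\<lambda>p. (SOME g. g \<in> CL f) p - f p) \<in> REL"
  using someI[of "\<lambda>g. g \<in> CL f" f] tclass_mem[OF assms] unfolding tclass_def by auto

lemma tensor_carrier: "kcarrier T = CL ` FE"
  unfolding tensor_def by simp

lemma tensor_carrierE: assumes "X \<in> kcarrier T" obtains f where "f \<in> FE" "X = CL f"
  using assms tensor_carrier by auto

lemma tensor_carrierI: "f \<in> FE \<Longrightarrow> CL f \<in> kcarrier T"
  using tensor_carrier by auto

lemma tensor_add: assumes f: "f \<in> FE" and g: "g \<in> FE"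
  shows "kadd T (CL f) (CL g) = CL (\<lambda>p. f p + g p)"
proof -
  let ?f = "SOME h. h \<in> CL f" and ?g = "SOME h. h \<in> CL g"
  have "kadd T (CL f) (CL g) = CL (\<lambda>p. ?f p + ?g p)" unfolding tensor_def by simp
  also have "\<dots> = CL (\<lambda>p. f p + g p)"
  proof (rule tclass_eq)
    show "(\<lambda>p. ?f p + ?g p) \<in> FE" using tclass_some f g free_el_add by blast
    show "(\<lambda>p. f p + g p) \<in> FE" using f g free_el_add by blast
    show "(\<lambda>p. (?f p + ?g p) - (f p + g p)) \<in> REL"
      using tensor_rel.radd[OF tclass_some(2)[OF f] tclass_some(2)[OF g]] by (simp add: algebra_simps)
  qed
  finally show ?thesis .
qed

lemma tensor_smult: assumes f: "f \<in> FE"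
  shows "ksmult T c (CL f) = CL (\<lambda>p. c * f p)"
proof -
  let ?f = "SOME h. h \<in> CL f"
  have "ksmult T c (CL f) = CL (\<lambda>p. c * ?f p)" unfolding tensor_def by simp
  also have "\<dots> = CL (\<lambda>p. c * f p)"
  proof (rule tclass_eq)
    show "(\<lambda>p. c * ?f p) \<in> FE" using tclass_some f free_el_smult by blast
    show "(\<lambda>p. c * f p) \<in> FE" using f free_el_smult by blast
    show "(\<lambda>p. c * ?f p - c * f p) \<in> REL"
      using tensor_rel.rsmult[OF tclass_some(2)[OF f], of c] by (simp add: algebra_simps)
  qed
  finally show ?thesis .
qed

lemma tensor_zero: "kzero T = CL (\<lambda>_. 0)"
  unfolding tensor_def by simp

lemma tensor_tmk: "tmk M N Bal m n = CL (gen m n)"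
  unfolding tmk_def ..

lemma tensor_kmodule: "kmodule T"
proof -
  have neg: "\<exists>g\<in>FE. CL (\<lambda>p. f p + g p) = CL (\<lambda>_. 0)" if "f \<in> FE" for f
    using free_el_smult[OF that, of "-1"] by (intro bexI[of _ "\<lambda>p. - f p"]) simp_all
  show ?thesis
    unfolding kmodule_def tensor_carrier ball_simps bex_simps
    by (auto simp: tensor_add tensor_smult tensor_zero free_el_zero free_el_add free_el_smult
        algebra_simps neg)
qed

lemma tmk_closed: "m \<in> kcarrier M \<Longrightarrow> n \<in> kcarrier N \<Longrightarrow> tmk M N Bal m n \<in> kcarrier T"
  using tensor_tmk tensor_carrierI free_el_gen by simp

lemma tmk_kbilin: "kbilin M N T (tmk M N Bal)"
  unfolding kbilin_def
proof (intro conjI ballI)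
  fix m assume m: "m \<in> kcarrier M"
  show "klin N T (tmk M N Bal m)"
  proof (rule klinI)
    fix n assume "n \<in> kcarrier N" thus "tmk M N Bal m n \<in> kcarrier T" using tmk_closed m by simp
  next
    fix n n' assume n: "n \<in> kcarrier N" and n': "n' \<in> kcarrier N"
    show "tmk M N Bal m (kadd N n n') = kadd T (tmk M N Bal m n) (tmk M N Bal m n')"
      unfolding tensor_tmk tensor_add[OF free_el_gen[OF m n] free_el_gen[OF m n']]
      by (rule tclass_eq) (use m n n' free_el_gen free_el_add kmodule_add_closed[OF N] tensor_rel.raddr[of m M n N n' Bal] in
          \<open>auto simp: algebra_simps\<close>)
  next
    fix c n assume n: "n \<in> kcarrier N"
    show "tmk M N Bal m (ksmult N c n) = ksmult T c (tmk M N Bal m n)"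
      unfolding tensor_tmk tensor_smult[OF free_el_gen[OF m n]]
      by (rule tclass_eq) (use m n free_el_gen free_el_smult kmodule_smult_closed[OF N] tensor_rel.rsmultr[of m M n N c Bal] in auto)
  qed
next
  fix n assume n: "n \<in> kcarrier N"
  show "klin M T (\<lambda>m. tmk M N Bal m n)"
  proof (rule klinI)
    fix m assume "m \<in> kcarrier M" thus "tmk M N Bal m n \<in> kcarrier T" using tmk_closed n by simp
  next
    fix m m' assume m: "m \<in> kcarrier M" and m': "m' \<in> kcarrier M"
    show "tmk M N Bal (kadd M m m') n = kadd T (tmk M N Bal m n) (tmk M N Bal m' n)"
      unfolding tensor_tmk tensor_add[OF free_el_gen[OF m n] free_el_gen[OF m' n]]
      by (rule tclass_eq) (use m m' n free_el_gen free_el_add kmodule_add_closed[OF M] tensor_rel.raddl[of m M m' n N Bal] in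
          \<open>auto simp: algebra_simps\<close>)
  next
    fix c m assume m: "m \<in> kcarrier M"
    show "tmk M N Bal (ksmult M c m) n = ksmult T c (tmk M N Bal m n)"
      unfolding tensor_tmk tensor_smult[OF free_el_gen[OF m n]]
      by (rule tclass_eq) (use m n free_el_gen free_el_smult kmodule_smult_closed[OF M] tensor_rel.rsmultl[of m M n N c Bal] in auto)
  qed
qed

lemma tmk_balance: "(p, q) \<in> Bal \<Longrightarrow> tmk M N Bal (fst p) (snd p) = tmk M N Bal (fst q) (snd q)"
  unfolding tensor_tmk using Bal
  by (intro tclass_eq free_el_gen tensor_rel.rbal) (auto simp: mem_Times_iff)

lemma tlift_tclass:
  assumes P: "kmodule P" and bil: "kbilin M N P phi" and bal: "balanced Bal phi" and f: "f \<in> FE"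
  shows "tlift P phi (CL f) = free_lift P phi f"
proof -
  let ?g = "SOME g. g \<in> CL f"
  note phic = kbilin_closed[OF bil]
  have "tlift P phi (CL f) = free_lift P phi ?g" by (rule tlift_eq_free_lift)
  also have "?g = (\<lambda>p. f p + (?g p - f p))" by auto
  also have "free_lift P phi \<dots> = kadd P (free_lift P phi f) (free_lift P phi (\<lambda>p. ?g p - f p))"
    by (rule free_lift_add[OF P phic f tensor_rel_free_el[OF tclass_some(2)[OF f]]])
  also have "\<dots> = free_lift P phi f"
    using free_lift_tensor_rel[OF P phic bil bal tclass_some(2)[OF f]] kmodule_add_zero_right[OF P free_lift_closed[OF P phic f]] by simp
  finally show ?thesis .
qed

lemma tlift_closed:
  assumes P: "kmodule P" and phic: "\<And>m n. m \<in> kcarrier M \<Longrightarrow> n \<in> kcarrier N \<Longrightarrow> phi m n \<in> kcarrier P"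
    and X: "X \<in> kcarrier T"
  shows "tlift P phi X \<in> kcarrier P"
proof -
  obtain f where f: "f \<in> FE" "X = CL f" using X by (rule tensor_carrierE)
  show ?thesis unfolding tlift_eq_free_lift using free_lift_closed[OF P phic tclass_some(1)[OF f(1)]] f(2) by simp
qed

lemma tlift_tmk:
  assumes P: "kmodule P" and bil: "kbilin M N P phi" and bal: "balanced Bal phi"
    and m: "m \<in> kcarrier M" and n: "n \<in> kcarrier N"
  shows "tlift P phi (tmk M N Bal m n) = phi m n"
  unfolding tensor_tmk tlift_tclass[OF P bil bal free_el_gen[OF m n]] by (rule free_lift_gen[OF P kbilin_closed[OF bil] m n])

lemma tlift_klin:
  assumes P: "kmodule P" and bil: "kbilin M N P phi" and bal: "balanced Bal phi"
  shows "klin T P (tlift P phi)"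
proof (rule klinI)
  fix a assume a: "a \<in> kcarrier T" show "tlift P phi a \<in> kcarrier P"
    using tlift_closed[OF P _ a, of phi] kbilin_closed[OF bil] by blast
next
  fix a b assume "a \<in> kcarrier T" "b \<in> kcarrier T"
  then obtain f g where "f \<in> FE" "g \<in> FE" "a = CL f" "b = CL g" by (metis tensor_carrierE)
  thus "tlift P phi (kadd T a b) = kadd P (tlift P phi a) (tlift P phi b)"
    using tensor_add tlift_tclass[OF P bil bal] free_el_add free_lift_add[OF P kbilin_closed[OF bil]] by simp
next
  fix c a assume "a \<in> kcarrier T"
  then obtain f where "f \<in> FE" "a = CL f" by (metis tensor_carrierE)
  thus "tlift P phi (ksmult T c a) = ksmult P c (tlift P phi a)"
    using tensor_smult tlift_tclass[OF P bil bal] free_el_smult free_lift_smult[OF P kbilin_closed[OF bil]] by simp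
qed

lemma tlift_cong:
  assumes X: "X \<in> kcarrier T"
    and e: "\<And>m n. m \<in> kcarrier M \<Longrightarrow> n \<in> kcarrier N \<Longrightarrow> phi m n = psi m n"
  shows "tlift P phi X = tlift P psi X"
proof -
  obtain f where f: "f \<in> FE" "X = CL f" using X by (rule tensor_carrierE)
  have g: "(SOME g. g \<in> X) \<in> FE" using tclass_some(1)[OF f(1)] f(2) by simp
  show ?thesis unfolding tlift_eq_free_lift free_lift_def
    by (rule kmsum_cong) (use g e in \<open>auto simp: free_el_def mem_Times_iff\<close>)
qed

lemma free_el_fun_upd_zero: "f \<in> FE \<Longrightarrow> f(q := 0) \<in> FE"
  unfolding free_el_def fsupp_def by (auto elim: finite_subset[rotated])

lemma tclass_split_point:
  assumes f: "f \<in> FE" and m: "m \<in> kcarrier M" and n: "n \<in> kcarrier N"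
  shows "CL f = kadd T (CL (f((m, n) := 0))) (tmk M N Bal (ksmult M (f (m, n)) m) n)"
proof -
  have "tmk M N Bal (ksmult M (f (m, n)) m) n = ksmult T (f (m, n)) (tmk M N Bal m n)"
    using tmk_kbilin m n unfolding kbilin_def klin_def by blast
  also have "\<dots> = CL (\<lambda>p. f (m, n) * gen m n p)" unfolding tensor_tmk by (rule tensor_smult[OF free_el_gen[OF m n]])
  also have "kadd T (CL (f((m, n) := 0))) \<dots> = CL (\<lambda>p. (f((m, n) := 0)) p + f (m, n) * gen m n p)"
    by (rule tensor_add[OF free_el_fun_upd_zero[OF f] free_el_smult[OF free_el_gen[OF m n]]])
  also have "(\<lambda>p. (f((m, n) := 0)) p + f (m, n) * gen m n p) = f" by (auto simp: gen_def)
  finally show ?thesis ..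
qed

lemma tensor_induct:
  assumes X: "X \<in> kcarrier T"
    and zero: "Q (kzero T)"
    and add: "\<And>X Y. X \<in> kcarrier T \<Longrightarrow> Y \<in> kcarrier T \<Longrightarrow> Q X \<Longrightarrow> Q Y \<Longrightarrow> Q (kadd T X Y)"
    and tmk: "\<And>m n. m \<in> kcarrier M \<Longrightarrow> n \<in> kcarrier N \<Longrightarrow> Q (tmk M N Bal m n)"
  shows "Q X"
proof -
  have "Q (CL f)" if "finite S" "f \<in> FE" "fsupp f \<subseteq> S" for S f
    using that
  proof (induction S arbitrary: f rule: finite_induct)
    case empty
    hence "f = (\<lambda>_. 0)" unfolding fsupp_def by auto
    thus ?case using zero tensor_zero by simp
  next
    case (insert q S)
    have IH: "Q (CL (f(q := 0)))"
      using insert.prems by (intro insert.IH free_el_fun_upd_zero) (auto simp: fsupp_def)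
    show ?case
    proof (cases "f q = 0")
      case True
      thus ?thesis using IH fun_upd_idem by metis
    next
      case False
      then obtain m n where q: "q = (m, n)" "m \<in> kcarrier M" "n \<in> kcarrier N"
        using insert.prems(1) unfolding free_el_def fsupp_def by auto
      show ?thesis
        unfolding tclass_split_point[OF insert.prems(1) q(2,3)] q(1)[symmetric]
        using IH q kmodule_smult_closed[OF M] free_el_fun_upd_zero[OF insert.prems(1)]
        by (intro add tmk tensor_carrierI tmk_closed) auto
    qed
  qed
  moreover obtain f where "f \<in> FE" "X = CL f" using X by (rule tensor_carrierE)
  ultimately show ?thesis unfolding free_el_def by auto
qed

lemma klin_tensor_ext:
  assumes P: "kmodule P" and F: "klin T P F" and G: "klin T P G"
    and e: "\<And>m n. m \<in> kcarrier M \<Longrightarrow> n \<in> kcarrier N \<Longrightarrow> F (tmk M N Bal m n) = G (tmk M N Bal m n)"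
    and X: "X \<in> kcarrier T"
  shows "F X = G X"
  using X
proof (rule tensor_induct)
  show "F (kzero T) = G (kzero T)" using klin_zero[OF tensor_kmodule P F] klin_zero[OF tensor_kmodule P G] by simp
next
  fix X Y assume "X \<in> kcarrier T" "Y \<in> kcarrier T" "F X = G X" "F Y = G Y"
  thus "F (kadd T X Y) = G (kadd T X Y)" using klin_add[OF F] klin_add[OF G] by simp
qed (rule e)

lemma tlift_klin_param:
  assumes Q: "kmodule Q" and P: "kmodule P" and X: "X \<in> kcarrier T"
    and L: "\<And>m n. m \<in> kcarrier M \<Longrightarrow> n \<in> kcarrier N \<Longrightarrow> klin Q P (\<lambda>t. phi t m n)"
  shows "klin Q P (\<lambda>t. tlift P (phi t) X)"
proof -
  obtain f0 where f0: "f0 \<in> FE" "X = CL f0" using X by (rule tensor_carrierE)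
  define f where "f = (SOME g. g \<in> X)"
  have "f \<in> FE" unfolding f_def f0(2) by (rule tclass_some(1)[OF f0(1)])
  hence S: "finite (fsupp f)" "fsupp f \<subseteq> kcarrier M \<times> kcarrier N" unfolding free_el_def by auto
  show ?thesis unfolding tlift_eq_free_lift f_def[symmetric] free_lift_def
  proof (rule kmsum_klin_param[OF Q P S(1)])
    fix q assume "q \<in> fsupp f"
    hence "klin Q P (\<lambda>t. phi t (fst q) (snd q))" using L S(2) by (auto simp: mem_Times_iff)
    thus "klin Q P (\<lambda>t. ksmult P (f q) (phi t (fst q) (snd q)))" by (rule klin_comp[OF _ klin_smult_const[OF P]])
  qed
qed

lemma tlift_comp:
  assumes P: "kmodule P" and Q: "kmodule Q" and g: "klin P Q g"
    and bil: "kbilin M N P phi" and bal: "balanced Bal phi" and X: "X \<in> kcarrier T"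
  shows "g (tlift P phi X) = tlift Q (\<lambda>m n. g (phi m n)) X"
proof (rule klin_tensor_ext[OF Q _ _ _ X])
  show "klin T Q (\<lambda>X. g (tlift P phi X))" by (rule klin_comp[OF tlift_klin[OF P bil bal] g])
  have bil2: "kbilin M N Q (\<lambda>m n. g (phi m n))"
    by (rule kbilinI) (use klin_comp kbilin_klin_left[OF bil] kbilin_klin_right[OF bil] g in fast)+
  have bal2: "balanced Bal (\<lambda>m n. g (phi m n))" using bal unfolding balanced_def by auto
  show "klin T Q (tlift Q (\<lambda>m n. g (phi m n)))" by (rule tlift_klin[OF Q bil2 bal2])
  fix m n assume m: "m \<in> kcarrier M" and n: "n \<in> kcarrier N"
  show "g (tlift P phi (tmk M N Bal m n)) = tlift Q (\<lambda>m n. g (phi m n)) (tmk M N Bal m n)"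
    using tlift_tmk[OF P bil bal m n] tlift_tmk[OF Q bil2 bal2 m n] by simp
qed

lemma tlift_kbilin_param:
  assumes U: "kmodule U" and V: "kmodule V" and P: "kmodule P" and X: "X \<in> kcarrier T"
    and B: "\<And>m n. m \<in> kcarrier M \<Longrightarrow> n \<in> kcarrier N \<Longrightarrow> kbilin U V P (\<lambda>u v. psi u v m n)"
  shows "kbilin U V P (\<lambda>u v. tlift P (psi u v) X)"
proof (rule kbilinI)
  fix u assume u: "u \<in> kcarrier U"
  show "klin V P (\<lambda>v. tlift P (psi u v) X)"
    by (rule tlift_klin_param[OF V P X]) (use kbilin_klin_right[OF B u] in auto)
next
  fix v assume v: "v \<in> kcarrier V"
  show "klin U P (\<lambda>u. tlift P (psi u v) X)"
    by (rule tlift_klin_param[OF U P X]) (use kbilin_klin_left[OF B v] in auto)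
qed

end

lemma balanced_tensor_kt: "kmodule M \<Longrightarrow> kmodule N \<Longrightarrow> balanced_tensor M N {}"
  unfolding balanced_tensor_def by simp

lemma tlift_swap:
  assumes T1: "balanced_tensor M N Bal" and T2: "balanced_tensor M' N' Bal'" and P: "kmodule P"
    and X: "X \<in> kcarrier (tensor M N Bal)" and Y: "Y \<in> kcarrier (tensor M' N' Bal')"
    and B1: "\<And>p q. p \<in> kcarrier M' \<Longrightarrow> q \<in> kcarrier N' \<Longrightarrow> kbilin M N P (\<lambda>m n. psi m n p q)"
    and b1: "\<And>p q. p \<in> kcarrier M' \<Longrightarrow> q \<in> kcarrier N' \<Longrightarrow> balanced Bal (\<lambda>m n. psi m n p q)"
    and B2: "\<And>m n. m \<in> kcarrier M \<Longrightarrow> n \<in> kcarrier N \<Longrightarrow> kbilin M' N' P (psi m n)"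
    and b2: "\<And>m n. m \<in> kcarrier M \<Longrightarrow> n \<in> kcarrier N \<Longrightarrow> balanced Bal' (psi m n)"
  shows "tlift P (\<lambda>m n. tlift P (psi m n) Y) X = tlift P (\<lambda>p q. tlift P (\<lambda>m n. psi m n p q) X) Y"
proof -
  interpret t1: balanced_tensor M N Bal by (rule T1)
  interpret t2: balanced_tensor M' N' Bal' by (rule T2)
  have bilA: "kbilin M N P (\<lambda>m n. tlift P (psi m n) Y)"
    by (rule t2.tlift_kbilin_param[OF t1.M t1.N P Y B1])
  have balA: "balanced Bal (\<lambda>m n. tlift P (psi m n) Y)"
    unfolding balanced_def
  proof (clarify)
    fix a b c d assume ab: "((a, b), (c, d)) \<in> Bal"
    hence C: "a \<in> kcarrier M" "b \<in> kcarrier N" "c \<in> kcarrier M" "d \<in> kcarrier N" using t1.Bal by auto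
    show "tlift P (psi (fst (a, b)) (snd (a, b))) Y = tlift P (psi (fst (c, d)) (snd (c, d))) Y"
    proof (simp, rule t2.tlift_cong[OF Y])
      fix p q assume "p \<in> kcarrier M'" "q \<in> kcarrier N'"
      thus "psi a b p q = psi c d p q" using b1[of p q] ab unfolding balanced_def by fastforce
    qed
  qed
  show ?thesis
  proof (rule t1.klin_tensor_ext[OF P t1.tlift_klin[OF P bilA balA] _ _ X])
    show "klin (tensor M N Bal) P (\<lambda>X. tlift P (\<lambda>p q. tlift P (\<lambda>m n. psi m n p q) X) Y)"
      by (rule t2.tlift_klin_param[OF t1.tensor_kmodule P Y]) (rule t1.tlift_klin[OF P B1 b1])
    fix m n assume m: "m \<in> kcarrier M" and n: "n \<in> kcarrier N"
    show "tlift P (\<lambda>m n. tlift P (psi m n) Y) (tmk M N Bal m n) =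
          tlift P (\<lambda>p q. tlift P (\<lambda>m n. psi m n p q) (tmk M N Bal m n)) Y"
      unfolding t1.tlift_tmk[OF P bilA balA m n]
      by (rule t2.tlift_cong[OF Y], rule t1.tlift_tmk[OF P B1 b1 m n, symmetric]) auto
  qed
qed

text \<open>The universal property again, outside the locale: the locale assumption becomes an
  ordinary premise, placed after the tensor argument, so that chains of rule applications
  can discharge all side conditions of a computation.\<close>

lemma kt_kmodule[intro]: "kmodule M \<Longrightarrow> kmodule N \<Longrightarrow> kmodule (tensor M N {})"
  by (rule balanced_tensor.tensor_kmodule[OF balanced_tensor_kt])

lemma klin_tlift_param:
  "X \<in> kcarrier (tensor M N Bal) \<Longrightarrow> balanced_tensor M N Bal \<Longrightarrow> kmodule U \<Longrightarrow> kmodule P \<Longrightarrow>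
   (\<And>m n. m \<in> kcarrier M \<Longrightarrow> n \<in> kcarrier N \<Longrightarrow> klin U P (\<lambda>t. phi t m n)) \<Longrightarrow>
   klin U P (\<lambda>t. tlift P (phi t) X)"
  by (rule balanced_tensor.tlift_klin_param)

lemma klin_tlift_arg:
  "klin U (tensor M N Bal) F \<Longrightarrow> balanced_tensor M N Bal \<Longrightarrow> kmodule P \<Longrightarrow> kbilin M N P phi \<Longrightarrow> balanced Bal phi \<Longrightarrow>
   klin U P (\<lambda>t. tlift P phi (F t))"
  by (rule klin_comp, assumption, rule balanced_tensor.tlift_klin)

lemma klin_tmk_left:
  "balanced_tensor M N Bal \<Longrightarrow> klin U M F \<Longrightarrow> n \<in> kcarrier N \<Longrightarrow> klin U (tensor M N Bal) (\<lambda>t. tmk M N Bal (F t) n)"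
  by (rule klin_kbilin_left[OF balanced_tensor.tmk_kbilin])

lemma klin_tmk_right:
  "balanced_tensor M N Bal \<Longrightarrow> klin U N F \<Longrightarrow> m \<in> kcarrier M \<Longrightarrow> klin U (tensor M N Bal) (\<lambda>t. tmk M N Bal m (F t))"
  by (rule klin_kbilin_right[OF balanced_tensor.tmk_kbilin])

lemma lift_closed:
  "X \<in> kcarrier (tensor M N Bal) \<Longrightarrow> balanced_tensor M N Bal \<Longrightarrow> kmodule P \<Longrightarrow>
   (\<And>m n. m \<in> kcarrier M \<Longrightarrow> n \<in> kcarrier N \<Longrightarrow> phi m n \<in> kcarrier P) \<Longrightarrow>
   tlift P phi X \<in> kcarrier P"
  by (rule balanced_tensor.tlift_closed)

lemma tensor_tmk_closed: "balanced_tensor M N Bal \<Longrightarrow> m \<in> kcarrier M \<Longrightarrow> n \<in> kcarrier N \<Longrightarrow> tmk M N Bal m n \<in> kcarrier (tensor M N Bal)"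
  by (rule balanced_tensor.tmk_closed)

lemma kt_tlift_tmk: "kmodule M \<Longrightarrow> kmodule N \<Longrightarrow> kmodule P \<Longrightarrow> kbilin M N P phi \<Longrightarrow>
  m \<in> kcarrier M \<Longrightarrow> n \<in> kcarrier N \<Longrightarrow> tlift P phi (ktmk M N m n) = phi m n"
  by (rule balanced_tensor.tlift_tmk[OF balanced_tensor_kt]) auto

lemma lift_tmk: "balanced_tensor M N Bal \<Longrightarrow> kmodule P \<Longrightarrow> kbilin M N P phi \<Longrightarrow> balanced Bal phi \<Longrightarrow>
  m \<in> kcarrier M \<Longrightarrow> n \<in> kcarrier N \<Longrightarrow> tlift P phi (tmk M N Bal m n) = phi m n"
  by (rule balanced_tensor.tlift_tmk)

lemma lift_comp: "X \<in> kcarrier (tensor M N Bal) \<Longrightarrow> balanced_tensor M N Bal \<Longrightarrow> kmodule P \<Longrightarrow> kmodule Q \<Longrightarrow> klin P Q g \<Longrightarrow>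
  kbilin M N P phi \<Longrightarrow> balanced Bal phi \<Longrightarrow> g (tlift P phi X) = tlift Q (\<lambda>m n. g (phi m n)) X"
  by (rule balanced_tensor.tlift_comp)

lemma lift_cong: "X \<in> kcarrier (tensor M N Bal) \<Longrightarrow> balanced_tensor M N Bal \<Longrightarrow>
  (\<And>m n. m \<in> kcarrier M \<Longrightarrow> n \<in> kcarrier N \<Longrightarrow> phi m n = psi m n) \<Longrightarrow> tlift P phi X = tlift P psi X"
  by (rule balanced_tensor.tlift_cong)

lemma lift_ext: "X \<in> kcarrier (tensor M N Bal) \<Longrightarrow> balanced_tensor M N Bal \<Longrightarrow> kmodule P \<Longrightarrow>
  klin (tensor M N Bal) P F \<Longrightarrow> klin (tensor M N Bal) P G \<Longrightarrow>
  (\<And>m n. m \<in> kcarrier M \<Longrightarrow> n \<in> kcarrier N \<Longrightarrow> F (tmk M N Bal m n) = G (tmk M N Bal m n)) \<Longrightarrow> F X = G X"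
  by (rule balanced_tensor.klin_tensor_ext)

lemma lift_klin: "balanced_tensor M N Bal \<Longrightarrow> kmodule P \<Longrightarrow> kbilin M N P phi \<Longrightarrow> balanced Bal phi \<Longrightarrow>
  klin (tensor M N Bal) P (tlift P phi)"
  by (rule balanced_tensor.tlift_klin)

definition tril_lift :: "('k::comm_ring_1, 'p) kmod \<Rightarrow> ('a \<Rightarrow> 'b \<Rightarrow> 'c \<Rightarrow> 'p) \<Rightarrow> ((('a \<times> 'b \<Rightarrow> 'k) set) \<times> 'c \<Rightarrow> 'k) set \<Rightarrow> 'p" where
  "tril_lift P F = tlift P (\<lambda>u c. tlift P (\<lambda>a b. F a b c) u)"

lemma tril_lift_kbilin:
  assumes M1: "kmodule M1" and M2: "kmodule M2" and M3: "kmodule M3" and P: "kmodule P" and F: "ktril M1 M2 M3 P F"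
  shows "kbilin (kt M1 M2) M3 P (\<lambda>u c. tlift P (\<lambda>a b. F a b c) u)"
proof (rule kbilinI)
  fix u assume u: "u \<in> kcarrier (kt M1 M2)"
  show "klin M3 P (\<lambda>c. tlift P (\<lambda>a b. F a b c) u)"
    by (rule klin_tlift_param[OF u balanced_tensor_kt[OF M1 M2] M3 P], rule ktril_klin_3[OF F])
next
  fix c assume c: "c \<in> kcarrier M3"
  show "klin (kt M1 M2) P (\<lambda>u. tlift P (\<lambda>a b. F a b c) u)"
    by (rule lift_klin[OF balanced_tensor_kt[OF M1 M2] P ktril_kbilin_12[OF F c] balanced_empty])
qed

lemma tril_lift_klin:
  assumes M1: "kmodule M1" and M2: "kmodule M2" and M3: "kmodule M3" and P: "kmodule P" and F: "ktril M1 M2 M3 P F"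
  shows "klin (kt (kt M1 M2) M3) P (tril_lift P F)"
  unfolding tril_lift_def by (rule lift_klin[OF balanced_tensor_kt[OF kt_kmodule[OF M1 M2] M3] P tril_lift_kbilin[OF M1 M2 M3 P F] balanced_empty])

lemma tril_lift_tmk:
  assumes M1: "kmodule M1" and M2: "kmodule M2" and M3: "kmodule M3" and P: "kmodule P" and F: "ktril M1 M2 M3 P F"
    and u: "u \<in> kcarrier (kt M1 M2)" and c: "c \<in> kcarrier M3"
  shows "tril_lift P F (ktmk (kt M1 M2) M3 u c) = tlift P (\<lambda>a b. F a b c) u"
  unfolding tril_lift_def by (rule kt_tlift_tmk[OF kt_kmodule[OF M1 M2] M3 P tril_lift_kbilin[OF M1 M2 M3 P F] u c])

lemma tril_lift_tmk_tmk:
  assumes M1: "kmodule M1" and M2: "kmodule M2" and M3: "kmodule M3" and P: "kmodule P" and F: "ktril M1 M2 M3 P F"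
    and a: "a \<in> kcarrier M1" and b: "b \<in> kcarrier M2" and c: "c \<in> kcarrier M3"
  shows "tril_lift P F (ktmk (kt M1 M2) M3 (ktmk M1 M2 a b) c) = F a b c"
  unfolding tril_lift_tmk[OF M1 M2 M3 P F tensor_tmk_closed[OF balanced_tensor_kt[OF M1 M2] a b] c]
  by (rule kt_tlift_tmk[OF M1 M2 P ktril_kbilin_12[OF F c] a b])

section \<open>Comodule categories over a semi-Hopf category\<close>

locale comodule_cat_ctx =
  fixes H :: "('x, 'k::comm_ring_1, 'h) shcat" and A :: "('x, 'k, 'a, 'h) comcat"
  assumes SH: "semi_hopf_cat H" and CA: "comodule_cat H A"
begin

abbreviation "HM \<equiv> homs H"
abbreviation "AM \<equiv> homs A"

lemma H_klincat: "klincat H" using SH unfolding semi_hopf_cat_def by (elim conjE) blast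
lemma A_klincat: "klincat A" using CA unfolding comodule_cat_def by (elim conjE) blast

lemma H_kmodule[simp,intro]: "kmodule (HM x y)" using H_klincat unfolding klincat_def by (elim conjE) blast
lemma A_kmodule[simp,intro]: "kmodule (AM x y)" using A_klincat unfolding klincat_def by (elim conjE) blast

lemma H_cmp_kbilin: "kbilin (HM x y) (HM y z) (HM x z) (cmp H x y z)" using H_klincat unfolding klincat_def by (elim conjE) blast
lemma A_cmp_kbilin: "kbilin (AM x y) (AM y z) (AM x z) (cmp A x y z)" using A_klincat unfolding klincat_def by (elim conjE) blast

lemma H_cmp_closed[intro]: "a \<in> kcarrier (HM x y) \<Longrightarrow> b \<in> kcarrier (HM y z) \<Longrightarrow> cmp H x y z a b \<in> kcarrier (HM x z)"
  using H_cmp_kbilin unfolding kbilin_def klin_def by blast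
lemma A_cmp_closed[intro]: "a \<in> kcarrier (AM x y) \<Longrightarrow> b \<in> kcarrier (AM y z) \<Longrightarrow> cmp A x y z a b \<in> kcarrier (AM x z)"
  using A_cmp_kbilin unfolding kbilin_def klin_def by blast

lemma H_cmp_assoc: "a \<in> kcarrier (HM x y) \<Longrightarrow> b \<in> kcarrier (HM y z) \<Longrightarrow> c \<in> kcarrier (HM z w) \<Longrightarrow>
    cmp H x z w (cmp H x y z a b) c = cmp H x y w a (cmp H y z w b c)"
  using H_klincat unfolding klincat_def by (elim conjE) blast
lemma A_cmp_assoc: "a \<in> kcarrier (AM x y) \<Longrightarrow> b \<in> kcarrier (AM y z) \<Longrightarrow> c \<in> kcarrier (AM z w) \<Longrightarrow>
    cmp A x z w (cmp A x y z a b) c = cmp A x y w a (cmp A y z w b c)"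
  using A_klincat unfolding klincat_def by (elim conjE) blast

lemma H_idm_closed[intro]: "idm H x \<in> kcarrier (HM x x)" using H_klincat unfolding klincat_def by (elim conjE) blast
lemma A_idm_closed[intro]: "idm A x \<in> kcarrier (AM x x)" using A_klincat unfolding klincat_def by (elim conjE) blast

lemma H_idm_left[simp]: "a \<in> kcarrier (HM x y) \<Longrightarrow> cmp H x x y (idm H x) a = a" using H_klincat unfolding klincat_def by (elim conjE) blast
lemma H_idm_right[simp]: "a \<in> kcarrier (HM x y) \<Longrightarrow> cmp H x y y a (idm H y) = a" using H_klincat unfolding klincat_def by (elim conjE) blast
lemma A_idm_left[simp]: "a \<in> kcarrier (AM x y) \<Longrightarrow> cmp A x x y (idm A x) a = a" using A_klincat unfolding klincat_def by (elim conjE) blast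
lemma A_idm_right[simp]: "a \<in> kcarrier (AM x y) \<Longrightarrow> cmp A x y y a (idm A y) = a" using A_klincat unfolding klincat_def by (elim conjE) blast

lemma H_kcoalgebra: "kcoalgebra (HM x y) (cop H x y) (cou H x y)" using SH unfolding semi_hopf_cat_def by (elim conjE) blast
lemma cop_klin: "klin (HM x y) (kt (HM x y) (HM x y)) (cop H x y)" using H_kcoalgebra[of x y] unfolding kcoalgebra_def by (elim conjE) blast
lemma cou_klin_scalar: "klin_scalar (HM x y) (cou H x y)" using H_kcoalgebra[of x y] unfolding kcoalgebra_def by (elim conjE) blast
lemma cop_coassoc: "h \<in> kcarrier (HM x y) \<Longrightarrow>
        tlift (kt (kt (HM x y) (HM x y)) (HM x y)) (\<lambda>a b. ktmk (kt (HM x y) (HM x y)) (HM x y) (cop H x y a) b) (cop H x y h) =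
        tlift (kt (kt (HM x y) (HM x y)) (HM x y))
          (\<lambda>a b. tlift (kt (kt (HM x y) (HM x y)) (HM x y)) (\<lambda>c d. ktmk (kt (HM x y) (HM x y)) (HM x y) (ktmk (HM x y) (HM x y) a c) d) (cop H x y b)) (cop H x y h)"
  using H_kcoalgebra[of x y] unfolding kcoalgebra_def by (elim conjE) blast
lemma cop_counit: "h \<in> kcarrier (HM x y) \<Longrightarrow> tlift (HM x y) (\<lambda>a b. ksmult (HM x y) (cou H x y a) b) (cop H x y h) = h"
  using H_kcoalgebra[of x y] unfolding kcoalgebra_def by (elim conjE) blast
lemma coact_klin: "klin (AM x y) (kt (AM x y) (HM x y)) (coact A x y)"
  using CA[unfolded comodule_cat_def, THEN conjunct2, THEN conjunct1] by blast
lemma coact_coassoc: "a \<in> kcarrier (AM x y) \<Longrightarrow>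
        tlift (kt (kt (AM x y) (HM x y)) (HM x y))
          (\<lambda>b g. ktmk (kt (AM x y) (HM x y)) (HM x y) (coact A x y b) g)
          (coact A x y a) =
        tlift (kt (kt (AM x y) (HM x y)) (HM x y))
          (\<lambda>b g. tlift (kt (kt (AM x y) (HM x y)) (HM x y))
             (\<lambda>g1 g2. ktmk (kt (AM x y) (HM x y)) (HM x y)
                         (ktmk (AM x y) (HM x y) b g1) g2)
             (cop H x y g))
          (coact A x y a)"
  using CA[unfolded comodule_cat_def, THEN conjunct2, THEN conjunct2, THEN conjunct1] by blast
lemma coact_counit: "a \<in> kcarrier (AM x y) \<Longrightarrow>
        tlift (AM x y) (\<lambda>b g. ksmult (AM x y) (cou H x y g) b) (coact A x y a) = a"
  using CA[unfolded comodule_cat_def, THEN conjunct2, THEN conjunct2, THEN conjunct2, THEN conjunct1] by blast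
lemma coact_mult: "a \<in> kcarrier (AM x y) \<Longrightarrow> b \<in> kcarrier (AM y z) \<Longrightarrow>
        coact A x z (cmp A x y z a b) =
          tlift (kt (AM x z) (HM x z))
            (\<lambda>a0 a1. tlift (kt (AM x z) (HM x z))
               (\<lambda>b0 b1. ktmk (AM x z) (HM x z) (cmp A x y z a0 b0) (cmp H x y z a1 b1))
               (coact A y z b))
            (coact A x y a)"
  using CA[unfolded comodule_cat_def, THEN conjunct2, THEN conjunct2, THEN conjunct2, THEN conjunct2, THEN conjunct1] by blast
lemma coact_id: "coact A x x (idm A x) = ktmk (AM x x) (HM x x) (idm A x) (idm H x)"
  using CA[unfolded comodule_cat_def, THEN conjunct2, THEN conjunct2, THEN conjunct2, THEN conjunct2, THEN conjunct2] by blast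

lemma klin_A_cmp_left: "klin U (AM x y) F \<Longrightarrow> b \<in> kcarrier (AM y z) \<Longrightarrow> klin U (AM x z) (\<lambda>t. cmp A x y z (F t) b)"
  by (rule klin_kbilin_left[OF A_cmp_kbilin])
lemma klin_A_cmp_right: "klin U (AM y z) F \<Longrightarrow> a \<in> kcarrier (AM x y) \<Longrightarrow> klin U (AM x z) (\<lambda>t. cmp A x y z a (F t))"
  by (rule klin_kbilin_right[OF A_cmp_kbilin])
lemma klin_H_cmp_left: "klin U (HM x y) F \<Longrightarrow> b \<in> kcarrier (HM y z) \<Longrightarrow> klin U (HM x z) (\<lambda>t. cmp H x y z (F t) b)"
  by (rule klin_kbilin_left[OF H_cmp_kbilin])
lemma klin_H_cmp_right: "klin U (HM y z) F \<Longrightarrow> a \<in> kcarrier (HM x y) \<Longrightarrow> klin U (HM x z) (\<lambda>t. cmp H x y z a (F t))"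
  by (rule klin_kbilin_right[OF H_cmp_kbilin])
lemma klin_coact_arg: "klin U (AM x y) F \<Longrightarrow> klin U (kt (AM x y) (HM x y)) (\<lambda>t. coact A x y (F t))"
  by (rule klin_comp[OF _ coact_klin])
lemma klin_cop_arg: "klin U (HM x y) F \<Longrightarrow> klin U (kt (HM x y) (HM x y)) (\<lambda>t. cop H x y (F t))"
  by (rule klin_comp[OF _ cop_klin])
lemma coact_closed: "a \<in> kcarrier (AM x y) \<Longrightarrow> coact A x y a \<in> kcarrier (kt (AM x y) (HM x y))"
  by (rule klin_closed[OF coact_klin])
lemma cop_closed: "a \<in> kcarrier (HM x y) \<Longrightarrow> cop H x y a \<in> kcarrier (kt (HM x y) (HM x y))"
  by (rule klin_closed[OF cop_klin])

lemma klin_cou_smult: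
  assumes P: "kmodule P" and F: "klin U (HM x y) F" and a: "a \<in> kcarrier P"
  shows "klin U P (\<lambda>t. ksmult P (cou H x y (F t)) a)"
proof (rule klinI)
  fix t assume "t \<in> kcarrier U" thus "ksmult P (cou H x y (F t)) a \<in> kcarrier P" using kmodule_smult_closed[OF P a] by simp
next
  fix t t' assume t: "t \<in> kcarrier U" and t': "t' \<in> kcarrier U"
  have "cou H x y (F (kadd U t t')) = cou H x y (F t) + cou H x y (F t')"
    using klin_add[OF F t t'] cou_klin_scalar klin_closed[OF F] t t' unfolding klin_scalar_def by simp
  thus "ksmult P (cou H x y (F (kadd U t t'))) a = kadd P (ksmult P (cou H x y (F t)) a) (ksmult P (cou H x y (F t')) a)"
    using kmodule_add_smult_distrib[OF P a] by simp
next
  fix c t assume t: "t \<in> kcarrier U"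
  have "cou H x y (F (ksmult U c t)) = c * cou H x y (F t)"
    using klin_smult[OF F t] cou_klin_scalar klin_closed[OF F] t unfolding klin_scalar_def by simp
  thus "ksmult P (cou H x y (F (ksmult U c t))) a = ksmult P c (ksmult P (cou H x y (F t)) a)"
    using kmodule_smult_smult[OF P a] by simp
qed

lemma balanced_tensor_btens: "balanced_tensor (AM z x) (AM x y) (bbal H A z x y)"
  unfolding balanced_tensor_def bbal_def coinv_def by auto

lemmas klin_intros = kbilinI klin_tlift_param klin_tlift_arg klin_tmk_left klin_tmk_right klin_smult_arg klin_A_cmp_left klin_A_cmp_right klin_H_cmp_left klin_H_cmp_right
  klin_coact_arg klin_cop_arg klin_cou_smult klin_id coact_klin cop_klin
lemmas closed_intros = lift_closed tensor_tmk_closed kmodule_smult_closed A_cmp_closed H_cmp_closed A_idm_closed H_idm_closed coact_closed cop_closed balanced_tensor_kt balanced_tensor_btens kt_kmodule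
  A_kmodule H_kmodule balanced_empty

lemma balanced_bbalI:
  assumes "\<And>a c r. a \<in> kcarrier (AM z x) \<Longrightarrow> c \<in> coinv H A x \<Longrightarrow> r \<in> kcarrier (AM x y) \<Longrightarrow>
     phi (cmp A z x x a c) r = phi a (cmp A x x y c r)"
  shows "balanced (bbal H A z x y) phi"
  unfolding balanced_def bbal_def using assms by auto

lemma coinvD: "c \<in> coinv H A x \<Longrightarrow> c \<in> kcarrier (AM x x)"
  "c \<in> coinv H A x \<Longrightarrow> coact A x x c = ktmk (AM x x) (HM x x) c (idm H x)"
  unfolding coinv_def by auto

lemma btmk_coinv_shift: "a \<in> kcarrier (AM z x) \<Longrightarrow> c \<in> coinv H A x \<Longrightarrow> r \<in> kcarrier (AM x y) \<Longrightarrow>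
  tmk (AM z x) (AM x y) (bbal H A z x y) (cmp A z x x a c) r = tmk (AM z x) (AM x y) (bbal H A z x y) a (cmp A x x y c r)"
  using balanced_tensor.tmk_balance[OF balanced_tensor_btens, of "(cmp A z x x a c, r)" "(a, cmp A x x y c r)" z x y]
  unfolding bbal_def by auto

lemma coact_coinv_cmp_left:
  assumes c: "c \<in> coinv H A x" and r: "r \<in> kcarrier (AM x y)"
  shows "coact A x y (cmp A x x y c r) = tlift (kt (AM x y) (HM x y)) (\<lambda>b0 b1. ktmk (AM x y) (HM x y) (cmp A x x y c b0) b1) (coact A x y r)"
proof -
  have cc: "c \<in> kcarrier (AM x x)" by (rule coinvD(1)[OF c])
  have "coact A x y (cmp A x x y c r) = tlift (kt (AM x y) (HM x y))
            (\<lambda>a0 a1. tlift (kt (AM x y) (HM x y))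
               (\<lambda>b0 b1. ktmk (AM x y) (HM x y) (cmp A x x y a0 b0) (cmp H x x y a1 b1))
               (coact A x y r)) (ktmk (AM x x) (HM x x) c (idm H x))"
    using coact_mult[OF cc r] coinvD(2)[OF c] by simp
  also have "\<dots> = tlift (kt (AM x y) (HM x y))
               (\<lambda>b0 b1. ktmk (AM x y) (HM x y) (cmp A x x y c b0) (cmp H x x y (idm H x) b1))
               (coact A x y r)"
    by (rule kt_tlift_tmk; (rule klin_intros closed_intros cc r | assumption)+)
  also have "\<dots> = tlift (kt (AM x y) (HM x y)) (\<lambda>b0 b1. ktmk (AM x y) (HM x y) (cmp A x x y c b0) b1) (coact A x y r)"
    by (rule lift_cong, (rule closed_intros r | assumption)+) simp
  finally show ?thesis .
qed

lemma coact_coinv_cmp_right: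
  assumes c: "c \<in> coinv H A y" and r: "r \<in> kcarrier (AM x y)"
  shows "coact A x y (cmp A x y y r c) = tlift (kt (AM x y) (HM x y)) (\<lambda>a0 a1. ktmk (AM x y) (HM x y) (cmp A x y y a0 c) a1) (coact A x y r)"
proof -
  have cc: "c \<in> kcarrier (AM y y)" by (rule coinvD(1)[OF c])
  have "coact A x y (cmp A x y y r c) = tlift (kt (AM x y) (HM x y))
            (\<lambda>a0 a1. tlift (kt (AM x y) (HM x y))
               (\<lambda>b0 b1. ktmk (AM x y) (HM x y) (cmp A x y y a0 b0) (cmp H x y y a1 b1))
               (ktmk (AM y y) (HM y y) c (idm H y))) (coact A x y r)"
    using coact_mult[OF r cc] coinvD(2)[OF c] by simp
  also have "\<dots> = tlift (kt (AM x y) (HM x y)) (\<lambda>a0 a1. ktmk (AM x y) (HM x y) (cmp A x y y a0 c) a1) (coact A x y r)"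
  proof (rule lift_cong, (rule closed_intros r | assumption)+)
    fix a0 a1 assume a0: "a0 \<in> kcarrier (AM x y)" and a1: "a1 \<in> kcarrier (HM x y)"
    have "tlift (kt (AM x y) (HM x y))
               (\<lambda>b0 b1. ktmk (AM x y) (HM x y) (cmp A x y y a0 b0) (cmp H x y y a1 b1))
               (ktmk (AM y y) (HM y y) c (idm H y)) = ktmk (AM x y) (HM x y) (cmp A x y y a0 c) (cmp H x y y a1 (idm H y))"
      by (rule kt_tlift_tmk; (rule klin_intros closed_intros cc a0 a1 | assumption)+)
    thus "tlift (kt (AM x y) (HM x y))
               (\<lambda>b0 b1. ktmk (AM x y) (HM x y) (cmp A x y y a0 b0) (cmp H x y y a1 b1))
               (ktmk (AM y y) (HM y y) c (idm H y)) = ktmk (AM x y) (HM x y) (cmp A x y y a0 c) a1"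
      using a1 by simp
  qed
  finally show ?thesis .
qed

abbreviation "BT z x y \<equiv> tensor (AM z x) (AM x y) (bbal H A z x y)"

abbreviation "TB z x y \<equiv> tmk (AM z x) (AM x y) (bbal H A z x y)"

lemma btens_kmodule[intro]: "kmodule (BT z x y)" by (rule balanced_tensor.tensor_kmodule[OF balanced_tensor_btens])

definition can_pair :: "'x \<Rightarrow> 'x \<Rightarrow> 'x \<Rightarrow> 'a \<Rightarrow> 'a \<Rightarrow> ('a \<times> 'h \<Rightarrow> 'k) set" where
  "can_pair z x y a a' = tlift (kt (AM z y) (HM x y))
        (\<lambda>c g. ktmk (AM z y) (HM x y) (cmp A z x y a c) g) (coact A x y a')"

lemma can_pair_kbilin: "kbilin (AM z x) (AM x y) (kt (AM z y) (HM x y)) (can_pair z x y)"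
  unfolding can_pair_def by (rule klin_intros closed_intros | assumption)+

lemma can_pair_balanced: "balanced (bbal H A z x y) (can_pair z x y)"
proof (rule balanced_bbalI)
  fix a c r assume a: "a \<in> kcarrier (AM z x)" and c: "c \<in> coinv H A x" and r: "r \<in> kcarrier (AM x y)"
  have cc: "c \<in> kcarrier (AM x x)" by (rule coinvD(1)[OF c])
  let ?G = "tlift (kt (AM z y) (HM x y)) (\<lambda>c' g. ktmk (AM z y) (HM x y) (cmp A z x y a c') g)"
  have "can_pair z x y a (cmp A x x y c r) = ?G (tlift (kt (AM x y) (HM x y)) (\<lambda>b0 b1. ktmk (AM x y) (HM x y) (cmp A x x y c b0) b1) (coact A x y r))"
    unfolding can_pair_def coact_coinv_cmp_left[OF c r] ..
  also have "\<dots> = tlift (kt (AM z y) (HM x y)) (\<lambda>b0 b1. ?G (ktmk (AM x y) (HM x y) (cmp A x x y c b0) b1)) (coact A x y r)"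
    by (rule lift_comp; (rule klin_intros closed_intros balanced_tensor.tlift_klin cc r a | assumption)+)
  also have "\<dots> = tlift (kt (AM z y) (HM x y)) (\<lambda>b0 b1. ktmk (AM z y) (HM x y) (cmp A z x y a (cmp A x x y c b0)) b1) (coact A x y r)"
  proof (rule lift_cong, (rule closed_intros r | assumption)+)
    fix b0 b1 assume b0: "b0 \<in> kcarrier (AM x y)" and b1: "b1 \<in> kcarrier (HM x y)"
    show "?G (ktmk (AM x y) (HM x y) (cmp A x x y c b0) b1) = ktmk (AM z y) (HM x y) (cmp A z x y a (cmp A x x y c b0)) b1"
      by (rule kt_tlift_tmk; (rule klin_intros closed_intros cc a b0 b1 | assumption)+)
  qed
  also have "\<dots> = can_pair z x y (cmp A z x x a c) r"
    unfolding can_pair_def by (rule lift_cong, (rule closed_intros r | assumption)+) (simp add: A_cmp_assoc[OF a cc])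
  finally show "can_pair z x y (cmp A z x x a c) r = can_pair z x y a (cmp A x x y c r)" ..
qed

lemma can_eq_lift: "can H A z x y = tlift (kt (AM z y) (HM x y)) (can_pair z x y)"
  unfolding can_def can_pair_def ..

lemma can_klin: "klin (BT z x y) (kt (AM z y) (HM x y)) (can H A z x y)"
  unfolding can_eq_lift by (rule lift_klin[OF balanced_tensor_btens kt_kmodule[OF A_kmodule H_kmodule] can_pair_kbilin can_pair_balanced])

lemma can_tmk: "a \<in> kcarrier (AM z x) \<Longrightarrow> a' \<in> kcarrier (AM x y) \<Longrightarrow>
   can H A z x y (tmk (AM z x) (AM x y) (bbal H A z x y) a a') = can_pair z x y a a'"
  unfolding can_eq_lift by (rule lift_tmk[OF balanced_tensor_btens kt_kmodule[OF A_kmodule H_kmodule] can_pair_kbilin can_pair_balanced])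

lemma A_cmp_balanced: "balanced (bbal H A z x y) (cmp A z x y)"
  by (rule balanced_bbalI) (simp add: A_cmp_assoc coinvD)

lemma mult_klin: "klin (BT z x y) (AM z y) (tlift (AM z y) (cmp A z x y))"
  by (rule lift_klin[OF balanced_tensor_btens A_kmodule A_cmp_kbilin A_cmp_balanced])

definition counit_act :: "'x \<Rightarrow> 'x \<Rightarrow> ('a \<times> 'h \<Rightarrow> 'k) set \<Rightarrow> 'a" where
  "counit_act x y = tlift (AM y y) (\<lambda>a g. ksmult (AM y y) (cou H x y g) a)"

lemma counit_act_kbilin: "kbilin (AM y y) (HM x y) (AM y y) (\<lambda>a g. ksmult (AM y y) (cou H x y g) a)"
  by (rule klin_intros closed_intros | assumption)+

lemma counit_act_klin: "klin (kt (AM y y) (HM x y)) (AM y y) (counit_act x y)"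
  unfolding counit_act_def by (rule lift_klin; (rule klin_intros closed_intros counit_act_kbilin | assumption)+)

lemma counit_act_tmk: "a \<in> kcarrier (AM y y) \<Longrightarrow> g \<in> kcarrier (HM x y) \<Longrightarrow> counit_act x y (ktmk (AM y y) (HM x y) a g) = ksmult (AM y y) (cou H x y g) a"
  unfolding counit_act_def by (rule kt_tlift_tmk[OF _ _ _ counit_act_kbilin]) auto

lemma counit_act_can: assumes X: "X \<in> kcarrier (BT y x y)"
  shows "counit_act x y (can H A y x y X) = tlift (AM y y) (cmp A y x y) X"
proof (rule lift_ext[OF X balanced_tensor_btens A_kmodule klin_comp[OF can_klin counit_act_klin] mult_klin])
  fix l r assume l: "l \<in> kcarrier (AM y x)" and r: "r \<in> kcarrier (AM x y)"
  have "counit_act x y (can H A y x y (tmk (AM y x) (AM x y) (bbal H A y x y) l r)) = counit_act x y (can_pair y x y l r)"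
    using can_tmk[OF l r] by simp
  also have "\<dots> = tlift (AM y y) (\<lambda>c g. counit_act x y (ktmk (AM y y) (HM x y) (cmp A y x y l c) g)) (coact A x y r)"
    unfolding can_pair_def by (rule lift_comp; (rule klin_intros closed_intros counit_act_klin l r | assumption)+)
  also have "\<dots> = tlift (AM y y) (\<lambda>c g. cmp A y x y l (ksmult (AM x y) (cou H x y g) c)) (coact A x y r)"
  proof (rule lift_cong, (rule closed_intros r | assumption)+)
    fix c g assume c: "c \<in> kcarrier (AM x y)" and g: "g \<in> kcarrier (HM x y)"
    show "counit_act x y (ktmk (AM y y) (HM x y) (cmp A y x y l c) g) = cmp A y x y l (ksmult (AM x y) (cou H x y g) c)"
      using counit_act_tmk[OF A_cmp_closed[OF l c] g] klin_smult[OF kbilin_klin_right[OF A_cmp_kbilin l] c] by simp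
  qed
  also have "\<dots> = cmp A y x y l (tlift (AM x y) (\<lambda>c g. ksmult (AM x y) (cou H x y g) c) (coact A x y r))"
    by (rule lift_comp[symmetric]; (rule klin_intros closed_intros kbilin_klin_right[OF A_cmp_kbilin] l r | assumption)+)
  also have "\<dots> = cmp A y x y l r" using coact_counit[OF r] by simp
  also have "\<dots> = tlift (AM y y) (cmp A y x y) (tmk (AM y x) (AM x y) (bbal H A y x y) l r)"
    by (rule lift_tmk[OF balanced_tensor_btens A_kmodule A_cmp_kbilin A_cmp_balanced l r, symmetric])
  finally show "counit_act x y (can H A y x y (tmk (AM y x) (AM x y) (bbal H A y x y) l r)) =
      tlift (AM y y) (cmp A y x y) (tmk (AM y x) (AM x y) (bbal H A y x y) l r)" .
qed

lemma coact_coassoc_lift: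
  assumes r: "r \<in> kcarrier (AM x y)" and P: "kmodule P" and F: "ktril (AM x y) (HM x y) (HM x y) P F"
  shows "tlift P (\<lambda>b g. tlift P (\<lambda>b0 b1. F b0 b1 g) (coact A x y b)) (coact A x y r) =
         tlift P (\<lambda>b g. tlift P (\<lambda>g1 g2. F b g1 g2) (cop H x y g)) (coact A x y r)"
proof -
  note K = tril_lift_klin[OF A_kmodule H_kmodule H_kmodule P F]
  note Kt = tril_lift_tmk[OF A_kmodule H_kmodule H_kmodule P F]
  note Kt2 = tril_lift_tmk_tmk[OF A_kmodule H_kmodule H_kmodule P F]
  have "tlift P (\<lambda>b g. tlift P (\<lambda>b0 b1. F b0 b1 g) (coact A x y b)) (coact A x y r) =
        tlift P (\<lambda>b g. tril_lift P F (ktmk (kt (AM x y) (HM x y)) (HM x y) (coact A x y b) g)) (coact A x y r)"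
    by (rule lift_cong, (rule closed_intros r | assumption)+) (simp add: Kt coact_closed)
  also have "\<dots> = tril_lift P F (tlift (kt (kt (AM x y) (HM x y)) (HM x y))
          (\<lambda>b g. ktmk (kt (AM x y) (HM x y)) (HM x y) (coact A x y b) g) (coact A x y r))"
    by (rule lift_comp[symmetric]; (rule klin_intros closed_intros K P r | assumption)+)
  also have "\<dots> = tril_lift P F (tlift (kt (kt (AM x y) (HM x y)) (HM x y))
          (\<lambda>b g. tlift (kt (kt (AM x y) (HM x y)) (HM x y))
             (\<lambda>g1 g2. ktmk (kt (AM x y) (HM x y)) (HM x y)
                         (ktmk (AM x y) (HM x y) b g1) g2)
             (cop H x y g)) (coact A x y r))"
    unfolding coact_coassoc[OF r] ..
  also have "\<dots> = tlift P (\<lambda>b g. tril_lift P F (tlift (kt (kt (AM x y) (HM x y)) (HM x y))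
             (\<lambda>g1 g2. ktmk (kt (AM x y) (HM x y)) (HM x y)
                         (ktmk (AM x y) (HM x y) b g1) g2)
             (cop H x y g))) (coact A x y r)"
    by (rule lift_comp; (rule klin_intros closed_intros K P r | assumption)+)
  also have "\<dots> = tlift P (\<lambda>b g. tlift P (\<lambda>g1 g2. tril_lift P F (ktmk (kt (AM x y) (HM x y)) (HM x y)
                         (ktmk (AM x y) (HM x y) b g1) g2)) (cop H x y g)) (coact A x y r)"
    by (rule lift_cong, (rule closed_intros r | assumption)+, rule lift_comp; (rule klin_intros closed_intros K P r | assumption)+)
  also have "\<dots> = tlift P (\<lambda>b g. tlift P (\<lambda>g1 g2. F b g1 g2) (cop H x y g)) (coact A x y r)"
    by (rule lift_cong, (rule closed_intros r | assumption)+, rule lift_cong, (rule closed_intros | assumption)+) (simp add: Kt2)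
  finally show ?thesis .
qed

lemma cop_coassoc_lift:
  assumes h: "h \<in> kcarrier (HM x y)" and P: "kmodule P" and F: "ktril (HM x y) (HM x y) (HM x y) P F"
  shows "tlift P (\<lambda>a b. tlift P (\<lambda>c d. F c d b) (cop H x y a)) (cop H x y h) =
         tlift P (\<lambda>a b. tlift P (\<lambda>c d. F a c d) (cop H x y b)) (cop H x y h)"
proof -
  note K = tril_lift_klin[OF H_kmodule H_kmodule H_kmodule P F]
  note Kt = tril_lift_tmk[OF H_kmodule H_kmodule H_kmodule P F]
  note Kt2 = tril_lift_tmk_tmk[OF H_kmodule H_kmodule H_kmodule P F]
  have "tlift P (\<lambda>a b. tlift P (\<lambda>c d. F c d b) (cop H x y a)) (cop H x y h) =
        tlift P (\<lambda>a b. tril_lift P F (ktmk (kt (HM x y) (HM x y)) (HM x y) (cop H x y a) b)) (cop H x y h)"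
    by (rule lift_cong, (rule closed_intros h | assumption)+) (simp add: Kt cop_closed)
  also have "\<dots> = tril_lift P F (tlift (kt (kt (HM x y) (HM x y)) (HM x y))
          (\<lambda>a b. ktmk (kt (HM x y) (HM x y)) (HM x y) (cop H x y a) b) (cop H x y h))"
    by (rule lift_comp[symmetric]; (rule klin_intros closed_intros K P h | assumption)+)
  also have "\<dots> = tril_lift P F (tlift (kt (kt (HM x y) (HM x y)) (HM x y))
          (\<lambda>a b. tlift (kt (kt (HM x y) (HM x y)) (HM x y)) (\<lambda>c d. ktmk (kt (HM x y) (HM x y)) (HM x y) (ktmk (HM x y) (HM x y) a c) d) (cop H x y b)) (cop H x y h))"
    unfolding cop_coassoc[OF h] ..
  also have "\<dots> = tlift P (\<lambda>a b. tril_lift P F (tlift (kt (kt (HM x y) (HM x y)) (HM x y)) (\<lambda>c d. ktmk (kt (HM x y) (HM x y)) (HM x y) (ktmk (HM x y) (HM x y) a c) d) (cop H x y b))) (cop H x y h)"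
    by (rule lift_comp; (rule klin_intros closed_intros K P h | assumption)+)
  also have "\<dots> = tlift P (\<lambda>a b. tlift P (\<lambda>c d. tril_lift P F (ktmk (kt (HM x y) (HM x y)) (HM x y) (ktmk (HM x y) (HM x y) a c) d)) (cop H x y b)) (cop H x y h)"
    by (rule lift_cong, (rule closed_intros h | assumption)+, rule lift_comp; (rule klin_intros closed_intros K P h | assumption)+)
  also have "\<dots> = tlift P (\<lambda>a b. tlift P (\<lambda>c d. F a c d) (cop H x y b)) (cop H x y h)"
    by (rule lift_cong, (rule closed_intros h | assumption)+, rule lift_cong, (rule closed_intros | assumption)+) (simp add: Kt2)
  finally show ?thesis .
qed

lemma cop_counit_lift:
  assumes h: "h \<in> kcarrier (HM x y)" and P: "kmodule P" and V: "klin (HM x y) P V"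
  shows "tlift P (\<lambda>a b. ksmult P (cou H x y a) (V b)) (cop H x y h) = V h"
proof -
  have "V h = V (tlift (HM x y) (\<lambda>a b. ksmult (HM x y) (cou H x y a) b) (cop H x y h))"
    using cop_counit[OF h] by simp
  also have "\<dots> = tlift P (\<lambda>a b. V (ksmult (HM x y) (cou H x y a) b)) (cop H x y h)"
    by (rule lift_comp; (rule klin_intros closed_intros V P h | assumption)+)
  also have "\<dots> = tlift P (\<lambda>a b. ksmult P (cou H x y a) (V b)) (cop H x y h)"
    by (rule lift_cong, (rule closed_intros h | assumption)+) (simp add: klin_smult[OF V])
  finally show ?thesis ..
qed

lemma coact_cmp_lift:
  assumes a: "a \<in> kcarrier (AM x y)" and b: "b \<in> kcarrier (AM y z)" and P: "kmodule P"
    and Fm: "kbilin (AM x z) (HM x z) P Fm"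
  shows "tlift P Fm (coact A x z (cmp A x y z a b)) =
     tlift P (\<lambda>a0 a1. tlift P (\<lambda>b0 b1. Fm (cmp A x y z a0 b0) (cmp H x y z a1 b1)) (coact A y z b)) (coact A x y a)"
proof -
  note TL = lift_klin[OF balanced_tensor_kt[OF A_kmodule H_kmodule] P Fm balanced_empty]
  have "tlift P Fm (coact A x z (cmp A x y z a b)) = tlift P Fm (tlift (kt (AM x z) (HM x z))
            (\<lambda>a0 a1. tlift (kt (AM x z) (HM x z))
               (\<lambda>b0 b1. ktmk (AM x z) (HM x z) (cmp A x y z a0 b0) (cmp H x y z a1 b1))
               (coact A y z b)) (coact A x y a))"
    unfolding coact_mult[OF a b] ..
  also have "\<dots> = tlift P (\<lambda>a0 a1. tlift P Fm (tlift (kt (AM x z) (HM x z))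
               (\<lambda>b0 b1. ktmk (AM x z) (HM x z) (cmp A x y z a0 b0) (cmp H x y z a1 b1))
               (coact A y z b))) (coact A x y a)"
    by (rule lift_comp; (rule klin_intros closed_intros TL P a b | assumption)+)
  also have "\<dots> = tlift P (\<lambda>a0 a1. tlift P (\<lambda>b0 b1. tlift P Fm (ktmk (AM x z) (HM x z) (cmp A x y z a0 b0) (cmp H x y z a1 b1))) (coact A y z b)) (coact A x y a)"
    by (rule lift_cong, (rule closed_intros a | assumption)+, rule lift_comp; (rule klin_intros closed_intros TL P a b | assumption)+)
  also have "\<dots> = tlift P (\<lambda>a0 a1. tlift P (\<lambda>b0 b1. Fm (cmp A x y z a0 b0) (cmp H x y z a1 b1)) (coact A y z b)) (coact A x y a)"
    by (rule lift_cong, (rule closed_intros a | assumption)+, rule lift_cong, (rule closed_intros b | assumption)+,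
        rule kt_tlift_tmk[OF A_kmodule H_kmodule P Fm]) (auto intro: closed_intros)
  finally show ?thesis .
qed

end

section \<open>The translation map of a Galois extension\<close>

locale galois_ext_ctx = comodule_cat_ctx H A
  for H :: "('x, 'k::comm_ring_1, 'h) shcat" and A :: "('x, 'k, 'a, 'h) comcat" +
  assumes GAL: "galois_ext H A"
begin

lemma can_bij: "bij_betw (can H A z x y) (kcarrier (BT z x y)) (kcarrier (kt (AM z y) (HM x y)))"
  using GAL unfolding galois_ext_def btens_def by blast

lemma can_inj: "X \<in> kcarrier (BT z x y) \<Longrightarrow> Y \<in> kcarrier (BT z x y) \<Longrightarrow> can H A z x y X = can H A z x y Y \<Longrightarrow> X = Y"
  using can_bij[of z x y] unfolding bij_betw_def inj_on_def by blast

lemma gam_closed[intro]: "h \<in> kcarrier (HM x y) \<Longrightarrow> gam H A x y h \<in> kcarrier (BT y x y)"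
  unfolding gam_def btens_def using can_bij[of y x y]
  by (intro inv_into_into) (auto simp: bij_betw_def intro: tensor_tmk_closed balanced_tensor_kt)

lemma can_gam: "h \<in> kcarrier (HM x y) \<Longrightarrow> can H A y x y (gam H A x y h) = ktmk (AM y y) (HM x y) (idm A y) h"
  unfolding gam_def btens_def using can_bij[of y x y]
  by (intro f_inv_into_f) (auto simp: bij_betw_def intro: tensor_tmk_closed balanced_tensor_kt)

lemma gam_klin: "klin (HM x y) (BT y x y) (gam H A x y)"
proof (rule klinI)
  fix h assume "h \<in> kcarrier (HM x y)" thus "gam H A x y h \<in> kcarrier (BT y x y)" by auto
next
  fix h h' assume h: "h \<in> kcarrier (HM x y)" and h': "h' \<in> kcarrier (HM x y)"
  show "gam H A x y (kadd (HM x y) h h') = kadd (BT y x y) (gam H A x y h) (gam H A x y h')"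
  proof (rule can_inj)
    show "gam H A x y (kadd (HM x y) h h') \<in> kcarrier (BT y x y)" using kmodule_add_closed[OF H_kmodule h h'] by auto
    show "kadd (BT y x y) (gam H A x y h) (gam H A x y h') \<in> kcarrier (BT y x y)"
      using h h' by (intro kmodule_add_closed[OF btens_kmodule]) auto
    show "can H A y x y (gam H A x y (kadd (HM x y) h h')) = can H A y x y (kadd (BT y x y) (gam H A x y h) (gam H A x y h'))"
      unfolding klin_add[OF can_klin gam_closed[OF h] gam_closed[OF h']] can_gam[OF h] can_gam[OF h']
        can_gam[OF kmodule_add_closed[OF H_kmodule h h']]
      by (rule klin_add[OF klin_tmk_right[OF balanced_tensor_kt klin_id]]) (auto simp: h h')
  qed
next
  fix c h assume h: "h \<in> kcarrier (HM x y)"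
  show "gam H A x y (ksmult (HM x y) c h) = ksmult (BT y x y) c (gam H A x y h)"
  proof (rule can_inj)
    show "gam H A x y (ksmult (HM x y) c h) \<in> kcarrier (BT y x y)" using kmodule_smult_closed[OF H_kmodule h] by auto
    show "ksmult (BT y x y) c (gam H A x y h) \<in> kcarrier (BT y x y)"
      using h by (intro kmodule_smult_closed[OF btens_kmodule]) auto
    show "can H A y x y (gam H A x y (ksmult (HM x y) c h)) = can H A y x y (ksmult (BT y x y) c (gam H A x y h))"
      unfolding klin_smult[OF can_klin gam_closed[OF h]] can_gam[OF h] can_gam[OF kmodule_smult_closed[OF H_kmodule h]]
      by (rule klin_smult[OF klin_tmk_right[OF balanced_tensor_kt klin_id]]) (auto simp: h)
  qed
qed

lemma gam_counit: assumes h: "h \<in> kcarrier (HM x y)"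
  shows "tlift (AM y y) (cmp A y x y) (gam H A x y h) = ksmult (AM y y) (cou H x y h) (idm A y)"
  using counit_act_can[OF gam_closed[OF h]] can_gam[OF h] counit_act_tmk[OF A_idm_closed h] by simp

lemma lmult_btens_kbilin: "b \<in> kcarrier (AM y y) \<Longrightarrow> kbilin (AM y x) (AM x y) (BT y x y) (\<lambda>l r. TB y x y (cmp A y y x b l) r)"
  by (rule klin_intros closed_intros | assumption)+
lemma rmult_btens_kbilin: "b \<in> kcarrier (AM y y) \<Longrightarrow> kbilin (AM y x) (AM x y) (BT y x y) (\<lambda>l r. TB y x y l (cmp A x y y r b))"
  by (rule klin_intros closed_intros | assumption)+

lemma lmult_btens_balanced: "b \<in> kcarrier (AM y y) \<Longrightarrow> balanced (bbal H A y x y) (\<lambda>l r. TB y x y (cmp A y y x b l) r)"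
proof (rule balanced_bbalI)
  fix l c r assume b: "b \<in> kcarrier (AM y y)" and l: "l \<in> kcarrier (AM y x)" and c: "c \<in> coinv H A x" and r: "r \<in> kcarrier (AM x y)"
  have cc: "c \<in> kcarrier (AM x x)" by (rule coinvD(1)[OF c])
  show "TB y x y (cmp A y y x b (cmp A y x x l c)) r = TB y x y (cmp A y y x b l) (cmp A x x y c r)"
    using A_cmp_assoc[OF b l cc] btmk_coinv_shift[OF A_cmp_closed[OF b l] c r] by simp
qed

lemma rmult_btens_balanced: "b \<in> kcarrier (AM y y) \<Longrightarrow> balanced (bbal H A y x y) (\<lambda>l r. TB y x y l (cmp A x y y r b))"
proof (rule balanced_bbalI)
  fix l c r assume b: "b \<in> kcarrier (AM y y)" and l: "l \<in> kcarrier (AM y x)" and c: "c \<in> coinv H A x" and r: "r \<in> kcarrier (AM x y)"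
  have cc: "c \<in> kcarrier (AM x x)" by (rule coinvD(1)[OF c])
  show "TB y x y (cmp A y x x l c) (cmp A x y y r b) = TB y x y l (cmp A x y y (cmp A x x y c r) b)"
    using A_cmp_assoc[OF cc r b] btmk_coinv_shift[OF l c A_cmp_closed[OF r b]] by simp
qed

lemma lmult_Ayy_kt_kbilin: "b \<in> kcarrier (AM y y) \<Longrightarrow> kbilin (AM y y) (HM x y) (kt (AM y y) (HM x y)) (\<lambda>a g. ktmk (AM y y) (HM x y) (cmp A y y y b a) g)"
  by (rule klin_intros closed_intros | assumption)+
lemma rmult_Ayy_kt_kbilin: "b \<in> kcarrier (AM y y) \<Longrightarrow> kbilin (AM y y) (HM x y) (kt (AM y y) (HM x y)) (\<lambda>a g. ktmk (AM y y) (HM x y) (cmp A y y y a b) g)"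
  by (rule klin_intros closed_intros | assumption)+

lemma can_lmult:
  assumes b: "b \<in> kcarrier (AM y y)" and X: "X \<in> kcarrier (BT y x y)"
  shows "can H A y x y (tlift (BT y x y) (\<lambda>l r. TB y x y (cmp A y y x b l) r) X) =
         tlift (kt (AM y y) (HM x y)) (\<lambda>a g. ktmk (AM y y) (HM x y) (cmp A y y y b a) g) (can H A y x y X)"
proof (rule lift_ext[OF X balanced_tensor_btens kt_kmodule[OF A_kmodule H_kmodule]])
  show "klin (BT y x y) (kt (AM y y) (HM x y)) (\<lambda>X. can H A y x y (tlift (BT y x y) (\<lambda>l r. TB y x y (cmp A y y x b l) r) X))"
    by (rule klin_comp[OF lift_klin[OF balanced_tensor_btens btens_kmodule lmult_btens_kbilin[OF b] lmult_btens_balanced[OF b]] can_klin])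
  show "klin (BT y x y) (kt (AM y y) (HM x y)) (\<lambda>X. tlift (kt (AM y y) (HM x y)) (\<lambda>a g. ktmk (AM y y) (HM x y) (cmp A y y y b a) g) (can H A y x y X))"
    by (rule klin_comp[OF can_klin lift_klin[OF balanced_tensor_kt[OF A_kmodule H_kmodule] kt_kmodule[OF A_kmodule H_kmodule] lmult_Ayy_kt_kbilin[OF b] balanced_empty]])
  fix l r assume l: "l \<in> kcarrier (AM y x)" and r: "r \<in> kcarrier (AM x y)"
  have "can H A y x y (tlift (BT y x y) (\<lambda>l r. TB y x y (cmp A y y x b l) r) (TB y x y l r)) = can_pair y x y (cmp A y y x b l) r"
    using lift_tmk[OF balanced_tensor_btens btens_kmodule lmult_btens_kbilin[OF b] lmult_btens_balanced[OF b] l r] can_tmk[OF A_cmp_closed[OF b l] r] by simp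
  also have "\<dots> = tlift (kt (AM y y) (HM x y)) (\<lambda>c g. tlift (kt (AM y y) (HM x y)) (\<lambda>a g. ktmk (AM y y) (HM x y) (cmp A y y y b a) g) (ktmk (AM y y) (HM x y) (cmp A y x y l c) g)) (coact A x y r)"
    unfolding can_pair_def
  proof (rule lift_cong, (rule closed_intros r | assumption)+)
    fix c g assume c: "c \<in> kcarrier (AM x y)" and g: "g \<in> kcarrier (HM x y)"
    show "ktmk (AM y y) (HM x y) (cmp A y x y (cmp A y y x b l) c) g =
          tlift (kt (AM y y) (HM x y)) (\<lambda>a g. ktmk (AM y y) (HM x y) (cmp A y y y b a) g) (ktmk (AM y y) (HM x y) (cmp A y x y l c) g)"
      using kt_tlift_tmk[OF A_kmodule H_kmodule kt_kmodule[OF A_kmodule H_kmodule] lmult_Ayy_kt_kbilin[OF b] A_cmp_closed[OF l c] g] A_cmp_assoc[OF b l c] by simp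
  qed
  also have "\<dots> = tlift (kt (AM y y) (HM x y)) (\<lambda>a g. ktmk (AM y y) (HM x y) (cmp A y y y b a) g) (can_pair y x y l r)"
    unfolding can_pair_def by (rule lift_comp[symmetric]; (rule klin_intros closed_intros lift_klin lmult_Ayy_kt_kbilin b l r | assumption)+)
  also have "\<dots> = tlift (kt (AM y y) (HM x y)) (\<lambda>a g. ktmk (AM y y) (HM x y) (cmp A y y y b a) g) (can H A y x y (TB y x y l r))"
    using can_tmk[OF l r] by simp
  finally show "can H A y x y (tlift (BT y x y) (\<lambda>l r. TB y x y (cmp A y y x b l) r) (TB y x y l r)) =
     tlift (kt (AM y y) (HM x y)) (\<lambda>a g. ktmk (AM y y) (HM x y) (cmp A y y y b a) g) (can H A y x y (TB y x y l r))" .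
qed

lemma can_rmult:
  assumes bc: "b \<in> coinv H A y" and X: "X \<in> kcarrier (BT y x y)"
  shows "can H A y x y (tlift (BT y x y) (\<lambda>l r. TB y x y l (cmp A x y y r b)) X) =
         tlift (kt (AM y y) (HM x y)) (\<lambda>a g. ktmk (AM y y) (HM x y) (cmp A y y y a b) g) (can H A y x y X)"
proof (rule lift_ext[OF X balanced_tensor_btens kt_kmodule[OF A_kmodule H_kmodule]])
  have b: "b \<in> kcarrier (AM y y)" by (rule coinvD(1)[OF bc])
  show "klin (BT y x y) (kt (AM y y) (HM x y)) (\<lambda>X. can H A y x y (tlift (BT y x y) (\<lambda>l r. TB y x y l (cmp A x y y r b)) X))"
    by (rule klin_comp[OF lift_klin[OF balanced_tensor_btens btens_kmodule rmult_btens_kbilin[OF b] rmult_btens_balanced[OF b]] can_klin])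
  show "klin (BT y x y) (kt (AM y y) (HM x y)) (\<lambda>X. tlift (kt (AM y y) (HM x y)) (\<lambda>a g. ktmk (AM y y) (HM x y) (cmp A y y y a b) g) (can H A y x y X))"
    by (rule klin_comp[OF can_klin lift_klin[OF balanced_tensor_kt[OF A_kmodule H_kmodule] kt_kmodule[OF A_kmodule H_kmodule] rmult_Ayy_kt_kbilin[OF b] balanced_empty]])
  fix l r assume l: "l \<in> kcarrier (AM y x)" and r: "r \<in> kcarrier (AM x y)"
  let ?G = "tlift (kt (AM y y) (HM x y)) (\<lambda>c g. ktmk (AM y y) (HM x y) (cmp A y x y l c) g)"
  have "can H A y x y (tlift (BT y x y) (\<lambda>l r. TB y x y l (cmp A x y y r b)) (TB y x y l r)) = can_pair y x y l (cmp A x y y r b)"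
    using lift_tmk[OF balanced_tensor_btens btens_kmodule rmult_btens_kbilin[OF b] rmult_btens_balanced[OF b] l r] can_tmk[OF l A_cmp_closed[OF r b]] by simp
  also have "\<dots> = ?G (tlift (kt (AM x y) (HM x y)) (\<lambda>a0 a1. ktmk (AM x y) (HM x y) (cmp A x y y a0 b) a1) (coact A x y r))"
    unfolding can_pair_def coact_coinv_cmp_right[OF bc r] ..
  also have "\<dots> = tlift (kt (AM y y) (HM x y)) (\<lambda>a0 a1. ?G (ktmk (AM x y) (HM x y) (cmp A x y y a0 b) a1)) (coact A x y r)"
    by (rule lift_comp; (rule klin_intros closed_intros lift_klin b l r | assumption)+)
  also have "\<dots> = tlift (kt (AM y y) (HM x y)) (\<lambda>c g. tlift (kt (AM y y) (HM x y)) (\<lambda>a g. ktmk (AM y y) (HM x y) (cmp A y y y a b) g) (ktmk (AM y y) (HM x y) (cmp A y x y l c) g)) (coact A x y r)"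
  proof (rule lift_cong, (rule closed_intros r | assumption)+)
    fix c g assume c: "c \<in> kcarrier (AM x y)" and g: "g \<in> kcarrier (HM x y)"
    have e1: "?G (ktmk (AM x y) (HM x y) (cmp A x y y c b) g) = ktmk (AM y y) (HM x y) (cmp A y x y l (cmp A x y y c b)) g"
      by (rule kt_tlift_tmk; (rule klin_intros closed_intros b l c g | assumption)+)
    have e2: "tlift (kt (AM y y) (HM x y)) (\<lambda>a g. ktmk (AM y y) (HM x y) (cmp A y y y a b) g) (ktmk (AM y y) (HM x y) (cmp A y x y l c) g) = ktmk (AM y y) (HM x y) (cmp A y y y (cmp A y x y l c) b) g"
      by (rule kt_tlift_tmk; (rule klin_intros closed_intros b l c g | assumption)+)
    show "?G (ktmk (AM x y) (HM x y) (cmp A x y y c b) g) = tlift (kt (AM y y) (HM x y)) (\<lambda>a g. ktmk (AM y y) (HM x y) (cmp A y y y a b) g) (ktmk (AM y y) (HM x y) (cmp A y x y l c) g)"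
      unfolding e1 e2 A_cmp_assoc[OF l c b] ..
  qed
  also have "\<dots> = tlift (kt (AM y y) (HM x y)) (\<lambda>a g. ktmk (AM y y) (HM x y) (cmp A y y y a b) g) (can_pair y x y l r)"
    unfolding can_pair_def by (rule lift_comp[symmetric]; (rule klin_intros closed_intros lift_klin rmult_Ayy_kt_kbilin b l r | assumption)+)
  also have "\<dots> = tlift (kt (AM y y) (HM x y)) (\<lambda>a g. ktmk (AM y y) (HM x y) (cmp A y y y a b) g) (can H A y x y (TB y x y l r))"
    using can_tmk[OF l r] by simp
  finally show "can H A y x y (tlift (BT y x y) (\<lambda>l r. TB y x y l (cmp A x y y r b)) (TB y x y l r)) =
     tlift (kt (AM y y) (HM x y)) (\<lambda>a g. ktmk (AM y y) (HM x y) (cmp A y y y a b) g) (can H A y x y (TB y x y l r))" .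
qed

lemma gam_coinv_commute:
  assumes h: "h \<in> kcarrier (HM x y)" and bc: "b \<in> coinv H A y"
  shows "tlift (BT y x y) (\<lambda>l r. TB y x y (cmp A y y x b l) r) (gam H A x y h) =
         tlift (BT y x y) (\<lambda>l r. TB y x y l (cmp A x y y r b)) (gam H A x y h)"
proof (rule can_inj)
  have b: "b \<in> kcarrier (AM y y)" by (rule coinvD(1)[OF bc])
  show "tlift (BT y x y) (\<lambda>l r. TB y x y (cmp A y y x b l) r) (gam H A x y h) \<in> kcarrier (BT y x y)"
    by (rule lift_closed; (rule klin_intros closed_intros btens_kmodule gam_closed b h | assumption)+)
  show "tlift (BT y x y) (\<lambda>l r. TB y x y l (cmp A x y y r b)) (gam H A x y h) \<in> kcarrier (BT y x y)"
    by (rule lift_closed; (rule klin_intros closed_intros btens_kmodule gam_closed b h | assumption)+)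
  have "can H A y x y (tlift (BT y x y) (\<lambda>l r. TB y x y (cmp A y y x b l) r) (gam H A x y h)) = ktmk (AM y y) (HM x y) b h"
    unfolding can_lmult[OF b gam_closed[OF h]] can_gam[OF h]
    using kt_tlift_tmk[OF A_kmodule H_kmodule kt_kmodule[OF A_kmodule H_kmodule] lmult_Ayy_kt_kbilin[OF b] A_idm_closed h] b by simp
  moreover have "can H A y x y (tlift (BT y x y) (\<lambda>l r. TB y x y l (cmp A x y y r b)) (gam H A x y h)) = ktmk (AM y y) (HM x y) b h"
    unfolding can_rmult[OF bc gam_closed[OF h]] can_gam[OF h]
    using kt_tlift_tmk[OF A_kmodule H_kmodule kt_kmodule[OF A_kmodule H_kmodule] rmult_Ayy_kt_kbilin[OF b] A_idm_closed h] b by simp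
  ultimately show "can H A y x y (tlift (BT y x y) (\<lambda>l r. TB y x y (cmp A y y x b l) r) (gam H A x y h)) =
    can H A y x y (tlift (BT y x y) (\<lambda>l r. TB y x y l (cmp A x y y r b)) (gam H A x y h))" by simp
qed

lemmas gam_intros = klin_intros closed_intros btens_kmodule gam_closed gam_klin

definition sandwich_gam :: "'x \<Rightarrow> 'x \<Rightarrow> 'x \<Rightarrow> 'h \<Rightarrow> 'a \<Rightarrow> 'a \<Rightarrow> ('a \<times> 'a \<Rightarrow> 'k) set" where
  "sandwich_gam x y z h l' r' = tlift (BT z x z) (\<lambda>l r. TB z x z (cmp A z y x l' l) (cmp A x y z r r')) (gam H A x y h)"
definition sandwich_kt :: "'x \<Rightarrow> 'x \<Rightarrow> 'x \<Rightarrow> 'a \<Rightarrow> 'a \<Rightarrow> ('a \<times> 'h \<Rightarrow> 'k) set \<Rightarrow> ('a \<times> 'h \<Rightarrow> 'k) set" where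
  "sandwich_kt x y z l' r' = tlift (kt (AM z z) (HM x z)) (\<lambda>a g. tlift (kt (AM z z) (HM x z))
   (\<lambda>c g'. ktmk (AM z z) (HM x z) (cmp A z y z l' (cmp A y y z a c)) (cmp H x y z g g')) (coact A y z r'))"
definition H_lmult_kt :: "'x \<Rightarrow> 'x \<Rightarrow> 'x \<Rightarrow> 'h \<Rightarrow> ('a \<times> 'h \<Rightarrow> 'k) set \<Rightarrow> ('a \<times> 'h \<Rightarrow> 'k) set" where
  "H_lmult_kt x y z h = tlift (kt (AM z z) (HM x z)) (\<lambda>a g. ktmk (AM z z) (HM x z) a (cmp H x y z h g))"

lemma sandwich_kbilin: "l' \<in> kcarrier (AM z y) \<Longrightarrow> r' \<in> kcarrier (AM y z) \<Longrightarrow>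
   kbilin (AM y x) (AM x y) (BT z x z) (\<lambda>l r. TB z x z (cmp A z y x l' l) (cmp A x y z r r'))"
  by (rule gam_intros | assumption)+

lemma sandwich_balanced: assumes l': "l' \<in> kcarrier (AM z y)" and r': "r' \<in> kcarrier (AM y z)"
  shows "balanced (bbal H A y x y) (\<lambda>l r. TB z x z (cmp A z y x l' l) (cmp A x y z r r'))"
proof (rule balanced_bbalI)
  fix l c r assume l: "l \<in> kcarrier (AM y x)" and c: "c \<in> coinv H A x" and r: "r \<in> kcarrier (AM x y)"
  have cc: "c \<in> kcarrier (AM x x)" by (rule coinvD(1)[OF c])
  show "TB z x z (cmp A z y x l' (cmp A y x x l c)) (cmp A x y z r r') = TB z x z (cmp A z y x l' l) (cmp A x y z (cmp A x x y c r) r')"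
    using A_cmp_assoc[OF l' l cc] A_cmp_assoc[OF cc r r'] btmk_coinv_shift[OF A_cmp_closed[OF l' l] c A_cmp_closed[OF r r']] by simp
qed

lemma sandwich_gam_kbilin: "h \<in> kcarrier (HM x y) \<Longrightarrow> kbilin (AM z y) (AM y z) (BT z x z) (sandwich_gam x y z h)"
  unfolding sandwich_gam_def by (rule gam_intros | assumption)+

text \<open>This is where (a) is used: it makes the right-hand side of (b) well defined.\<close>

lemma sandwich_gam_balanced:
  assumes h: "h \<in> kcarrier (HM x y)"
  shows "balanced (bbal H A z y z) (sandwich_gam x y z h)"
proof (rule balanced_bbalI)
  fix l' c r' assume l': "l' \<in> kcarrier (AM z y)" and c: "c \<in> coinv H A y" and r': "r' \<in> kcarrier (AM y z)"
  have cc: "c \<in> kcarrier (AM y y)" by (rule coinvD(1)[OF c])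
  let ?T = "tlift (BT z x z) (\<lambda>l r. TB z x z (cmp A z y x l' l) (cmp A x y z r r'))"
  have gh: "gam H A x y h \<in> kcarrier (BT y x y)" using h by auto
  have "?T (tlift (BT y x y) (\<lambda>l r. TB y x y (cmp A y y x c l) r) (gam H A x y h))
     = tlift (BT z x z) (\<lambda>l r. ?T (TB y x y (cmp A y y x c l) r)) (gam H A x y h)"
    by (rule lift_comp[OF gh balanced_tensor_btens btens_kmodule btens_kmodule lift_klin[OF balanced_tensor_btens btens_kmodule sandwich_kbilin[OF l' r'] sandwich_balanced[OF l' r']]
        lmult_btens_kbilin[OF cc] lmult_btens_balanced[OF cc]])
  also have "\<dots> = sandwich_gam x y z h (cmp A z y y l' c) r'"
    unfolding sandwich_gam_def
  proof (rule lift_cong[OF gh balanced_tensor_btens])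
    fix l r assume l: "l \<in> kcarrier (AM y x)" and r: "r \<in> kcarrier (AM x y)"
    show "?T (TB y x y (cmp A y y x c l) r) = TB z x z (cmp A z y x (cmp A z y y l' c) l) (cmp A x y z r r')"
      using lift_tmk[OF balanced_tensor_btens btens_kmodule sandwich_kbilin[OF l' r'] sandwich_balanced[OF l' r'] A_cmp_closed[OF cc l] r] A_cmp_assoc[OF l' cc l] by simp
  qed
  finally have e1: "?T (tlift (BT y x y) (\<lambda>l r. TB y x y (cmp A y y x c l) r) (gam H A x y h)) = sandwich_gam x y z h (cmp A z y y l' c) r'" .
  have "?T (tlift (BT y x y) (\<lambda>l r. TB y x y l (cmp A x y y r c)) (gam H A x y h))
     = tlift (BT z x z) (\<lambda>l r. ?T (TB y x y l (cmp A x y y r c))) (gam H A x y h)"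
    by (rule lift_comp[OF gh balanced_tensor_btens btens_kmodule btens_kmodule lift_klin[OF balanced_tensor_btens btens_kmodule sandwich_kbilin[OF l' r'] sandwich_balanced[OF l' r']]
        rmult_btens_kbilin[OF cc] rmult_btens_balanced[OF cc]])
  also have "\<dots> = sandwich_gam x y z h l' (cmp A y y z c r')"
    unfolding sandwich_gam_def
  proof (rule lift_cong[OF gh balanced_tensor_btens])
    fix l r assume l: "l \<in> kcarrier (AM y x)" and r: "r \<in> kcarrier (AM x y)"
    show "?T (TB y x y l (cmp A x y y r c)) = TB z x z (cmp A z y x l' l) (cmp A x y z r (cmp A y y z c r'))"
      using lift_tmk[OF balanced_tensor_btens btens_kmodule sandwich_kbilin[OF l' r'] sandwich_balanced[OF l' r'] l A_cmp_closed[OF r cc]] A_cmp_assoc[OF r cc r'] by simp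
  qed
  finally have e2: "?T (tlift (BT y x y) (\<lambda>l r. TB y x y l (cmp A x y y r c)) (gam H A x y h)) = sandwich_gam x y z h l' (cmp A y y z c r')" .
  show "sandwich_gam x y z h (cmp A z y y l' c) r' = sandwich_gam x y z h l' (cmp A y y z c r')"
    using e1 e2 gam_coinv_commute[OF h c] by simp
qed

lemma sandwich_kt_kbilin: "l' \<in> kcarrier (AM z y) \<Longrightarrow> r' \<in> kcarrier (AM y z) \<Longrightarrow>
  kbilin (AM y y) (HM x y) (kt (AM z z) (HM x z)) (\<lambda>a g. tlift (kt (AM z z) (HM x z))
   (\<lambda>c g'. ktmk (AM z z) (HM x z) (cmp A z y z l' (cmp A y y z a c)) (cmp H x y z g g')) (coact A y z r'))"
  by (rule gam_intros | assumption)+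

lemma sandwich_kt_klin: "l' \<in> kcarrier (AM z y) \<Longrightarrow> r' \<in> kcarrier (AM y z) \<Longrightarrow>
  klin (kt (AM y y) (HM x y)) (kt (AM z z) (HM x z)) (sandwich_kt x y z l' r')"
  unfolding sandwich_kt_def by (rule lift_klin[OF balanced_tensor_kt[OF A_kmodule H_kmodule] kt_kmodule[OF A_kmodule H_kmodule] sandwich_kt_kbilin balanced_empty])

lemma can_pair_sandwich:
  assumes l': "l' \<in> kcarrier (AM z y)" and r': "r' \<in> kcarrier (AM y z)"
    and l: "l \<in> kcarrier (AM y x)" and r: "r \<in> kcarrier (AM x y)"
  shows "can_pair z x z (cmp A z y x l' l) (cmp A x y z r r') = sandwich_kt x y z l' r' (can_pair y x y l r)"
proof -
  let ?G = "tlift (kt (AM z z) (HM x z)) (\<lambda>c g. ktmk (AM z z) (HM x z) (cmp A z x z (cmp A z y x l' l) c) g)"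
  have l'l: "cmp A z y x l' l \<in> kcarrier (AM z x)" using l' l by auto
  have "can_pair z x z (cmp A z y x l' l) (cmp A x y z r r') = ?G (tlift (kt (AM x z) (HM x z))
            (\<lambda>a0 a1. tlift (kt (AM x z) (HM x z))
               (\<lambda>b0 b1. ktmk (AM x z) (HM x z) (cmp A x y z a0 b0) (cmp H x y z a1 b1))
               (coact A y z r')) (coact A x y r))"
    unfolding can_pair_def coact_mult[OF r r'] ..
  also have "\<dots> = tlift (kt (AM z z) (HM x z)) (\<lambda>a0 a1. ?G (tlift (kt (AM x z) (HM x z))
               (\<lambda>b0 b1. ktmk (AM x z) (HM x z) (cmp A x y z a0 b0) (cmp H x y z a1 b1))
               (coact A y z r'))) (coact A x y r)"
    by (rule lift_comp; (rule gam_intros l'l r r' | assumption)+)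
  also have "\<dots> = tlift (kt (AM z z) (HM x z)) (\<lambda>a0 a1. tlift (kt (AM z z) (HM x z))
               (\<lambda>b0 b1. ?G (ktmk (AM x z) (HM x z) (cmp A x y z a0 b0) (cmp H x y z a1 b1)))
               (coact A y z r')) (coact A x y r)"
    by (rule lift_cong, (rule gam_intros r | assumption)+, rule lift_comp; (rule gam_intros l'l r r' | assumption)+)
  also have "\<dots> = tlift (kt (AM z z) (HM x z)) (\<lambda>c g. tlift (kt (AM z z) (HM x z))
   (\<lambda>c' g'. ktmk (AM z z) (HM x z) (cmp A z y z l' (cmp A y y z (cmp A y x y l c) c')) (cmp H x y z g g')) (coact A y z r')) (coact A x y r)"
  proof (rule lift_cong, (rule gam_intros r | assumption)+, rule lift_cong, (rule gam_intros r' | assumption)+)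
    fix a0 a1 b0 b1 assume a0: "a0 \<in> kcarrier (AM x y)" and a1: "a1 \<in> kcarrier (HM x y)"
      and b0: "b0 \<in> kcarrier (AM y z)" and b1: "b1 \<in> kcarrier (HM y z)"
    have "?G (ktmk (AM x z) (HM x z) (cmp A x y z a0 b0) (cmp H x y z a1 b1)) =
        ktmk (AM z z) (HM x z) (cmp A z x z (cmp A z y x l' l) (cmp A x y z a0 b0)) (cmp H x y z a1 b1)"
      by (rule kt_tlift_tmk; (rule gam_intros l'l a0 a1 b0 b1 | assumption)+)
    also have "cmp A z x z (cmp A z y x l' l) (cmp A x y z a0 b0) = cmp A z y z l' (cmp A y y z (cmp A y x y l a0) b0)"
      using A_cmp_assoc[OF l' l A_cmp_closed[OF a0 b0]] A_cmp_assoc[OF l a0 b0] by simp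
    finally show "?G (ktmk (AM x z) (HM x z) (cmp A x y z a0 b0) (cmp H x y z a1 b1)) =
        ktmk (AM z z) (HM x z) (cmp A z y z l' (cmp A y y z (cmp A y x y l a0) b0)) (cmp H x y z a1 b1)" .
  qed
  also have "\<dots> = tlift (kt (AM z z) (HM x z)) (\<lambda>c g. sandwich_kt x y z l' r' (ktmk (AM y y) (HM x y) (cmp A y x y l c) g)) (coact A x y r)"
  proof (rule lift_cong, (rule gam_intros r | assumption)+)
    fix c g assume c: "c \<in> kcarrier (AM x y)" and g: "g \<in> kcarrier (HM x y)"
    show "tlift (kt (AM z z) (HM x z))
   (\<lambda>c' g'. ktmk (AM z z) (HM x z) (cmp A z y z l' (cmp A y y z (cmp A y x y l c) c')) (cmp H x y z g g')) (coact A y z r') =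
        sandwich_kt x y z l' r' (ktmk (AM y y) (HM x y) (cmp A y x y l c) g)"
      unfolding sandwich_kt_def by (rule kt_tlift_tmk[symmetric]; (rule gam_intros sandwich_kt_kbilin l l' r' c g | assumption)+)
  qed
  also have "\<dots> = sandwich_kt x y z l' r' (can_pair y x y l r)"
    unfolding can_pair_def by (rule lift_comp[symmetric]; (rule gam_intros sandwich_kt_klin l l' r r' | assumption)+)
  finally show ?thesis .
qed

lemma can_sandwich:
  assumes l': "l' \<in> kcarrier (AM z y)" and r': "r' \<in> kcarrier (AM y z)" and X: "X \<in> kcarrier (BT y x y)"
  shows "can H A z x z (tlift (BT z x z) (\<lambda>l r. TB z x z (cmp A z y x l' l) (cmp A x y z r r')) X) = sandwich_kt x y z l' r' (can H A y x y X)"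
proof (rule lift_ext[OF X balanced_tensor_btens kt_kmodule[OF A_kmodule H_kmodule]])
  show "klin (BT y x y) (kt (AM z z) (HM x z)) (\<lambda>X. can H A z x z (tlift (BT z x z) (\<lambda>l r. TB z x z (cmp A z y x l' l) (cmp A x y z r r')) X))"
    by (rule klin_comp[OF lift_klin[OF balanced_tensor_btens btens_kmodule sandwich_kbilin[OF l' r'] sandwich_balanced[OF l' r']] can_klin])
  show "klin (BT y x y) (kt (AM z z) (HM x z)) (\<lambda>X. sandwich_kt x y z l' r' (can H A y x y X))"
    by (rule klin_comp[OF can_klin sandwich_kt_klin[OF l' r']])
  fix l r assume l: "l \<in> kcarrier (AM y x)" and r: "r \<in> kcarrier (AM x y)"
  have l'l: "cmp A z y x l' l \<in> kcarrier (AM z x)" using l' l by auto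
  show "can H A z x z (tlift (BT z x z) (\<lambda>l r. TB z x z (cmp A z y x l' l) (cmp A x y z r r')) (TB y x y l r)) =
    sandwich_kt x y z l' r' (can H A y x y (TB y x y l r))"
    using lift_tmk[OF balanced_tensor_btens btens_kmodule sandwich_kbilin[OF l' r'] sandwich_balanced[OF l' r'] l r]
      can_tmk[OF l'l A_cmp_closed[OF r r']] can_tmk[OF l r] can_pair_sandwich[OF l' r' l r] by simp
qed

lemma can_sandwich_gam:
  assumes h: "h \<in> kcarrier (HM x y)" and l': "l' \<in> kcarrier (AM z y)" and r': "r' \<in> kcarrier (AM y z)"
  shows "can H A z x z (sandwich_gam x y z h l' r') = tlift (kt (AM z z) (HM x z)) (\<lambda>c g'. ktmk (AM z z) (HM x z) (cmp A z y z l' c) (cmp H x y z h g')) (coact A y z r')"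
proof -
  have "can H A z x z (sandwich_gam x y z h l' r') = sandwich_kt x y z l' r' (ktmk (AM y y) (HM x y) (idm A y) h)"
    unfolding sandwich_gam_def can_sandwich[OF l' r' gam_closed[OF h]] can_gam[OF h] ..
  also have "\<dots> = tlift (kt (AM z z) (HM x z))
   (\<lambda>c g'. ktmk (AM z z) (HM x z) (cmp A z y z l' (cmp A y y z (idm A y) c)) (cmp H x y z h g')) (coact A y z r')"
    unfolding sandwich_kt_def by (rule kt_tlift_tmk; (rule gam_intros sandwich_kt_kbilin l' r' h | assumption)+)
  also have "\<dots> = tlift (kt (AM z z) (HM x z)) (\<lambda>c g'. ktmk (AM z z) (HM x z) (cmp A z y z l' c) (cmp H x y z h g')) (coact A y z r')"
    by (rule lift_cong, (rule gam_intros r' | assumption)+) simp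
  finally show ?thesis .
qed

lemma H_lmult_kt_kbilin: "h \<in> kcarrier (HM x y) \<Longrightarrow> kbilin (AM z z) (HM y z) (kt (AM z z) (HM x z)) (\<lambda>a g. ktmk (AM z z) (HM x z) a (cmp H x y z h g))"
  by (rule gam_intros | assumption)+

lemma H_lmult_kt_klin: "h \<in> kcarrier (HM x y) \<Longrightarrow> klin (kt (AM z z) (HM y z)) (kt (AM z z) (HM x z)) (H_lmult_kt x y z h)"
  unfolding H_lmult_kt_def by (rule lift_klin[OF balanced_tensor_kt[OF A_kmodule H_kmodule] kt_kmodule[OF A_kmodule H_kmodule] H_lmult_kt_kbilin balanced_empty])

lemma can_sandwich_gam_kbilin: "h \<in> kcarrier (HM x y) \<Longrightarrow> kbilin (AM z y) (AM y z) (kt (AM z z) (HM x z)) (\<lambda>l' r'. can H A z x z (sandwich_gam x y z h l' r'))"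
  by (rule kbilin_comp_klin[OF sandwich_gam_kbilin can_klin])

lemma can_sandwich_gam_balanced: "h \<in> kcarrier (HM x y) \<Longrightarrow> balanced (bbal H A z y z) (\<lambda>l' r'. can H A z x z (sandwich_gam x y z h l' r'))"
  by (rule balanced_comp[OF sandwich_gam_balanced])

lemma lift_can_sandwich_gam:
  assumes h: "h \<in> kcarrier (HM x y)" and X: "X \<in> kcarrier (BT z y z)"
  shows "tlift (kt (AM z z) (HM x z)) (\<lambda>l' r'. can H A z x z (sandwich_gam x y z h l' r')) X = H_lmult_kt x y z h (can H A z y z X)"
proof (rule lift_ext[OF X balanced_tensor_btens kt_kmodule[OF A_kmodule H_kmodule] lift_klin[OF balanced_tensor_btens kt_kmodule[OF A_kmodule H_kmodule] can_sandwich_gam_kbilin[OF h] can_sandwich_gam_balanced[OF h]]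
      klin_comp[OF can_klin H_lmult_kt_klin[OF h]]])
  fix l' r' assume l': "l' \<in> kcarrier (AM z y)" and r': "r' \<in> kcarrier (AM y z)"
  have "tlift (kt (AM z z) (HM x z)) (\<lambda>l' r'. can H A z x z (sandwich_gam x y z h l' r')) (TB z y z l' r') = can H A z x z (sandwich_gam x y z h l' r')"
    by (rule lift_tmk[OF balanced_tensor_btens kt_kmodule[OF A_kmodule H_kmodule] can_sandwich_gam_kbilin[OF h] can_sandwich_gam_balanced[OF h] l' r'])
  also have "\<dots> = tlift (kt (AM z z) (HM x z)) (\<lambda>c g. H_lmult_kt x y z h (ktmk (AM z z) (HM y z) (cmp A z y z l' c) g)) (coact A y z r')"
    unfolding can_sandwich_gam[OF h l' r']
  proof (rule lift_cong, (rule gam_intros r' | assumption)+)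
    fix c g assume c: "c \<in> kcarrier (AM y z)" and g: "g \<in> kcarrier (HM y z)"
    show "ktmk (AM z z) (HM x z) (cmp A z y z l' c) (cmp H x y z h g) = H_lmult_kt x y z h (ktmk (AM z z) (HM y z) (cmp A z y z l' c) g)"
      unfolding H_lmult_kt_def by (rule kt_tlift_tmk[symmetric]; (rule gam_intros H_lmult_kt_kbilin l' c g h | assumption)+)
  qed
  also have "\<dots> = H_lmult_kt x y z h (can_pair z y z l' r')"
    unfolding can_pair_def by (rule lift_comp[symmetric]; (rule gam_intros H_lmult_kt_klin l' r' h | assumption)+)
  finally show "tlift (kt (AM z z) (HM x z)) (\<lambda>l' r'. can H A z x z (sandwich_gam x y z h l' r')) (TB z y z l' r') =
     H_lmult_kt x y z h (can H A z y z (TB z y z l' r'))" using can_tmk[OF l' r'] by simp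
qed

lemma gam_cmp:
  assumes h: "h \<in> kcarrier (HM x y)" and h': "h' \<in> kcarrier (HM y z)"
  shows "gam H A x z (cmp H x y z h h') = tlift (BT z x z) (sandwich_gam x y z h) (gam H A y z h')"
proof (rule can_inj)
  have hh: "cmp H x y z h h' \<in> kcarrier (HM x z)" using h h' by auto
  show "gam H A x z (cmp H x y z h h') \<in> kcarrier (BT z x z)" using hh by auto
  show "tlift (BT z x z) (sandwich_gam x y z h) (gam H A y z h') \<in> kcarrier (BT z x z)"
  proof (rule lift_closed[OF gam_closed[OF h'] balanced_tensor_btens btens_kmodule])
    fix l' r' assume "l' \<in> kcarrier (AM z y)" "r' \<in> kcarrier (AM y z)"
    thus "sandwich_gam x y z h l' r' \<in> kcarrier (BT z x z)" using sandwich_gam_kbilin[OF h] unfolding kbilin_def klin_def by blast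
  qed
  have "can H A z x z (tlift (BT z x z) (sandwich_gam x y z h) (gam H A y z h')) =
      tlift (kt (AM z z) (HM x z)) (\<lambda>l' r'. can H A z x z (sandwich_gam x y z h l' r')) (gam H A y z h')"
    by (rule lift_comp[OF gam_closed[OF h'] balanced_tensor_btens btens_kmodule kt_kmodule[OF A_kmodule H_kmodule] can_klin sandwich_gam_kbilin[OF h] sandwich_gam_balanced[OF h]])
  also have "\<dots> = H_lmult_kt x y z h (ktmk (AM z z) (HM y z) (idm A z) h')"
    unfolding lift_can_sandwich_gam[OF h gam_closed[OF h']] can_gam[OF h'] ..
  also have "\<dots> = ktmk (AM z z) (HM x z) (idm A z) (cmp H x y z h h')"
    unfolding H_lmult_kt_def by (rule kt_tlift_tmk; (rule gam_intros H_lmult_kt_kbilin h h' | assumption)+)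
  also have "\<dots> = can H A z x z (gam H A x z (cmp H x y z h h'))" using can_gam[OF hh] by simp
  finally show "can H A z x z (gam H A x z (cmp H x y z h h')) = can H A z x z (tlift (BT z x z) (sandwich_gam x y z h) (gam H A y z h'))" by simp
qed

definition can_inv :: "'x \<Rightarrow> 'x \<Rightarrow> 'x \<Rightarrow> ('a \<times> 'h \<Rightarrow> 'k) set \<Rightarrow> ('a \<times> 'a \<Rightarrow> 'k) set" where
  "can_inv z x y = inv_into (kcarrier (BT z x y)) (can H A z x y)"

lemma can_inv_closed[intro]: "v \<in> kcarrier (kt (AM z y) (HM x y)) \<Longrightarrow> can_inv z x y v \<in> kcarrier (BT z x y)"
  unfolding can_inv_def using can_bij[of z x y] by (intro inv_into_into) (auto simp: bij_betw_def)

lemma can_can_inv: "v \<in> kcarrier (kt (AM z y) (HM x y)) \<Longrightarrow> can H A z x y (can_inv z x y v) = v"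
  unfolding can_inv_def using can_bij[of z x y] by (intro f_inv_into_f) (auto simp: bij_betw_def)

lemma can_inv_can: "X \<in> kcarrier (BT z x y) \<Longrightarrow> can_inv z x y (can H A z x y X) = X"
  unfolding can_inv_def using can_bij[of z x y] by (intro inv_into_f_f) (auto simp: bij_betw_def)

lemma can_inv_klin: "klin (kt (AM z y) (HM x y)) (BT z x y) (can_inv z x y)"
proof (rule klinI)
  fix v assume "v \<in> kcarrier (kt (AM z y) (HM x y))" thus "can_inv z x y v \<in> kcarrier (BT z x y)" by auto
next
  fix v w assume v: "v \<in> kcarrier (kt (AM z y) (HM x y))" and w: "w \<in> kcarrier (kt (AM z y) (HM x y))"
  have s: "kadd (kt (AM z y) (HM x y)) v w \<in> kcarrier (kt (AM z y) (HM x y))" using v w by (intro kmodule_add_closed) auto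
  show "can_inv z x y (kadd (kt (AM z y) (HM x y)) v w) = kadd (BT z x y) (can_inv z x y v) (can_inv z x y w)"
  proof (rule can_inj)
    show "can_inv z x y (kadd (kt (AM z y) (HM x y)) v w) \<in> kcarrier (BT z x y)" using s by auto
    show "kadd (BT z x y) (can_inv z x y v) (can_inv z x y w) \<in> kcarrier (BT z x y)" using v w by (intro kmodule_add_closed[OF btens_kmodule]) auto
    show "can H A z x y (can_inv z x y (kadd (kt (AM z y) (HM x y)) v w)) = can H A z x y (kadd (BT z x y) (can_inv z x y v) (can_inv z x y w))"
      unfolding klin_add[OF can_klin can_inv_closed[OF v] can_inv_closed[OF w]] can_can_inv[OF v] can_can_inv[OF w] can_can_inv[OF s] ..
  qed
next
  fix c v assume v: "v \<in> kcarrier (kt (AM z y) (HM x y))"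
  have s: "ksmult (kt (AM z y) (HM x y)) c v \<in> kcarrier (kt (AM z y) (HM x y))" using v by (intro kmodule_smult_closed) auto
  show "can_inv z x y (ksmult (kt (AM z y) (HM x y)) c v) = ksmult (BT z x y) c (can_inv z x y v)"
  proof (rule can_inj)
    show "can_inv z x y (ksmult (kt (AM z y) (HM x y)) c v) \<in> kcarrier (BT z x y)" using s by auto
    show "ksmult (BT z x y) c (can_inv z x y v) \<in> kcarrier (BT z x y)" using v by (intro kmodule_smult_closed[OF btens_kmodule]) auto
    show "can H A z x y (can_inv z x y (ksmult (kt (AM z y) (HM x y)) c v)) = can H A z x y (ksmult (BT z x y) c (can_inv z x y v))"
      unfolding klin_smult[OF can_klin can_inv_closed[OF v]] can_can_inv[OF v] can_can_inv[OF s] ..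
  qed
qed

lemma can_closed[intro]: "X \<in> kcarrier (BT z x y) \<Longrightarrow> can H A z x y X \<in> kcarrier (kt (AM z y) (HM x y))"
  by (rule klin_closed[OF can_klin])

lemmas can_intros = gam_intros can_klin can_inv_klin can_closed can_inv_closed

text \<open>For (c) and (e) injectivity of can \<otimes> id is needed; it is not inherited from injectivity
  of can, but from can\<inverse> \<otimes> id being a left inverse.\<close>

definition can_id :: "'x \<Rightarrow> 'x \<Rightarrow> 'x \<Rightarrow> ('k, 'n) kmod \<Rightarrow> (('a \<times> 'a \<Rightarrow> 'k) set \<times> 'n \<Rightarrow> 'k) set \<Rightarrow> (('a \<times> 'h \<Rightarrow> 'k) set \<times> 'n \<Rightarrow> 'k) set" where
  "can_id z x y N = tlift (kt (kt (AM z y) (HM x y)) N) (\<lambda>u g. ktmk (kt (AM z y) (HM x y)) N (can H A z x y u) g)"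
definition can_inv_id :: "'x \<Rightarrow> 'x \<Rightarrow> 'x \<Rightarrow> ('k, 'n) kmod \<Rightarrow> (('a \<times> 'h \<Rightarrow> 'k) set \<times> 'n \<Rightarrow> 'k) set \<Rightarrow> (('a \<times> 'a \<Rightarrow> 'k) set \<times> 'n \<Rightarrow> 'k) set" where
  "can_inv_id z x y N = tlift (kt (BT z x y) N) (\<lambda>v g. ktmk (BT z x y) N (can_inv z x y v) g)"

lemma can_id_kbilin: "kmodule N \<Longrightarrow> kbilin (BT z x y) N (kt (kt (AM z y) (HM x y)) N) (\<lambda>u g. ktmk (kt (AM z y) (HM x y)) N (can H A z x y u) g)"
  by (rule can_intros | assumption)+
lemma can_inv_id_kbilin: "kmodule N \<Longrightarrow> kbilin (kt (AM z y) (HM x y)) N (kt (BT z x y) N) (\<lambda>v g. ktmk (BT z x y) N (can_inv z x y v) g)"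
  by (rule can_intros | assumption)+
lemma can_id_klin: "kmodule N \<Longrightarrow> klin (kt (BT z x y) N) (kt (kt (AM z y) (HM x y)) N) (can_id z x y N)"
  unfolding can_id_def by (rule lift_klin; (rule can_intros can_id_kbilin | assumption)+)
lemma can_inv_id_klin: "kmodule N \<Longrightarrow> klin (kt (kt (AM z y) (HM x y)) N) (kt (BT z x y) N) (can_inv_id z x y N)"
  unfolding can_inv_id_def by (rule lift_klin; (rule can_intros can_inv_id_kbilin | assumption)+)

lemma can_inv_id_can_id: assumes N: "kmodule N" and X: "X \<in> kcarrier (kt (BT z x y) N)"
  shows "can_inv_id z x y N (can_id z x y N X) = X"
proof (rule lift_ext[OF X balanced_tensor_kt[OF btens_kmodule N] kt_kmodule[OF btens_kmodule N] klin_comp[OF can_id_klin[OF N] can_inv_id_klin[OF N]] klin_id])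
  fix u g assume u: "u \<in> kcarrier (BT z x y)" and g: "g \<in> kcarrier N"
  have cu: "can H A z x y u \<in> kcarrier (kt (AM z y) (HM x y))" using klin_closed[OF can_klin u] .
  show "can_inv_id z x y N (can_id z x y N (ktmk (BT z x y) N u g)) = ktmk (BT z x y) N u g"
    unfolding can_id_def can_inv_id_def
    using kt_tlift_tmk[OF btens_kmodule N kt_kmodule[OF kt_kmodule[OF A_kmodule H_kmodule] N] can_id_kbilin[OF N] u g]
      kt_tlift_tmk[OF kt_kmodule[OF A_kmodule H_kmodule] N kt_kmodule[OF btens_kmodule N] can_inv_id_kbilin[OF N] cu g] can_inv_can[OF u] by simp
qed

lemma can_id_inj: "kmodule N \<Longrightarrow> X \<in> kcarrier (kt (BT z x y) N) \<Longrightarrow> Y \<in> kcarrier (kt (BT z x y) N) \<Longrightarrow>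
   can_id z x y N X = can_id z x y N Y \<Longrightarrow> X = Y"
  using can_inv_id_can_id by metis

lemma can_id_tmk: "kmodule N \<Longrightarrow> u \<in> kcarrier (BT z x y) \<Longrightarrow> g \<in> kcarrier N \<Longrightarrow>
   can_id z x y N (ktmk (BT z x y) N u g) = ktmk (kt (AM z y) (HM x y)) N (can H A z x y u) g"
  unfolding can_id_def by (rule kt_tlift_tmk[OF btens_kmodule _ _ can_id_kbilin]) auto

abbreviation "KT3 x y \<equiv> kt (kt (AM y y) (HM x y)) (HM x y)"

definition coact_right :: "'x \<Rightarrow> 'x \<Rightarrow> 'a \<Rightarrow> 'a \<Rightarrow> (('a \<times> 'a \<Rightarrow> 'k) set \<times> 'h \<Rightarrow> 'k) set" where
  "coact_right x y l r = tlift (kt (BT y x y) (HM x y)) (\<lambda>r0 r1. ktmk (BT y x y) (HM x y) (TB y x y l r0) r1) (coact A x y r)"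
definition comult_right :: "'x \<Rightarrow> 'x \<Rightarrow> ('a \<times> 'h \<Rightarrow> 'k) set \<Rightarrow> (('a \<times> 'h \<Rightarrow> 'k) set \<times> 'h \<Rightarrow> 'k) set" where
  "comult_right x y = tlift (KT3 x y) (\<lambda>a g. tlift (KT3 x y) (\<lambda>g1 g2. ktmk (kt (AM y y) (HM x y)) (HM x y) (ktmk (AM y y) (HM x y) a g1) g2) (cop H x y g))"
definition lmult_kt :: "'x \<Rightarrow> 'x \<Rightarrow> 'a \<Rightarrow> ('a \<times> 'h \<Rightarrow> 'k) set \<Rightarrow> ('a \<times> 'h \<Rightarrow> 'k) set" where
  "lmult_kt x y l = tlift (kt (AM y y) (HM x y)) (\<lambda>b g1. ktmk (AM y y) (HM x y) (cmp A y x y l b) g1)"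
definition lmult_kt_id :: "'x \<Rightarrow> 'x \<Rightarrow> 'a \<Rightarrow> (('a \<times> 'h \<Rightarrow> 'k) set \<times> 'h \<Rightarrow> 'k) set \<Rightarrow> (('a \<times> 'h \<Rightarrow> 'k) set \<times> 'h \<Rightarrow> 'k) set" where
  "lmult_kt_id x y l = tlift (KT3 x y) (\<lambda>u g2. ktmk (kt (AM y y) (HM x y)) (HM x y) (lmult_kt x y l u) g2)"

lemma coact_right_kbilin: "kbilin (AM y x) (AM x y) (kt (BT y x y) (HM x y)) (coact_right x y)"
  unfolding coact_right_def by (rule can_intros | assumption)+

lemma coact_right_balanced: "balanced (bbal H A y x y) (coact_right x y)"
proof (rule balanced_bbalI)
  fix l c r assume l: "l \<in> kcarrier (AM y x)" and c: "c \<in> coinv H A x" and r: "r \<in> kcarrier (AM x y)"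
  have cc: "c \<in> kcarrier (AM x x)" by (rule coinvD(1)[OF c])
  let ?G = "tlift (kt (BT y x y) (HM x y)) (\<lambda>r0 r1. ktmk (BT y x y) (HM x y) (TB y x y l r0) r1)"
  have "coact_right x y l (cmp A x x y c r) = ?G (tlift (kt (AM x y) (HM x y)) (\<lambda>b0 b1. ktmk (AM x y) (HM x y) (cmp A x x y c b0) b1) (coact A x y r))"
    unfolding coact_right_def coact_coinv_cmp_left[OF c r] ..
  also have "\<dots> = tlift (kt (BT y x y) (HM x y)) (\<lambda>b0 b1. ?G (ktmk (AM x y) (HM x y) (cmp A x x y c b0) b1)) (coact A x y r)"
    by (rule lift_comp; (rule can_intros cc l r | assumption)+)
  also have "\<dots> = coact_right x y (cmp A y x x l c) r"
    unfolding coact_right_def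
  proof (rule lift_cong, (rule can_intros r | assumption)+)
    fix b0 b1 assume b0: "b0 \<in> kcarrier (AM x y)" and b1: "b1 \<in> kcarrier (HM x y)"
    have "?G (ktmk (AM x y) (HM x y) (cmp A x x y c b0) b1) = ktmk (BT y x y) (HM x y) (TB y x y l (cmp A x x y c b0)) b1"
      by (rule kt_tlift_tmk; (rule can_intros cc l b0 b1 | assumption)+)
    thus "?G (ktmk (AM x y) (HM x y) (cmp A x x y c b0) b1) = ktmk (BT y x y) (HM x y) (TB y x y (cmp A y x x l c) b0) b1"
      using btmk_coinv_shift[OF l c b0] by simp
  qed
  finally show "coact_right x y (cmp A y x x l c) r = coact_right x y l (cmp A x x y c r)" ..
qed

lemma comult_right_kbilin: "kbilin (AM y y) (HM x y) (KT3 x y) (\<lambda>a g. tlift (KT3 x y) (\<lambda>g1 g2. ktmk (kt (AM y y) (HM x y)) (HM x y) (ktmk (AM y y) (HM x y) a g1) g2) (cop H x y g))"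
  by (rule can_intros | assumption)+
lemma comult_right_klin: "klin (kt (AM y y) (HM x y)) (KT3 x y) (comult_right x y)"
  unfolding comult_right_def by (rule lift_klin; (rule can_intros comult_right_kbilin | assumption)+)
lemma lmult_kt_kbilin: "l \<in> kcarrier (AM y x) \<Longrightarrow> kbilin (AM x y) (HM x y) (kt (AM y y) (HM x y)) (\<lambda>b g1. ktmk (AM y y) (HM x y) (cmp A y x y l b) g1)"
  by (rule can_intros | assumption)+
lemma lmult_kt_klin: "l \<in> kcarrier (AM y x) \<Longrightarrow> klin (kt (AM x y) (HM x y)) (kt (AM y y) (HM x y)) (lmult_kt x y l)"
  unfolding lmult_kt_def by (rule lift_klin; (rule can_intros lmult_kt_kbilin | assumption)+)
lemma lmult_kt_closed: "l \<in> kcarrier (AM y x) \<Longrightarrow> u \<in> kcarrier (kt (AM x y) (HM x y)) \<Longrightarrow> lmult_kt x y l u \<in> kcarrier (kt (AM y y) (HM x y))"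
  by (rule klin_closed[OF lmult_kt_klin])
lemma lmult_kt_id_kbilin: "l \<in> kcarrier (AM y x) \<Longrightarrow> kbilin (kt (AM x y) (HM x y)) (HM x y) (KT3 x y) (\<lambda>u g2. ktmk (kt (AM y y) (HM x y)) (HM x y) (lmult_kt x y l u) g2)"
  by (rule can_intros lmult_kt_klin lmult_kt_closed | assumption)+
lemma lmult_kt_id_klin: "l \<in> kcarrier (AM y x) \<Longrightarrow> klin (kt (kt (AM x y) (HM x y)) (HM x y)) (KT3 x y) (lmult_kt_id x y l)"
  unfolding lmult_kt_id_def by (rule lift_klin; (rule can_intros lmult_kt_id_kbilin | assumption)+)

lemma lmult_kt_id_tmk:
  assumes l: "l \<in> kcarrier (AM y x)" and b: "b \<in> kcarrier (AM x y)"
    and g1: "g1 \<in> kcarrier (HM x y)" and g2: "g2 \<in> kcarrier (HM x y)"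
  shows "lmult_kt_id x y l (ktmk (kt (AM x y) (HM x y)) (HM x y) (ktmk (AM x y) (HM x y) b g1) g2) =
    ktmk (kt (AM y y) (HM x y)) (HM x y) (ktmk (AM y y) (HM x y) (cmp A y x y l b) g1) g2"
proof -
  have "lmult_kt_id x y l (ktmk (kt (AM x y) (HM x y)) (HM x y) (ktmk (AM x y) (HM x y) b g1) g2) =
     ktmk (kt (AM y y) (HM x y)) (HM x y) (lmult_kt x y l (ktmk (AM x y) (HM x y) b g1)) g2"
    unfolding lmult_kt_id_def by (rule kt_tlift_tmk; (rule can_intros lmult_kt_id_kbilin l b g1 g2 | assumption)+)
  moreover have "lmult_kt x y l (ktmk (AM x y) (HM x y) b g1) = ktmk (AM y y) (HM x y) (cmp A y x y l b) g1"
    unfolding lmult_kt_def by (rule kt_tlift_tmk; (rule can_intros lmult_kt_kbilin l b g1 | assumption)+)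
  ultimately show ?thesis by simp
qed

lemma lmult_kt_id_comult:
  assumes l: "l \<in> kcarrier (AM y x)" and b: "b \<in> kcarrier (AM x y)" and g: "g \<in> kcarrier (HM x y)"
  shows "lmult_kt_id x y l (tlift (kt (kt (AM x y) (HM x y)) (HM x y))
           (\<lambda>g1 g2. ktmk (kt (AM x y) (HM x y)) (HM x y) (ktmk (AM x y) (HM x y) b g1) g2) (cop H x y g)) =
         comult_right x y (ktmk (AM y y) (HM x y) (cmp A y x y l b) g)"
proof -
  have "lmult_kt_id x y l (tlift (kt (kt (AM x y) (HM x y)) (HM x y))
           (\<lambda>g1 g2. ktmk (kt (AM x y) (HM x y)) (HM x y) (ktmk (AM x y) (HM x y) b g1) g2) (cop H x y g))
     = tlift (KT3 x y) (\<lambda>g1 g2. lmult_kt_id x y l (ktmk (kt (AM x y) (HM x y)) (HM x y) (ktmk (AM x y) (HM x y) b g1) g2)) (cop H x y g)"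
    by (rule lift_comp; (rule can_intros lmult_kt_id_klin l b g | assumption)+)
  also have "\<dots> = tlift (KT3 x y) (\<lambda>g1 g2. ktmk (kt (AM y y) (HM x y)) (HM x y) (ktmk (AM y y) (HM x y) (cmp A y x y l b) g1) g2) (cop H x y g)"
    by (rule lift_cong, (rule can_intros g | assumption)+) (rule lmult_kt_id_tmk[OF l b])
  also have "\<dots> = comult_right x y (ktmk (AM y y) (HM x y) (cmp A y x y l b) g)"
    unfolding comult_right_def by (rule kt_tlift_tmk[symmetric]; (rule can_intros comult_right_kbilin l b g | assumption)+)
  finally show ?thesis .
qed

lemma can_id_coact_right:
  assumes l: "l \<in> kcarrier (AM y x)" and r: "r \<in> kcarrier (AM x y)"
  shows "can_id y x y (HM x y) (coact_right x y l r) = comult_right x y (can_pair y x y l r)"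
proof -
  have "can_id y x y (HM x y) (coact_right x y l r) = tlift (KT3 x y) (\<lambda>r0 r1. can_id y x y (HM x y) (ktmk (BT y x y) (HM x y) (TB y x y l r0) r1)) (coact A x y r)"
    unfolding coact_right_def by (rule lift_comp; (rule can_intros can_id_klin l r | assumption)+)
  also have "\<dots> = tlift (KT3 x y) (\<lambda>b g. lmult_kt_id x y l (ktmk (kt (AM x y) (HM x y)) (HM x y) (coact A x y b) g)) (coact A x y r)"
  proof (rule lift_cong, (rule can_intros r | assumption)+)
    fix b g assume b: "b \<in> kcarrier (AM x y)" and g: "g \<in> kcarrier (HM x y)"
    have "can_id y x y (HM x y) (ktmk (BT y x y) (HM x y) (TB y x y l b) g) = ktmk (kt (AM y y) (HM x y)) (HM x y) (can_pair y x y l b) g"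
      using can_id_tmk[OF H_kmodule tensor_tmk_closed[OF balanced_tensor_btens l b] g] can_tmk[OF l b] by simp
    moreover have "lmult_kt_id x y l (ktmk (kt (AM x y) (HM x y)) (HM x y) (coact A x y b) g) = ktmk (kt (AM y y) (HM x y)) (HM x y) (lmult_kt x y l (coact A x y b)) g"
      unfolding lmult_kt_id_def by (rule kt_tlift_tmk; (rule can_intros lmult_kt_id_kbilin l b g | assumption)+)
    moreover have "lmult_kt x y l (coact A x y b) = can_pair y x y l b" unfolding lmult_kt_def can_pair_def ..
    ultimately show "can_id y x y (HM x y) (ktmk (BT y x y) (HM x y) (TB y x y l b) g) = lmult_kt_id x y l (ktmk (kt (AM x y) (HM x y)) (HM x y) (coact A x y b) g)"
      by simp
  qed
  also have "\<dots> = lmult_kt_id x y l (tlift (kt (kt (AM x y) (HM x y)) (HM x y)) (\<lambda>b g. ktmk (kt (AM x y) (HM x y)) (HM x y) (coact A x y b) g) (coact A x y r))"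
    by (rule lift_comp[symmetric]; (rule can_intros lmult_kt_id_klin l r | assumption)+)
  also have "\<dots> = lmult_kt_id x y l (tlift (kt (kt (AM x y) (HM x y)) (HM x y))
          (\<lambda>b g. tlift (kt (kt (AM x y) (HM x y)) (HM x y))
             (\<lambda>g1 g2. ktmk (kt (AM x y) (HM x y)) (HM x y) (ktmk (AM x y) (HM x y) b g1) g2) (cop H x y g)) (coact A x y r))"
    unfolding coact_coassoc[OF r] ..
  also have "\<dots> = tlift (KT3 x y) (\<lambda>b g. lmult_kt_id x y l (tlift (kt (kt (AM x y) (HM x y)) (HM x y))
             (\<lambda>g1 g2. ktmk (kt (AM x y) (HM x y)) (HM x y) (ktmk (AM x y) (HM x y) b g1) g2) (cop H x y g))) (coact A x y r)"
    by (rule lift_comp; (rule can_intros lmult_kt_id_klin l r | assumption)+)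
  also have "\<dots> = tlift (KT3 x y) (\<lambda>b g. comult_right x y (ktmk (AM y y) (HM x y) (cmp A y x y l b) g)) (coact A x y r)"
    by (rule lift_cong, (rule can_intros r | assumption)+) (rule lmult_kt_id_comult[OF l])
  also have "\<dots> = comult_right x y (can_pair y x y l r)"
    unfolding can_pair_def by (rule lift_comp[symmetric]; (rule can_intros comult_right_klin l r | assumption)+)
  finally show ?thesis .
qed

lemma can_id_coact_right_kbilin: "kbilin (AM y x) (AM x y) (KT3 x y) (\<lambda>l r. can_id y x y (HM x y) (coact_right x y l r))"
  by (rule kbilin_comp_klin[OF coact_right_kbilin can_id_klin[OF H_kmodule]])

lemma lift_can_id_coact_right: assumes X: "X \<in> kcarrier (BT y x y)"
  shows "tlift (KT3 x y) (\<lambda>l r. can_id y x y (HM x y) (coact_right x y l r)) X = comult_right x y (can H A y x y X)"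
proof (rule lift_ext[OF X balanced_tensor_btens kt_kmodule[OF kt_kmodule[OF A_kmodule H_kmodule] H_kmodule] lift_klin[OF balanced_tensor_btens kt_kmodule[OF kt_kmodule[OF A_kmodule H_kmodule] H_kmodule] can_id_coact_right_kbilin balanced_comp[OF coact_right_balanced]]
      klin_comp[OF can_klin comult_right_klin]])
  fix l r assume l: "l \<in> kcarrier (AM y x)" and r: "r \<in> kcarrier (AM x y)"
  show "tlift (KT3 x y) (\<lambda>l r. can_id y x y (HM x y) (coact_right x y l r)) (TB y x y l r) = comult_right x y (can H A y x y (TB y x y l r))"
    using lift_tmk[OF balanced_tensor_btens kt_kmodule[OF kt_kmodule[OF A_kmodule H_kmodule] H_kmodule] can_id_coact_right_kbilin balanced_comp[OF coact_right_balanced] l r]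
      can_id_coact_right[OF l r] can_tmk[OF l r] by simp
qed

lemma gam_comult:
  assumes h: "h \<in> kcarrier (HM x y)"
  shows "tlift (kt (BT y x y) (HM x y)) (\<lambda>h1 h2. ktmk (BT y x y) (HM x y) (gam H A x y h1) h2) (cop H x y h) =
         tlift (kt (BT y x y) (HM x y)) (coact_right x y) (gam H A x y h)"
proof (rule can_id_inj[OF H_kmodule])
  show "tlift (kt (BT y x y) (HM x y)) (\<lambda>h1 h2. ktmk (BT y x y) (HM x y) (gam H A x y h1) h2) (cop H x y h) \<in> kcarrier (kt (BT y x y) (HM x y))"
    by (rule lift_closed; (rule can_intros h | assumption)+)
  show "tlift (kt (BT y x y) (HM x y)) (coact_right x y) (gam H A x y h) \<in> kcarrier (kt (BT y x y) (HM x y))"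
  proof (rule lift_closed[OF gam_closed[OF h] balanced_tensor_btens kt_kmodule[OF btens_kmodule H_kmodule]])
    fix l r assume "l \<in> kcarrier (AM y x)" "r \<in> kcarrier (AM x y)"
    thus "coact_right x y l r \<in> kcarrier (kt (BT y x y) (HM x y))" using coact_right_kbilin unfolding kbilin_def klin_def by blast
  qed
  have "can_id y x y (HM x y) (tlift (kt (BT y x y) (HM x y)) (coact_right x y) (gam H A x y h)) =
     tlift (KT3 x y) (\<lambda>l r. can_id y x y (HM x y) (coact_right x y l r)) (gam H A x y h)"
    by (rule lift_comp[OF gam_closed[OF h] balanced_tensor_btens kt_kmodule[OF btens_kmodule H_kmodule] kt_kmodule[OF kt_kmodule[OF A_kmodule H_kmodule] H_kmodule] can_id_klin[OF H_kmodule] coact_right_kbilin coact_right_balanced])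
  also have "\<dots> = comult_right x y (ktmk (AM y y) (HM x y) (idm A y) h)"
    unfolding lift_can_id_coact_right[OF gam_closed[OF h]] can_gam[OF h] ..
  also have "\<dots> = tlift (KT3 x y) (\<lambda>g1 g2. ktmk (kt (AM y y) (HM x y)) (HM x y) (ktmk (AM y y) (HM x y) (idm A y) g1) g2) (cop H x y h)"
    unfolding comult_right_def by (rule kt_tlift_tmk; (rule can_intros comult_right_kbilin h | assumption)+)
  also have "\<dots> = tlift (KT3 x y) (\<lambda>h1 h2. can_id y x y (HM x y) (ktmk (BT y x y) (HM x y) (gam H A x y h1) h2)) (cop H x y h)"
    by (rule lift_cong, (rule can_intros h | assumption)+) (simp add: can_id_tmk gam_closed can_gam)
  also have "\<dots> = can_id y x y (HM x y) (tlift (kt (BT y x y) (HM x y)) (\<lambda>h1 h2. ktmk (BT y x y) (HM x y) (gam H A x y h1) h2) (cop H x y h))"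
    by (rule lift_comp[symmetric]; (rule can_intros can_id_klin h | assumption)+)
  finally show "can_id y x y (HM x y) (tlift (kt (BT y x y) (HM x y)) (\<lambda>h1 h2. ktmk (BT y x y) (HM x y) (gam H A x y h1) h2) (cop H x y h)) =
    can_id y x y (HM x y) (tlift (kt (BT y x y) (HM x y)) (coact_right x y) (gam H A x y h))" by simp
qed

abbreviation "KZ x y \<equiv> kt (kt (AM y y) (HM x y)) (HM y x)"

definition coact_left :: "'x \<Rightarrow> 'x \<Rightarrow> 'a \<Rightarrow> 'a \<Rightarrow> (('a \<times> 'a \<Rightarrow> 'k) set \<times> 'h \<Rightarrow> 'k) set" where
  "coact_left x y l r = tlift (kt (BT y x y) (HM y x)) (\<lambda>l0 l1. ktmk (BT y x y) (HM y x) (TB y x y l0 r) l1) (coact A y x l)"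

lemma coact_left_kbilin: "kbilin (AM y x) (AM x y) (kt (BT y x y) (HM y x)) (coact_left x y)"
  unfolding coact_left_def by (rule can_intros | assumption)+

lemma coact_left_balanced: "balanced (bbal H A y x y) (coact_left x y)"
proof (rule balanced_bbalI)
  fix l c r assume l: "l \<in> kcarrier (AM y x)" and c: "c \<in> coinv H A x" and r: "r \<in> kcarrier (AM x y)"
  have cc: "c \<in> kcarrier (AM x x)" by (rule coinvD(1)[OF c])
  let ?G = "tlift (kt (BT y x y) (HM y x)) (\<lambda>l0 l1. ktmk (BT y x y) (HM y x) (TB y x y l0 r) l1)"
  have "coact_left x y (cmp A y x x l c) r = ?G (tlift (kt (AM y x) (HM y x)) (\<lambda>a0 a1. ktmk (AM y x) (HM y x) (cmp A y x x a0 c) a1) (coact A y x l))"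
    unfolding coact_left_def coact_coinv_cmp_right[OF c l] ..
  also have "\<dots> = tlift (kt (BT y x y) (HM y x)) (\<lambda>a0 a1. ?G (ktmk (AM y x) (HM y x) (cmp A y x x a0 c) a1)) (coact A y x l)"
    by (rule lift_comp; (rule can_intros cc l r | assumption)+)
  also have "\<dots> = coact_left x y l (cmp A x x y c r)"
    unfolding coact_left_def
  proof (rule lift_cong, (rule can_intros l | assumption)+)
    fix a0 a1 assume a0: "a0 \<in> kcarrier (AM y x)" and a1: "a1 \<in> kcarrier (HM y x)"
    have "?G (ktmk (AM y x) (HM y x) (cmp A y x x a0 c) a1) = ktmk (BT y x y) (HM y x) (TB y x y (cmp A y x x a0 c) r) a1"
      by (rule kt_tlift_tmk; (rule can_intros cc a0 a1 r | assumption)+)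
    thus "?G (ktmk (AM y x) (HM y x) (cmp A y x x a0 c) a1) = ktmk (BT y x y) (HM y x) (TB y x y a0 (cmp A x x y c r)) a1"
      using btmk_coinv_shift[OF a0 c r] by simp
  qed
  finally show "coact_left x y (cmp A y x x l c) r = coact_left x y l (cmp A x x y c r)" .
qed

lemma can_id_coact_left:
  assumes l: "l \<in> kcarrier (AM y x)" and r: "r \<in> kcarrier (AM x y)"
  shows "can_id y x y (HM y x) (coact_left x y l r) = tlift (KZ x y) (\<lambda>l0 l1. ktmk (kt (AM y y) (HM x y)) (HM y x) (can_pair y x y l0 r) l1) (coact A y x l)"
proof -
  have "can_id y x y (HM y x) (coact_left x y l r) = tlift (KZ x y) (\<lambda>l0 l1. can_id y x y (HM y x) (ktmk (BT y x y) (HM y x) (TB y x y l0 r) l1)) (coact A y x l)"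
    unfolding coact_left_def by (rule lift_comp; (rule can_intros can_id_klin l r | assumption)+)
  also have "\<dots> = tlift (KZ x y) (\<lambda>l0 l1. ktmk (kt (AM y y) (HM x y)) (HM y x) (can_pair y x y l0 r) l1) (coact A y x l)"
    by (rule lift_cong, (rule can_intros l | assumption)+) (simp add: can_id_tmk tensor_tmk_closed[OF balanced_tensor_btens] r can_tmk)
  finally show ?thesis .
qed

end

section \<open>Hopf categories\<close>

locale hopf_galois_ctx = galois_ext_ctx H A
  for H :: "('x, 'k::comm_ring_1, 'h) shcat" and A :: "('x, 'k, 'a, 'h) comcat" +
  fixes S :: "'x \<Rightarrow> 'x \<Rightarrow> 'h \<Rightarrow> 'h"
  assumes ANT: "hopf_antipode H S"
begin

lemma antipode_klin: "klin (HM x y) (HM y x) (S x y)" using ANT unfolding hopf_antipode_def by blast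
lemma antipode_left: "h \<in> kcarrier (HM x y) \<Longrightarrow> tlift (HM x x) (\<lambda>a b. cmp H x y x a (S x y b)) (cop H x y h) =
          ksmult (HM x x) (cou H x y h) (idm H x)"
  using ANT unfolding hopf_antipode_def by blast
lemma klin_antipode_arg: "klin U (HM x y) F \<Longrightarrow> klin U (HM y x) (\<lambda>t. S x y (F t))"
  by (rule klin_comp[OF _ antipode_klin])
lemma antipode_closed: "a \<in> kcarrier (HM x y) \<Longrightarrow> S x y a \<in> kcarrier (HM y x)"
  by (rule klin_closed[OF antipode_klin])

lemmas antipode_intros = can_intros klin_antipode_arg antipode_closed antipode_klin ktrilI

lemma antipode_left_lift:
  assumes a: "a \<in> kcarrier (HM x y)" and P: "kmodule P" and Fm: "klin (HM x x) P Fm"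
  shows "tlift P (\<lambda>c d. Fm (cmp H x y x c (S x y d))) (cop H x y a) = Fm (ksmult (HM x x) (cou H x y a) (idm H x))"
proof -
  have "Fm (ksmult (HM x x) (cou H x y a) (idm H x)) = Fm (tlift (HM x x) (\<lambda>a b. cmp H x y x a (S x y b)) (cop H x y a))"
    using antipode_left[OF a] by simp
  also have "\<dots> = tlift P (\<lambda>c d. Fm (cmp H x y x c (S x y d))) (cop H x y a)"
    by (rule lift_comp; (rule antipode_intros Fm P a | assumption)+)
  finally show ?thesis ..
qed

lemma antipode_cancel_tmk:
  assumes a: "a \<in> kcarrier (HM x y)" and u: "u \<in> kcarrier (AM y y)" and b: "b \<in> kcarrier (HM x y)"
    and l: "l \<in> kcarrier (HM y x)"
  shows "tlift (KZ x y) (\<lambda>c d. ktmk (kt (AM y y) (HM x y)) (HM y x) (ktmk (AM y y) (HM x y) u b)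
           (cmp H y y x (cmp H y x y l c) (S x y d))) (cop H x y a)
       = ksmult (KZ x y) (cou H x y a) (ktmk (kt (AM y y) (HM x y)) (HM y x) (ktmk (AM y y) (HM x y) u b) l)"
proof -
  let ?F = "\<lambda>w. ktmk (kt (AM y y) (HM x y)) (HM y x) (ktmk (AM y y) (HM x y) u b) w"
  have F: "klin (HM y x) (KZ x y) ?F" by (rule antipode_intros u b | assumption)+
  have "tlift (KZ x y) (\<lambda>c d. ?F (cmp H y y x (cmp H y x y l c) (S x y d))) (cop H x y a)
     = tlift (KZ x y) (\<lambda>c d. ?F (cmp H y x x l (cmp H x y x c (S x y d)))) (cop H x y a)"
    by (rule lift_cong, (rule antipode_intros a | assumption)+) (simp add: H_cmp_assoc[OF l _ antipode_closed])
  also have "\<dots> = ?F (cmp H y x x l (ksmult (HM x x) (cou H x y a) (idm H x)))"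
    by (rule antipode_left_lift[OF a]) (rule antipode_intros F l u b | assumption)+
  also have "cmp H y x x l (ksmult (HM x x) (cou H x y a) (idm H x)) = ksmult (HM y x) (cou H x y a) l"
    using klin_smult[OF kbilin_klin_right[OF H_cmp_kbilin l] H_idm_closed] l by simp
  also have "?F \<dots> = ksmult (KZ x y) (cou H x y a) (?F l)" by (rule klin_smult[OF F l])
  finally show ?thesis .
qed

abbreviation "antipode_twist x y g a0 a1 \<equiv> tlift (KZ x y) (\<lambda>g1 g2. ktmk (kt (AM y y) (HM x y)) (HM y x) (ktmk (AM y y) (HM x y) a0 g2) (cmp H y y x a1 (S x y g1))) (cop H x y g)"

lemma lift_coact_antipode_twist:
  assumes l0: "l0 \<in> kcarrier (AM y x)" and l1: "l1 \<in> kcarrier (HM y x)" and r: "r \<in> kcarrier (AM x y)"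
  shows "tlift (KZ x y) (\<lambda>r0 r1. tlift (KZ x y) (\<lambda>b0 b1. antipode_twist x y r1 (cmp A y x y l0 b0) (cmp H y x y l1 b1)) (coact A x y r0)) (coact A x y r)
       = ktmk (kt (AM y y) (HM x y)) (HM y x) (can_pair y x y l0 r) l1"
proof -
  have KZm: "kmodule (KZ x y)" by (rule antipode_intros)+
  have "tlift (KZ x y) (\<lambda>r0 r1. tlift (KZ x y) (\<lambda>b0 b1. antipode_twist x y r1 (cmp A y x y l0 b0) (cmp H y x y l1 b1)) (coact A x y r0)) (coact A x y r)
     = tlift (KZ x y) (\<lambda>r0 r1. tlift (KZ x y) (\<lambda>u1 u2. antipode_twist x y u2 (cmp A y x y l0 r0) (cmp H y x y l1 u1)) (cop H x y r1)) (coact A x y r)"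
    by (rule coact_coassoc_lift[OF r KZm]) (rule antipode_intros l0 l1 | assumption)+
  also have "\<dots> = tlift (KZ x y) (\<lambda>r0 r1. tlift (KZ x y) (\<lambda>a b. tlift (KZ x y) (\<lambda>c d.
        ktmk (kt (AM y y) (HM x y)) (HM y x) (ktmk (AM y y) (HM x y) (cmp A y x y l0 r0) b) (cmp H y y x (cmp H y x y l1 c) (S x y d))) (cop H x y a)) (cop H x y r1)) (coact A x y r)"
  proof (rule lift_cong, (rule antipode_intros r | assumption)+)
    fix r0 r1 assume r0: "r0 \<in> kcarrier (AM x y)" and r1: "r1 \<in> kcarrier (HM x y)"
    show "tlift (KZ x y) (\<lambda>u1 u2. antipode_twist x y u2 (cmp A y x y l0 r0) (cmp H y x y l1 u1)) (cop H x y r1) =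
      tlift (KZ x y) (\<lambda>a b. tlift (KZ x y) (\<lambda>c d.
        ktmk (kt (AM y y) (HM x y)) (HM y x) (ktmk (AM y y) (HM x y) (cmp A y x y l0 r0) b) (cmp H y y x (cmp H y x y l1 c) (S x y d))) (cop H x y a)) (cop H x y r1)"
      by (rule cop_coassoc_lift[OF r1 KZm, symmetric]) (rule antipode_intros l0 l1 r0 | assumption)+
  qed
  also have "\<dots> = tlift (KZ x y) (\<lambda>r0 r1. tlift (KZ x y) (\<lambda>a b. ksmult (KZ x y) (cou H x y a)
        (ktmk (kt (AM y y) (HM x y)) (HM y x) (ktmk (AM y y) (HM x y) (cmp A y x y l0 r0) b) l1)) (cop H x y r1)) (coact A x y r)"
    by (rule lift_cong, (rule antipode_intros r | assumption)+, rule lift_cong, (rule antipode_intros | assumption)+)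
      (rule antipode_cancel_tmk; (rule antipode_intros l0 l1 | assumption)+)
  also have "\<dots> = tlift (KZ x y) (\<lambda>r0 r1. ktmk (kt (AM y y) (HM x y)) (HM y x) (ktmk (AM y y) (HM x y) (cmp A y x y l0 r0) r1) l1) (coact A x y r)"
  proof (rule lift_cong, (rule antipode_intros r | assumption)+)
    fix r0 r1 assume r0: "r0 \<in> kcarrier (AM x y)" and r1: "r1 \<in> kcarrier (HM x y)"
    have lr: "cmp A y x y l0 r0 \<in> kcarrier (AM y y)" using l0 r0 by auto
    show "tlift (KZ x y) (\<lambda>a b. ksmult (KZ x y) (cou H x y a)
        (ktmk (kt (AM y y) (HM x y)) (HM y x) (ktmk (AM y y) (HM x y) (cmp A y x y l0 r0) b) l1)) (cop H x y r1) =
      ktmk (kt (AM y y) (HM x y)) (HM y x) (ktmk (AM y y) (HM x y) (cmp A y x y l0 r0) r1) l1"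
      by (rule cop_counit_lift[OF r1 KZm]) (rule antipode_intros lr l1 | assumption)+
  qed
  also have "\<dots> = ktmk (kt (AM y y) (HM x y)) (HM y x) (can_pair y x y l0 r) l1"
    unfolding can_pair_def by (rule lift_comp[symmetric]; (rule antipode_intros l0 l1 r | assumption)+)
  finally show ?thesis .
qed

text \<open>coact_antipode_twist x y (a \<otimes> g) = a_[0] \<otimes> g_(2) \<otimes> a_[1] S(g_(1)), the map that
  can \<otimes> id intertwines with coact_left.\<close>

definition coact_antipode_twist :: "'x \<Rightarrow> 'x \<Rightarrow> ('a \<times> 'h \<Rightarrow> 'k) set \<Rightarrow> (('a \<times> 'h \<Rightarrow> 'k) set \<times> 'h \<Rightarrow> 'k) set" where
  "coact_antipode_twist x y = tlift (KZ x y) (\<lambda>a g. tlift (KZ x y) (\<lambda>a0 a1. antipode_twist x y g a0 a1) (coact A y y a))"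
lemma coact_antipode_twist_kbilin: "kbilin (AM y y) (HM x y) (KZ x y) (\<lambda>a g. tlift (KZ x y) (\<lambda>a0 a1. antipode_twist x y g a0 a1) (coact A y y a))"
  by (rule antipode_intros | assumption)+
lemma coact_antipode_twist_klin: "klin (kt (AM y y) (HM x y)) (KZ x y) (coact_antipode_twist x y)"
  unfolding coact_antipode_twist_def by (rule lift_klin; (rule antipode_intros coact_antipode_twist_kbilin | assumption)+)
lemma coact_antipode_twist_can_pair:
  assumes l: "l \<in> kcarrier (AM y x)" and r: "r \<in> kcarrier (AM x y)"
  shows "coact_antipode_twist x y (can_pair y x y l r) = can_id y x y (HM y x) (coact_left x y l r)"
proof -
  have KZm: "kmodule (KZ x y)" by (rule antipode_intros)+
  have "coact_antipode_twist x y (can_pair y x y l r) = tlift (KZ x y) (\<lambda>r0 r1. coact_antipode_twist x y (ktmk (AM y y) (HM x y) (cmp A y x y l r0) r1)) (coact A x y r)"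
    unfolding can_pair_def by (rule lift_comp; (rule antipode_intros coact_antipode_twist_klin l r | assumption)+)
  also have "\<dots> = tlift (KZ x y) (\<lambda>r0 r1. tlift (KZ x y) (\<lambda>a0 a1. antipode_twist x y r1 a0 a1) (coact A y y (cmp A y x y l r0))) (coact A x y r)"
    unfolding coact_antipode_twist_def by (rule lift_cong, (rule antipode_intros r | assumption)+, rule kt_tlift_tmk; (rule antipode_intros coact_antipode_twist_kbilin l | assumption)+)
  also have "\<dots> = tlift (KZ x y) (\<lambda>r0 r1. tlift (KZ x y) (\<lambda>l0 l1. tlift (KZ x y) (\<lambda>b0 b1. antipode_twist x y r1 (cmp A y x y l0 b0) (cmp H y x y l1 b1)) (coact A x y r0)) (coact A y x l)) (coact A x y r)"
    by (rule lift_cong, (rule antipode_intros r | assumption)+, rule coact_cmp_lift[OF l _ KZm]; (rule antipode_intros | assumption)+)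
  also have "\<dots> = tlift (KZ x y) (\<lambda>l0 l1. tlift (KZ x y) (\<lambda>r0 r1. tlift (KZ x y) (\<lambda>b0 b1. antipode_twist x y r1 (cmp A y x y l0 b0) (cmp H y x y l1 b1)) (coact A x y r0)) (coact A x y r)) (coact A y x l)"
    by (rule tlift_swap; (rule antipode_intros KZm l r | assumption)+)
  also have "\<dots> = tlift (KZ x y) (\<lambda>l0 l1. ktmk (kt (AM y y) (HM x y)) (HM y x) (can_pair y x y l0 r) l1) (coact A y x l)"
    by (rule lift_cong, (rule antipode_intros l | assumption)+) (rule lift_coact_antipode_twist[OF _ _ r])
  also have "\<dots> = can_id y x y (HM y x) (coact_left x y l r)" by (rule can_id_coact_left[OF l r, symmetric])
  finally show ?thesis .
qed

lemma can_id_coact_left_kbilin: "kbilin (AM y x) (AM x y) (KZ x y) (\<lambda>l r. can_id y x y (HM y x) (coact_left x y l r))"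
  by (rule kbilin_comp_klin[OF coact_left_kbilin can_id_klin[OF H_kmodule]])

lemma lift_can_id_coact_left: assumes X: "X \<in> kcarrier (BT y x y)"
  shows "tlift (KZ x y) (\<lambda>l r. can_id y x y (HM y x) (coact_left x y l r)) X = coact_antipode_twist x y (can H A y x y X)"
proof (rule lift_ext[OF X balanced_tensor_btens kt_kmodule[OF kt_kmodule[OF A_kmodule H_kmodule] H_kmodule] lift_klin[OF balanced_tensor_btens kt_kmodule[OF kt_kmodule[OF A_kmodule H_kmodule] H_kmodule] can_id_coact_left_kbilin balanced_comp[OF coact_left_balanced]]
      klin_comp[OF can_klin coact_antipode_twist_klin]])
  fix l r assume l: "l \<in> kcarrier (AM y x)" and r: "r \<in> kcarrier (AM x y)"
  show "tlift (KZ x y) (\<lambda>l r. can_id y x y (HM y x) (coact_left x y l r)) (TB y x y l r) = coact_antipode_twist x y (can H A y x y (TB y x y l r))"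
    using lift_tmk[OF balanced_tensor_btens kt_kmodule[OF kt_kmodule[OF A_kmodule H_kmodule] H_kmodule] can_id_coact_left_kbilin balanced_comp[OF coact_left_balanced] l r]
      coact_antipode_twist_can_pair[OF l r] can_tmk[OF l r] by simp
qed

lemma gam_antipode:
  assumes h: "h \<in> kcarrier (HM x y)"
  shows "tlift (kt (BT y x y) (HM y x)) (\<lambda>h1 h2. ktmk (BT y x y) (HM y x) (gam H A x y h2) (S x y h1)) (cop H x y h) =
         tlift (kt (BT y x y) (HM y x)) (coact_left x y) (gam H A x y h)"
proof (rule can_id_inj[OF H_kmodule])
  show "tlift (kt (BT y x y) (HM y x)) (\<lambda>h1 h2. ktmk (BT y x y) (HM y x) (gam H A x y h2) (S x y h1)) (cop H x y h) \<in> kcarrier (kt (BT y x y) (HM y x))"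
    by (rule lift_closed; (rule antipode_intros h | assumption)+)
  show "tlift (kt (BT y x y) (HM y x)) (coact_left x y) (gam H A x y h) \<in> kcarrier (kt (BT y x y) (HM y x))"
  proof (rule lift_closed[OF gam_closed[OF h] balanced_tensor_btens kt_kmodule[OF btens_kmodule H_kmodule]])
    fix l r assume "l \<in> kcarrier (AM y x)" "r \<in> kcarrier (AM x y)"
    thus "coact_left x y l r \<in> kcarrier (kt (BT y x y) (HM y x))" using coact_left_kbilin unfolding kbilin_def klin_def by blast
  qed
  have "can_id y x y (HM y x) (tlift (kt (BT y x y) (HM y x)) (coact_left x y) (gam H A x y h)) =
     tlift (KZ x y) (\<lambda>l r. can_id y x y (HM y x) (coact_left x y l r)) (gam H A x y h)"
    by (rule lift_comp[OF gam_closed[OF h] balanced_tensor_btens kt_kmodule[OF btens_kmodule H_kmodule] kt_kmodule[OF kt_kmodule[OF A_kmodule H_kmodule] H_kmodule] can_id_klin[OF H_kmodule] coact_left_kbilin coact_left_balanced])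
  also have "\<dots> = coact_antipode_twist x y (ktmk (AM y y) (HM x y) (idm A y) h)"
    unfolding lift_can_id_coact_left[OF gam_closed[OF h]] can_gam[OF h] ..
  also have "\<dots> = tlift (KZ x y) (\<lambda>a0 a1. antipode_twist x y h a0 a1) (coact A y y (idm A y))"
    unfolding coact_antipode_twist_def by (rule kt_tlift_tmk; (rule antipode_intros coact_antipode_twist_kbilin h | assumption)+)
  also have "\<dots> = antipode_twist x y h (idm A y) (idm H y)"
    unfolding coact_id by (rule kt_tlift_tmk; (rule antipode_intros h | assumption)+)
  also have "\<dots> = tlift (KZ x y) (\<lambda>h1 h2. can_id y x y (HM y x) (ktmk (BT y x y) (HM y x) (gam H A x y h2) (S x y h1))) (cop H x y h)"
    by (rule lift_cong, (rule antipode_intros h | assumption)+) (simp add: can_id_tmk gam_closed can_gam antipode_closed)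
  also have "\<dots> = can_id y x y (HM y x) (tlift (kt (BT y x y) (HM y x)) (\<lambda>h1 h2. ktmk (BT y x y) (HM y x) (gam H A x y h2) (S x y h1)) (cop H x y h))"
    by (rule lift_comp[symmetric]; (rule antipode_intros can_id_klin h | assumption)+)
  finally show "can_id y x y (HM y x) (tlift (kt (BT y x y) (HM y x)) (\<lambda>h1 h2. ktmk (BT y x y) (HM y x) (gam H A x y h2) (S x y h1)) (cop H x y h)) =
    can_id y x y (HM y x) (tlift (kt (BT y x y) (HM y x)) (coact_left x y) (gam H A x y h))" by simp
qed

end

theorem proposition3p7:
  fixes H :: "('x, 'k::comm_ring_1, 'h) shcat"
    and A :: "('x, 'k, 'a, 'h) comcat"
    and x y z :: 'x and h h' :: 'h
  assumes "semi_hopf_cat H"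
    and "comodule_cat H A"
    and "galois_ext H A"
    and "h \<in> kcarrier (homs H x y)"
    and "h' \<in> kcarrier (homs H y z)"
  shows
    \<comment> \<open>(a)\<close>
    "(\<forall>b \<in> coinv H A y.
        tlift (btens H A y x y) (\<lambda>l r. btmk H A y x y (cmp A y y x b l) r) (gam H A x y h) =
        tlift (btens H A y x y) (\<lambda>l r. btmk H A y x y l (cmp A x y y r b)) (gam H A x y h))
   \<and> \<comment> \<open>(b)\<close>
    gam H A x z (cmp H x y z h h') =
      tlift (btens H A z x z)
        (\<lambda>l' r'. tlift (btens H A z x z)
           (\<lambda>l r. btmk H A z x z (cmp A z y x l' l) (cmp A x y z r r'))
           (gam H A x y h))
        (gam H A y z h')
   \<and> \<comment> \<open>(c)\<close>
    tlift (kt (btens H A y x y) (homs H x y))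
      (\<lambda>h1 h2. ktmk (btens H A y x y) (homs H x y) (gam H A x y h1) h2) (cop H x y h) =
    tlift (kt (btens H A y x y) (homs H x y))
      (\<lambda>l r. tlift (kt (btens H A y x y) (homs H x y))
         (\<lambda>r0 r1. ktmk (btens H A y x y) (homs H x y) (btmk H A y x y l r0) r1)
         (coact A x y r))
      (gam H A x y h)
   \<and> \<comment> \<open>(d)\<close>
    tlift (homs A y y) (\<lambda>l r. cmp A y x y l r) (gam H A x y h) =
      ksmult (homs A y y) (cou H x y h) (idm A y)
   \<and> \<comment> \<open>(e)\<close>
    (\<forall>S. hopf_antipode H S \<longrightarrow>
      tlift (kt (btens H A y x y) (homs H y x))
        (\<lambda>h1 h2. ktmk (btens H A y x y) (homs H y x) (gam H A x y h2) (S x y h1)) (cop H x y h) =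
      tlift (kt (btens H A y x y) (homs H y x))
        (\<lambda>l r. tlift (kt (btens H A y x y) (homs H y x))
           (\<lambda>l0 l1. ktmk (btens H A y x y) (homs H y x) (btmk H A y x y l0 r) l1)
           (coact A y x l))
        (gam H A x y h))"
proof -
  interpret galois_ext_ctx H A by unfold_locales (fact assms)+
  have hopf: "hopf_galois_ctx H A S" if "hopf_antipode H S" for S
    by unfold_locales (fact assms that)+
  show ?thesis
    using gam_coinv_commute[OF assms(4)] gam_cmp[OF assms(4,5)] gam_comult[OF assms(4)]
      gam_counit[OF assms(4)] hopf_galois_ctx.gam_antipode[OF hopf assms(4)]
    unfolding btens_def btmk_def sandwich_gam_def[abs_def] coact_right_def[abs_def]
      coact_left_def[abs_def]
    by blast
qed

end
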